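(* Assume, in the setting described in the context, that $\sup_{t\in[0,T],x\in\mathbb{R}^d}|c_l(t,x)|<\infty$ for every $l\in\mathcal{L}_m$ and that $\phi$ is bounded and Lipschitz ($|\phi(x)-\phi(y)|\le L\|x-y\|$). Then for any $p\ge1$ and $m_0\in\{m,\dots,d\}$ there exists a small enough $T=T(p,m_0)>0$ such that $$\mathbb{E}\Big[\sup_{x\in\mathbb{R}^d}|\mathcal{H}_\phi(\mathcal{T}_{t,x,i})|^p\Big]<\infty,\qquad t\in[0,T],\ i=0,\dots,m_0,$$ provided that $$\int_0^T\frac{ds}{\rho^{p-1}(s)}<\infty\quad\text{and}\quad\int_0^T\!\!\int_0^\infty\frac{e^{-s\eta(\lambda)}}{\rho^{p-1}(s)}\lambda^{p/2-1}\,d\lambda\,ds<\infty.$$ When $p=1$, both of these conditions are satisfied if $\int_{\lambda_0}^\infty\frac{d\lambda}{\eta(\lambda)\sqrt{\lambda}}<\infty$ for some $\lambda_0>0$.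
   Context: Setting: $d\ge1$, $T>0$, $\eta:(0,\infty)\to[0,\infty)$ a Bernstein function with $\eta(0^+)=0$; a subordinator with Laplace exponent $\eta$ satisfies $\mathbb{E}[e^{-\lambda S_t}]=e^{-t\eta(\lambda)}$. $m\in\{0,\dots,d\}$, $\mathcal{L}_m\subset\mathbb{N}^{m+1}$ finite, $c_l:[0,T]\times\mathbb{R}^d\to\mathbb{R}$ measurable for $l\in\mathcal{L}_m$, $\phi:\mathbb{R}^d\to\mathbb{R}$. Random marked tree: let $\rho$ be a probability density on $\mathbb{R}_+$ with $\rho>0$, and $\bar F(z):=\int_z^\infty\rho(s)ds$. Let $(q_l)_{l\in\mathcal{L}_m}$ be a probability mass function on $\mathcal{L}_m$ with $q_l>0$ for all $l$ and $\sum_l|l|q_l<\infty$, where $|l|=l_0+\dots+l_m$. For $t\in[0,T]$, $x\in\mathbb{R}^d$, $i\in\{0,\dots,d\}$, the tree $\mathcal{T}_{t,x,i}$ is built as follows. The root particle is born at time $t$ at position $x$ with mark $i$. Each particle $k$, born at time $T_{k-}$ at position $X^k_{T_{k-}}$ with mark $\theta_k$, has a lifetime $\tau_k$ with density $\rho$, death time $T_k=T_{k-}+\tau_k$, its own subordinator $S^k$ with Laplace exponent $\eta$ and standard $d$-dimensional Brownian motion $B^k$, and moves as $X^k_s=X^k_{T_{k-}}+B^k_{S^k_{s-T_{k-}}}$ for $s\ge T_{k-}$ (up to $\min(T_k,T)$). If $T_k<T$, an index $I_k=(l_0,\dots,l_m)\in\mathcal{L}_m$ is drawn with probability $q_{l}$,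 and the particle is replaced by $|l|$ offspring born at time $T_k$ at position $X^k_{T_k}$: $l_0$ of them with mark $0$, $l_1$ with mark $1$, ..., $l_m$ with mark $m$. If $T_k\ge T$, the particle is stopped at time $T$ and has no offspring. All lifetimes, indices, subordinators and Brownian motions are mutually independent. $\mathcal{K}^\circ$ denotes the set of particles with $T_k<T$ and $\mathcal{K}^\partial$ those with $T_k\ge T$. Weights: $\mathcal{W}_k=1$ if $\theta_k=0$; if $\theta_k\neq0$, $\mathcal{W}_k=(X^k_{T_k}-X^k_{T_{k-}})_{\theta_k}/S^k_{T_k-T_{k-}}$ for $k\in\mathcal{K}^\circ$ and $\mathcal{W}_k=(X^k_{T}-X^k_{T_{k-}})_{\theta_k}/S^k_{T-T_{k-}}$ for $k\in\mathcal{K}^\partial$, where $(v)_j$ is the $j$-th coordinate. The functional is $$\mathcal{H}_\phi(\mathcal{T}_{t,x,i})=\prod_{k\in\mathcal{K}^\circ}\frac{c_{I_k}(T_k,X^k_{T_k})\mathcal{W}_k}{q_{I_k}\rho(\tau_k)}\prod_{k\in\mathcal{K}^\partial}\frac{\big(\phi(X^k_T)-\phi(X^k_{T_{k-}})\mathbf{1}_{\{\theta_k\neq0\}}\big)\mathcal{W}_k}{\bar F(T-T_{k-})}.$$ *)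

theory Defs
  imports "HOL-Probability.Probability"
begin

text \<open>R^d is modelled as the functions nat => real vanishing at coordinates >= d;
  coordinate j (1-based, j = 1..d) of a vector v is v (j - 1).\<close>

definition Rd :: "nat \<Rightarrow> (nat \<Rightarrow> real) set" where
  "Rd d = {x. \<forall>j\<ge>d. x j = 0}"

definition eucl_norm :: "nat \<Rightarrow> (nat \<Rightarrow> real) \<Rightarrow> real" where
  "eucl_norm d v = sqrt (\<Sum>j<d. (v j)\<^sup>2)"

definition bernstein :: "(real \<Rightarrow> real) \<Rightarrow> bool" where
  "bernstein \<eta> \<longleftrightarrow> (\<forall>x>0. \<eta> x \<ge> 0)
     \<and> (\<forall>n. \<forall>x>0. (deriv ^^ n) \<eta> differentiable (at x))
     \<and> (\<forall>n\<ge>1. \<forall>x>0. (-1) ^ (n + 1) * (deriv ^^ n) \<eta> x \<ge> 0)"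

definition subordinator :: "'w measure \<Rightarrow> (real \<Rightarrow> real) \<Rightarrow> ('w \<Rightarrow> real \<Rightarrow> real) \<Rightarrow> bool" where
  "subordinator M \<eta> S \<longleftrightarrow>
     (\<forall>t\<ge>0. (\<lambda>\<omega>. S \<omega> t) \<in> borel_measurable M)
   \<and> (\<forall>\<omega>\<in>space M. S \<omega> 0 = 0 \<and> mono_on {0..} (S \<omega>)
        \<and> (\<forall>t\<ge>0. continuous (at_right t) (S \<omega>)))
   \<and> (\<forall>ts::real list. sorted ts \<and> ts \<noteq> [] \<and> hd ts \<ge> 0 \<longrightarrow>
        prob_space.indep_vars M (\<lambda>_. borel) (\<lambda>n \<omega>. S \<omega> (ts ! Suc n) - S \<omega> (ts ! n)) {..<length ts - 1})
   \<and> (\<forall>s t. 0 \<le> s \<and> s \<le> t \<longrightarrow>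
        distr M borel (\<lambda>\<omega>. S \<omega> t - S \<omega> s) = distr M borel (\<lambda>\<omega>. S \<omega> (t - s)))
   \<and> (\<forall>t\<ge>0. \<forall>lam>0. (\<integral>\<omega>. exp (- lam * S \<omega> t) \<partial>M) = exp (- t * \<eta> lam))"

definition std_BM :: "'w measure \<Rightarrow> nat \<Rightarrow> ('w \<Rightarrow> real \<Rightarrow> nat \<Rightarrow> real) \<Rightarrow> bool" where
  "std_BM M d B \<longleftrightarrow>
     (\<forall>\<omega>\<in>space M. B \<omega> 0 = (\<lambda>_. 0) \<and> (\<forall>t j. d \<le> j \<longrightarrow> B \<omega> t j = 0)
        \<and> (\<forall>j. continuous_on {0..} (\<lambda>t. B \<omega> t j)))
   \<and> (\<forall>t\<ge>0. \<forall>j. (\<lambda>\<omega>. B \<omega> t j) \<in> borel_measurable M)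
   \<and> (\<forall>ts::real list. sorted ts \<and> ts \<noteq> [] \<and> hd ts \<ge> 0 \<longrightarrow>
        prob_space.indep_vars M (\<lambda>_. borel)
          (\<lambda>(n, j) \<omega>. B \<omega> (ts ! Suc n) j - B \<omega> (ts ! n) j) ({..<length ts - 1} \<times> {..<d}))
   \<and> (\<forall>s t j. 0 \<le> s \<and> s < t \<and> j < d \<longrightarrow>
        distributed M lborel (\<lambda>\<omega>. B \<omega> t j - B \<omega> s j) (\<lambda>y. ennreal (normal_density 0 (sqrt (t - s)) y)))"

text \<open>Mark of the j-th offspring (0-based) when the index is l = [l_0,...,l_m]:
  the first l_0 offspring get mark 0, the next l_1 mark 1, etc.\<close>
definition mark_of :: "nat list \<Rightarrow> nat \<Rightarrow> nat" where
  "mark_of l j = (LEAST r. j < sum_list (take (Suc r) l))"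

definition Fbar :: "(real \<Rightarrow> real) \<Rightarrow> real \<Rightarrow> real" where
  "Fbar \<rho> z = enn2real (\<integral>\<^sup>+ s\<in>{z..}. ennreal (\<rho> s) \<partial>lborel)"

text \<open>Particles are labelled by Ulam-Harris labels (nat list); the children of k are k @ [j].
  The state of a label is (exists, birth time, birth position, mark).  Inputs (one sample path):
  lifetimes tau, indices idx, subordinator paths Sp, Brownian paths Bp.\<close>
fun tree_state :: "real \<Rightarrow> (nat list \<Rightarrow> real) \<Rightarrow> (nat list \<Rightarrow> nat list) \<Rightarrow> (nat list \<Rightarrow> real \<Rightarrow> real)
    \<Rightarrow> (nat list \<Rightarrow> real \<Rightarrow> nat \<Rightarrow> real) \<Rightarrow> nat list \<Rightarrow> bool \<times> real \<times> (nat \<Rightarrow> real) \<times> nat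
    \<Rightarrow> nat list \<Rightarrow> bool \<times> real \<times> (nat \<Rightarrow> real) \<times> nat" where
  "tree_state T tau idx Sp Bp pre st [] = st"
| "tree_state T tau idx Sp Bp pre (al, b, pos, th) (j # js) =
     tree_state T tau idx Sp Bp (pre @ [j])
       (al \<and> b + tau pre < T \<and> j < sum_list (idx pre),
        b + tau pre,
        (\<lambda>c. pos c + Bp pre (Sp pre (tau pre)) c),
        mark_of (idx pre) j) js"

definition node_state where
  "node_state T t x i tau idx Sp Bp k = tree_state T tau idx Sp Bp [] (True, t, x, i) k"

definition tree_nodes :: "real \<Rightarrow> real \<Rightarrow> (nat \<Rightarrow> real) \<Rightarrow> nat \<Rightarrow> (nat list \<Rightarrow> real) \<Rightarrow> (nat list \<Rightarrow> nat list)
    \<Rightarrow> (nat list \<Rightarrow> real \<Rightarrow> real) \<Rightarrow> (nat list \<Rightarrow> real \<Rightarrow> nat \<Rightarrow> real) \<Rightarrow> nat list set" where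
  "tree_nodes T t x i tau idx Sp Bp = {k. fst (node_state T t x i tau idx Sp Bp k)}"

definition Hfun :: "(nat list \<Rightarrow> real \<Rightarrow> (nat \<Rightarrow> real) \<Rightarrow> real) \<Rightarrow> (nat list \<Rightarrow> real) \<Rightarrow> (real \<Rightarrow> real)
    \<Rightarrow> ((nat \<Rightarrow> real) \<Rightarrow> real) \<Rightarrow> real \<Rightarrow> real \<Rightarrow> (nat \<Rightarrow> real) \<Rightarrow> nat
    \<Rightarrow> (nat list \<Rightarrow> real) \<Rightarrow> (nat list \<Rightarrow> nat list) \<Rightarrow> (nat list \<Rightarrow> real \<Rightarrow> real)
    \<Rightarrow> (nat list \<Rightarrow> real \<Rightarrow> nat \<Rightarrow> real) \<Rightarrow> real" where
  "Hfun c q \<rho> \<phi> T t x i tau idx Sp Bp =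
    (let st = node_state T t x i tau idx Sp Bp;
         b = (\<lambda>k. fst (snd (st k)));
         pos = (\<lambda>k. fst (snd (snd (st k))));
         th = (\<lambda>k. snd (snd (snd (st k))));
         nodes = tree_nodes T t x i tau idx Sp Bp;
         Kin = {k\<in>nodes. b k + tau k < T};
         Kbd = {k\<in>nodes. T \<le> b k + tau k};
         incr = (\<lambda>k u. Bp k (Sp k u));
         W = (\<lambda>k u. if th k = 0 then 1 else incr k u (th k - 1) / Sp k u)
     in (\<Prod>k\<in>Kin. c (idx k) (b k + tau k) (\<lambda>j. pos k j + incr k (tau k) j) * W k (tau k)
                     / (q (idx k) * \<rho> (tau k)))
      * (\<Prod>k\<in>Kbd. (\<phi> (\<lambda>j. pos k j + incr k (T - b k) j) - \<phi> (pos k) * (if th k \<noteq> 0 then 1 else 0))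
                     * W k (T - b k) / Fbar \<rho> (T - b k)))"

definition cond1 :: "(real \<Rightarrow> real) \<Rightarrow> real \<Rightarrow> real \<Rightarrow> bool" where
  "cond1 \<rho> p T \<longleftrightarrow> (\<integral>\<^sup>+ s\<in>{0..T}. ennreal (1 / \<rho> s powr (p - 1)) \<partial>lborel) < \<infinity>"

definition cond2 :: "(real \<Rightarrow> real) \<Rightarrow> (real \<Rightarrow> real) \<Rightarrow> real \<Rightarrow> real \<Rightarrow> bool" where
  "cond2 \<rho> \<eta> p T \<longleftrightarrow>
     (\<integral>\<^sup>+ s\<in>{0..T}. (\<integral>\<^sup>+ lam\<in>{0<..}. ennreal (exp (- s * \<eta> lam) / \<rho> s powr (p - 1) * lam powr (p / 2 - 1)) \<partial>lborel) \<partial>lborel) < \<infinity>"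

end

theory Submission
  imports Defs
begin

text \<open>
  Each factor of \<open>H\<^sub>\<phi>\<close> is bounded, uniformly in the position, by a quantity that depends
  only on the particle's own lifetime, subordinator and Brownian motion: \<open>c\<close> is bounded, \<open>\<phi>\<close>
  is bounded and Lipschitz, and \<open>B(S(u))/S(u)\<close> has the scaling of \<open>S(u)\<^sup>-\<^sup>1\<^sup>/\<^sup>2\<close>.
  Multiplying these bounds (each enlarged to at least \<open>2\<close>) over the first \<open>n\<close> generations gives
  a majorant \<open>\<psi>\<^sub>n\<close> of \<open>\<bar>H\<^sub>\<phi>\<bar>\<^sup>p\<close> that no longer depends on the starting point. Freezing the
  lifetime and the subordinator and using the independence of the subtrees,
  \<open>E \<psi>\<^sub>n\<^sub>+\<^sub>1 \<le> 2 + 2A + 2V\<^sup>N (I\<^sub>0 + I)\<close> whenever \<open>E \<psi>\<^sub>n \<le> V\<close>, where \<open>N\<close> bounds the number of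
  offspring and \<open>I\<^sub>0\<close>, \<open>I\<close> are the integrals of \<open>\<rho>\<close> and of the two conditions over \<open>[0, T]\<close>;
  negative moments of \<open>S(u)\<close> enter through its Laplace exponent. For small \<open>T\<close> these
  integrals are small, so \<open>E \<psi>\<^sub>n \<le> V\<close> for all \<open>n\<close>, and monotone convergence bounds
  \<open>E sup\<^sub>x \<bar>H\<^sub>\<phi>\<bar>\<^sup>p\<close>; since every factor is at least \<open>2\<close>, the tree is finite almost surely.
  For \<open>p = 1\<close> both conditions follow from Fubini's theorem.
\<close>

section \<open>Freezing independent randomness and elementary estimates\<close>

lemma distr_diag_eq_pair_restr_to_subalg:
  assumes P: "prob_space M" and S1: "subalgebra M N1" and S2: "subalgebra M N2"
    and ind: "\<And>A B. A \<in> sets N1 \<Longrightarrow> B \<in> sets N2 \<Longrightarrow> emeasure M (A \<inter> B) = emeasure M A * emeasure M B"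
  defines "R1 \<equiv> restr_to_subalg M N1" and "R2 \<equiv> restr_to_subalg M N2"
  shows "(\<lambda>\<omega>. (\<omega>, \<omega>)) \<in> measurable M (R1 \<Otimes>\<^sub>M R2)" and "distr M (R1 \<Otimes>\<^sub>M R2) (\<lambda>\<omega>. (\<omega>, \<omega>)) = R1 \<Otimes>\<^sub>M R2"
proof -
  interpret R1: prob_space R1 unfolding R1_def by (rule prob_space_restr_to_subalg[OF S1 P])
  interpret R2: prob_space R2 unfolding R2_def by (rule prob_space_restr_to_subalg[OF S2 P])
  have sp1: "space R1 = space M" "sets R1 = sets N1" and sp2: "space R2 = space M" "sets R2 = sets N2"
    using S1 S2 unfolding R1_def R2_def by (auto simp: space_restr_to_subalg sets_restr_to_subalg subalgebra_def)
  have em1: "emeasure R1 A = emeasure M A" if "A \<in> sets N1" for A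
    using S1 that unfolding R1_def by (simp add: emeasure_restr_to_subalg)
  have em2: "emeasure R2 A = emeasure M A" if "A \<in> sets N2" for A
    using S2 that unfolding R2_def by (simp add: emeasure_restr_to_subalg)
  have sub1: "sets N1 \<subseteq> sets M" and sub2: "sets N2 \<subseteq> sets M"
    using S1 S2 by (auto simp: subalgebra_def)
  show diag: "(\<lambda>\<omega>. (\<omega>, \<omega>)) \<in> measurable M (R1 \<Otimes>\<^sub>M R2)"
  proof (rule measurable_Pair)
    show "(\<lambda>x. x) \<in> measurable M R1" using sub1 sp1 by (auto simp: measurable_def)
    show "(\<lambda>x. x) \<in> measurable M R2" using sub2 sp2 by (auto simp: measurable_def)
  qed
  show "distr M (R1 \<Otimes>\<^sub>M R2) (\<lambda>\<omega>. (\<omega>, \<omega>)) = R1 \<Otimes>\<^sub>M R2"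
  proof (rule sym, rule pair_measure_eqI)
    show "sigma_finite_measure R1" "sigma_finite_measure R2" ..
    show "sets (R1 \<Otimes>\<^sub>M R2) = sets (distr M (R1 \<Otimes>\<^sub>M R2) (\<lambda>\<omega>. (\<omega>, \<omega>)))" by simp
    fix A B assume A: "A \<in> sets R1" and B: "B \<in> sets R2"
    have "A \<subseteq> space M" "B \<subseteq> space M" using A B sets.sets_into_space sp1 sp2 by blast+
    then have "(\<lambda>\<omega>. (\<omega>, \<omega>)) -` (A \<times> B) \<inter> space M = A \<inter> B" by auto
    moreover have "A \<times> B \<in> sets (R1 \<Otimes>\<^sub>M R2)" using A B by simp
    ultimately show "emeasure R1 A * emeasure R2 B = emeasure (distr M (R1 \<Otimes>\<^sub>M R2) (\<lambda>\<omega>. (\<omega>, \<omega>))) (A \<times> B)"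
      using A B sp1 sp2 by (simp add: emeasure_distr[OF diag] em1 em2 ind)
  qed
qed

lemma nn_integral_indep_freeze:
  assumes P: "prob_space M"
    and S1: "subalgebra M N1" and S2: "subalgebra M N2"
    and ind: "\<And>A B. A \<in> sets N1 \<Longrightarrow> B \<in> sets N2 \<Longrightarrow> emeasure M (A \<inter> B) = emeasure M A * emeasure M B"
    and h[measurable]: "h \<in> borel_measurable N1" and Z[measurable]: "Z \<in> measurable N1 K"
    and G[measurable]: "(\<lambda>(z,\<omega>). G z \<omega>) \<in> borel_measurable (K \<Otimes>\<^sub>M N2)"
  shows "(\<integral>\<^sup>+\<omega>. h \<omega> * G (Z \<omega>) \<omega> \<partial>M) = (\<integral>\<^sup>+\<omega>. h \<omega> * (\<integral>\<^sup>+\<omega>'. G (Z \<omega>) \<omega>' \<partial>M) \<partial>M)"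
proof -
  interpret prob_space M by fact
  define R1 where "R1 = restr_to_subalg M N1"
  define R2 where "R2 = restr_to_subalg M N2"
  interpret R1: prob_space R1 unfolding R1_def by (rule prob_space_restr_to_subalg[OF S1 P])
  interpret R2: prob_space R2 unfolding R2_def by (rule prob_space_restr_to_subalg[OF S2 P])
  interpret R12: pair_sigma_finite R1 R2 ..
  have sp1: "space R1 = space M" "sets R1 = sets N1" and sp2: "space R2 = space M" "sets R2 = sets N2"
    using S1 S2 unfolding R1_def R2_def by (auto simp: space_restr_to_subalg sets_restr_to_subalg subalgebra_def)
  have spN: "space N1 = space M" "space N2 = space M"
    using S1 S2 by (auto simp: subalgebra_def)
  have diag: "(\<lambda>\<omega>. (\<omega>, \<omega>)) \<in> measurable M (R1 \<Otimes>\<^sub>M R2)"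
    unfolding R1_def R2_def by (rule distr_diag_eq_pair_restr_to_subalg(1)[OF P S1 S2 ind])
  have eq: "distr M (R1 \<Otimes>\<^sub>M R2) (\<lambda>\<omega>. (\<omega>, \<omega>)) = R1 \<Otimes>\<^sub>M R2"
    unfolding R1_def R2_def by (rule distr_diag_eq_pair_restr_to_subalg(2)[OF P S1 S2 ind])
  have hR: "h \<in> borel_measurable R1" using h sp1 by (simp add: measurable_def spN)
  have ZR: "Z \<in> measurable R1 K" using Z sp1 by (simp add: measurable_def spN)
  have GR: "(\<lambda>(z,\<omega>). G z \<omega>) \<in> borel_measurable (K \<Otimes>\<^sub>M R2)"
  proof -
    have "K \<Otimes>\<^sub>M N2 \<rightarrow>\<^sub>M borel = K \<Otimes>\<^sub>M R2 \<rightarrow>\<^sub>M (borel :: ennreal measure)"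
      by (rule measurable_cong_sets) (auto intro!: sets_pair_measure_cong simp: sp2)
    then show ?thesis using G by simp
  qed
  have Gsec: "(\<lambda>b. G (Z a) b) \<in> borel_measurable N2" if a: "a \<in> space M" for a
  proof -
    have "Z a \<in> space K" using measurable_space[OF Z] a spN by auto
    from measurable_Pair2[OF G this] show ?thesis by simp
  qed
  have Gsec2: "(\<lambda>b. G (Z a) b) \<in> borel_measurable R2" if a: "a \<in> space M" for a
    using Gsec[OF a] sp2 spN by (simp add: measurable_def)
  have int2: "(\<integral>\<^sup>+b. G (Z a) b \<partial>R2) = (\<integral>\<^sup>+b. G (Z a) b \<partial>M)" if a: "a \<in> space M" for a
    unfolding R2_def using Gsec[OF a] by (rule nn_integral_subalgebra2[OF S2])
  have F: "(\<lambda>(a, b). h a * G (Z a) b) \<in> borel_measurable (R1 \<Otimes>\<^sub>M R2)"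
  proof -
    have "(\<lambda>x. G (Z (fst x)) (snd x)) \<in> borel_measurable (R1 \<Otimes>\<^sub>M R2)"
      using measurable_compose[OF measurable_Pair[OF measurable_compose[OF measurable_fst ZR] measurable_snd] GR] by simp
    then show ?thesis using hR by (simp add: split_beta')
  qed
  have "(\<integral>\<^sup>+\<omega>. h \<omega> * G (Z \<omega>) \<omega> \<partial>M) = (\<integral>\<^sup>+x. (\<lambda>(a, b). h a * G (Z a) b) x \<partial>distr M (R1 \<Otimes>\<^sub>M R2) (\<lambda>\<omega>. (\<omega>, \<omega>)))"
    using nn_integral_distr[OF diag, of "\<lambda>(a, b). h a * G (Z a) b"] F by (simp only: measurable_distr_eq1 case_prod_conv)
  also have "\<dots> = (\<integral>\<^sup>+x. (\<lambda>(a, b). h a * G (Z a) b) x \<partial>(R1 \<Otimes>\<^sub>M R2))" by (simp add: eq)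
  also have "\<dots> = (\<integral>\<^sup>+a. \<integral>\<^sup>+b. h a * G (Z a) b \<partial>R2 \<partial>R1)"
    by (subst R2.nn_integral_fst[OF F, symmetric]) simp
  also have "\<dots> = (\<integral>\<^sup>+a. h a * (\<integral>\<^sup>+b. G (Z a) b \<partial>R2) \<partial>R1)"
    using Gsec2 sp1 by (intro nn_integral_cong nn_integral_cmult) auto
  also have "\<dots> = (\<integral>\<^sup>+a. h a * (\<integral>\<^sup>+b. G (Z a) b \<partial>M) \<partial>R1)"
    using int2 sp1 by (intro nn_integral_cong) auto
  also have "\<dots> = (\<integral>\<^sup>+a. h a * (\<integral>\<^sup>+b. G (Z a) b \<partial>M) \<partial>M)"
  proof -
    have m: "(\<lambda>a. \<integral>\<^sup>+b. G (Z a) b \<partial>R2) \<in> borel_measurable R1"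
      using R2.borel_measurable_nn_integral_fst[OF measurable_compose[OF measurable_Pair[OF measurable_compose[OF measurable_fst ZR] measurable_snd] GR]]
      by simp
    have "(\<lambda>a. h a * (\<integral>\<^sup>+b. G (Z a) b \<partial>M)) \<in> borel_measurable R1"
    proof -
      have "(\<lambda>a. h a * (\<integral>\<^sup>+b. G (Z a) b \<partial>R2)) \<in> borel_measurable R1" using m hR by simp
      moreover have "\<And>a. a \<in> space R1 \<Longrightarrow> h a * (\<integral>\<^sup>+b. G (Z a) b \<partial>R2) = h a * (\<integral>\<^sup>+b. G (Z a) b \<partial>M)"
        using int2 sp1 by simp
      ultimately show ?thesis by (rule measurable_cong[THEN iffD1, rotated]) simp
    qed
    then have "(\<lambda>a. h a * (\<integral>\<^sup>+b. G (Z a) b \<partial>M)) \<in> borel_measurable N1"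
      using sp1 spN unfolding measurable_def by simp
    then show ?thesis unfolding R1_def by (rule nn_integral_subalgebra2[OF S1])
  qed
  finally show ?thesis .
qed

lemma ceiling_dyadic_approx:
  fixes v :: real
  shows "v \<le> real_of_int \<lceil>v * 2^n\<rceil> / 2^n" and "(\<lambda>n. real_of_int \<lceil>v * 2^n\<rceil> / 2^n) \<longlonglongrightarrow> v"
proof -
  define w where "w n = real_of_int \<lceil>v * 2^n\<rceil> / 2^n" for n :: nat
  have wge: "v \<le> w n" for n
  proof -
    have "v * 2^n \<le> real_of_int \<lceil>v * 2^n\<rceil>" by (rule le_of_int_ceiling)
    then show ?thesis unfolding w_def by (simp add: field_simps)
  qed
  then show "v \<le> real_of_int \<lceil>v * 2^n\<rceil> / 2^n" unfolding w_def .
  have wle: "w n \<le> v + 1 / 2^n" for n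
  proof -
    have "real_of_int \<lceil>v * 2^n\<rceil> \<le> v * 2^n + 1" by linarith
    then show ?thesis unfolding w_def by (simp add: field_simps)
  qed
  have "(\<lambda>n. v + 1 / (2::real)^n) \<longlonglongrightarrow> v + 0"
    by (intro tendsto_add tendsto_const LIMSEQ_divide_realpow_zero) auto
  then have "w \<longlonglongrightarrow> v"
    using wge wle by (intro real_tendsto_sandwich[of "\<lambda>_. v" w sequentially "\<lambda>n. v + 1/2^n"]) auto
  then show "(\<lambda>n. real_of_int \<lceil>v * 2^n\<rceil> / 2^n) \<longlonglongrightarrow> v" unfolding w_def .
qed

lemma measurable_right_continuous_process:
  fixes f :: "real \<Rightarrow> 'a \<Rightarrow> real"
  assumes m: "\<And>u. 0 \<le> u \<Longrightarrow> (\<lambda>\<omega>. f u \<omega>) \<in> borel_measurable N"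
    and c: "\<And>\<omega> u. \<omega> \<in> space N \<Longrightarrow> 0 \<le> u \<Longrightarrow> continuous (at_right u) (\<lambda>v. f v \<omega>)"
  shows "(\<lambda>x. f (max 0 (fst x)) (snd x)) \<in> borel_measurable ((borel :: real measure) \<Otimes>\<^sub>M N)"
proof (rule borel_measurable_LIMSEQ_real)
  define g where "g n (x :: real \<times> 'a) = f (max 0 (real_of_int \<lceil>max 0 (fst x) * (2::real)^n\<rceil> / 2^n)) (snd x)" for n x
  show "g n \<in> borel_measurable (borel \<Otimes>\<^sub>M N)" for n
  proof -
    have "(\<lambda>x. (\<lambda>i::int. f (max 0 (real_of_int i / 2^n)) (snd x)) (\<lceil>max 0 (fst x) * (2::real)^n\<rceil>)) \<in> borel_measurable (borel \<Otimes>\<^sub>M N)"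
    proof (rule measurable_compose_countable[where g="\<lambda>x. \<lceil>max 0 (fst x) * (2::real)^n\<rceil>"])
      fix i :: int
      show "(\<lambda>x. f (max 0 (real_of_int i / 2^n)) (snd x)) \<in> borel_measurable (borel \<Otimes>\<^sub>M N)"
        by (rule measurable_compose[OF measurable_snd m]) simp
    next
      show "(\<lambda>x. \<lceil>max 0 (fst x) * (2::real) ^ n\<rceil>) \<in> measurable (borel \<Otimes>\<^sub>M N) (count_space UNIV)"
        by (rule measurable_compose[OF _ measurable_real_ceiling]) simp
    qed
    then show ?thesis unfolding g_def by simp
  qed
  fix x :: "real \<times> 'a" assume x: "x \<in> space (borel \<Otimes>\<^sub>M N)"
  then have xs: "snd x \<in> space N" by (auto simp: space_pair_measure)
  define v where "v = max 0 (fst x)"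
  have v0: "0 \<le> v" unfolding v_def by simp
  define w where "w n = real_of_int \<lceil>v * 2^n\<rceil> / 2^n" for n :: nat
  have wge: "v \<le> w n" for n unfolding w_def by (rule ceiling_dyadic_approx)
  have wlim: "w \<longlonglongrightarrow> v" unfolding w_def by (rule ceiling_dyadic_approx)
  have cont: "continuous (at v within {v..}) (\<lambda>u. f u (snd x))"
    using c[OF xs v0] by (simp add: at_within_Ici_at_right)
  from cont have H: "\<And>y. (\<forall>n. y n \<in> {v..}) \<Longrightarrow> y \<longlonglongrightarrow> v \<Longrightarrow> ((\<lambda>u. f u (snd x)) \<circ> y) \<longlonglongrightarrow> f v (snd x)"
    unfolding continuous_within_sequentially by blast
  have L: "((\<lambda>u. f u (snd x)) \<circ> w) \<longlonglongrightarrow> f v (snd x)"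
    by (rule H) (use wge wlim in auto)
  have gw: "g n x = ((\<lambda>u. f u (snd x)) \<circ> w) n" for n
  proof -
    have "max 0 (w n) = w n" using wge[of n] v0 by simp
    then show ?thesis unfolding g_def w_def v_def comp_def by simp
  qed
  show "(\<lambda>n. g n x) \<longlonglongrightarrow> f (max 0 (fst x)) (snd x)"
    unfolding gw using L unfolding v_def .
qed

definition neg_moment_const :: "real \<Rightarrow> real" where
  "neg_moment_const a = 2 * exp 1 * max (2 powr (a - 1)) 1"

lemma max_powr_mult_min_powr: "max (2 powr (a - 1)) 1 * min (2 powr (1 - a)) 1 = (1::real)"
proof (cases "a \<le> 1")
  case True
  have "2 powr (a - 1) \<le> 2 powr 0" "2 powr 0 \<le> 2 powr (1 - a)" using True by (intro powr_mono; simp)+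
  then have "2 powr (a - 1) \<le> 1" "1 \<le> 2 powr (1 - a)" by auto
  then show ?thesis by (simp add: max_def min_def)
next
  case False
  have "2 powr 0 \<le> 2 powr (a - 1)" "2 powr (1 - a) \<le> 2 powr 0" using False by (intro powr_mono; simp)+
  then have "1 \<le> 2 powr (a - 1)" "2 powr (1 - a) \<le> 1" by auto
  moreover have "2 powr (a - 1) * 2 powr (1 - a) = 1" by (simp add: powr_add[symmetric])
  ultimately show ?thesis by (simp add: max_def min_def)
qed

lemma powr_lower_bound_on_interval:
  fixes z a l :: real
  assumes z: "0 < z" and l: "1/(2*z) \<le> l" "l \<le> 1/z"
  shows "(1/z) powr (a - 1) * min (2 powr (1 - a)) 1 \<le> l powr (a - 1)"
proof (cases "0 \<le> a - 1")
  case True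
  have "(1/(2*z)) powr (a - 1) \<le> l powr (a - 1)" using l z True by (intro powr_mono2) auto
  moreover have "(1/(2*z)) powr (a - 1) = (1/z) powr (a - 1) * 2 powr (1 - a)"
    using z by (simp add: powr_divide powr_mult powr_minus_divide[symmetric] field_simps powr_diff powr_add[symmetric])
  moreover have "(1/z) powr (a - 1) * min (2 powr (1 - a)) 1 \<le> (1/z) powr (a - 1) * 2 powr (1 - a)"
    by (intro mult_left_mono) auto
  ultimately show ?thesis by linarith
next
  case False
  have "0 < 1/(2*z)" using z by simp
  then have lpos: "0 < l" using l by linarith
  have "(1/z) powr (a - 1) \<le> l powr (a - 1)" using l lpos False by (intro powr_mono2') auto
  moreover have "(1/z) powr (a - 1) * min (2 powr (1 - a)) 1 \<le> (1/z) powr (a - 1)"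
    by (simp add: mult_left_le)
  ultimately show ?thesis by linarith
qed

text \<open>Negative moments via the Laplace transform: the integrand is bounded below by a constant
  multiple of \<open>z powr (1 - a)\<close> on \<open>[1/(2z), 1/z]\<close>.\<close>
lemma powr_neg_le_laplace_integral:
  fixes z a :: real
  assumes z: "0 < z" and a: "0 < a"
  shows "ennreal (z powr (-a)) \<le> ennreal (neg_moment_const a) *
           (\<integral>\<^sup>+ l\<in>{0<..}. ennreal (l powr (a - 1) * exp (- l * z)) \<partial>lborel)"
proof -
  define m where "m = (1/z) powr (a - 1) * min (2 powr (1 - a)) 1"
  have m0: "0 < m" unfolding m_def using z by simp
  have pt: "m * exp (-1) * indicator {1/(2*z) .. 1/z} l \<le> l powr (a - 1) * exp (- l * z) * indicator {0<..} l" for l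
  proof (cases "l \<in> {1/(2*z) .. 1/z}")
    case True
    then have l1: "1/(2*z) \<le> l" and l2: "l \<le> 1/z" by auto
    have "0 < 1/(2*z)" using z by simp
    then have lpos: "0 < l" using l1 by linarith
    have "exp (-1) \<le> exp (- l * z)" using l2 z by (simp add: field_simps)
    then have "m * exp (-1) \<le> l powr (a - 1) * exp (- l * z)"
      using powr_lower_bound_on_interval[OF z l1 l2, of a] m0 unfolding m_def by (intro mult_mono) auto
    then show ?thesis using True lpos by simp
  qed (auto simp: indicator_def)
  have em: "emeasure lborel {1/(2*z) .. 1/z} = ennreal (1/(2*z))"
    using z by (subst emeasure_lborel_Icc) (auto simp: field_simps)
  have "ennreal (m * exp (-1) * (1/(2*z))) = ennreal (m * exp (-1)) * ennreal (1/(2*z))"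
    by (intro ennreal_mult) (use m0 z in auto)
  also have "\<dots> = (\<integral>\<^sup>+ l. ennreal (m * exp (-1)) * indicator {1/(2*z) .. 1/z} l \<partial>lborel)"
    by (subst nn_integral_cmult_indicator) (auto simp: em)
  also have "\<dots> \<le> (\<integral>\<^sup>+ l\<in>{0<..}. ennreal (l powr (a - 1) * exp (- l * z)) \<partial>lborel)"
  proof (rule nn_integral_mono)
    fix l
    have "ennreal (m * exp (-1)) * indicator {1/(2*z) .. 1/z} l = ennreal (m * exp (-1) * indicator {1/(2*z) .. 1/z} l)"
      by (simp add: indicator_def)
    also have "\<dots> \<le> ennreal (l powr (a - 1) * exp (- l * z) * indicator {0<..} l)"
      using pt by (rule ennreal_leI)
    also have "\<dots> = ennreal (l powr (a - 1) * exp (- l * z)) * indicator {0<..} l"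
      by (simp add: indicator_def)
    finally show "ennreal (m * exp (-1)) * indicator {1/(2*z) .. 1/z} l \<le> ennreal (l powr (a - 1) * exp (- l * z)) * indicator {0<..} l" .
  qed
  finally have I: "ennreal (m * exp (-1) * (1/(2*z))) \<le> (\<integral>\<^sup>+ l\<in>{0<..}. ennreal (l powr (a - 1) * exp (- l * z)) \<partial>lborel)" .
  have pz: "(1/z) powr (a - 1) * (1 / z) = z powr (-a)"
    using z by (simp add: powr_divide powr_diff powr_minus_divide field_simps)
  have "neg_moment_const a * (m * exp (-1) * (1/(2*z))) =
      (max (2 powr (a - 1)) 1 * min (2 powr (1 - a)) 1) * ((1/z) powr (a - 1) * (1/z)) * (exp 1 * exp (-1))"
    unfolding m_def neg_moment_const_def by (simp add: mult_ac)
  also have "\<dots> = z powr (-a)"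
    by (simp only: max_powr_mult_min_powr pz exp_minus_inverse mult_1_left mult_1_right)
  finally have "ennreal (z powr (-a)) = ennreal (neg_moment_const a * (m * exp (-1) * (1/(2*z))))"
    by simp
  also have "\<dots> = ennreal (neg_moment_const a) * ennreal (m * exp (-1) * (1/(2*z)))"
    by (intro ennreal_mult) (use m0 z in \<open>auto simp: neg_moment_const_def\<close>)
  also have "\<dots> \<le> ennreal (neg_moment_const a) * (\<integral>\<^sup>+ l\<in>{0<..}. ennreal (l powr (a - 1) * exp (- l * z)) \<partial>lborel)"
    by (rule mult_left_mono[OF I]) simp
  finally show ?thesis .
qed

text \<open>The bound in \<open>normal_abs_moment_le\<close> uses the even moments \<open>0\<close> and \<open>2k\<close>, with \<open>2k\<close> the least
  even integer above \<open>q\<close>.\<close>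
definition gauss_moment_const :: "real \<Rightarrow> real" where
  "gauss_moment_const q = 1 + fact (2 * nat \<lceil>q/2\<rceil>) / (2 ^ nat \<lceil>q/2\<rceil> * fact (nat \<lceil>q/2\<rceil>))"

lemma gauss_moment_const_pos: "0 < gauss_moment_const q"
  unfolding gauss_moment_const_def by (simp add: add_pos_nonneg)

lemma abs_powr_le_even_power:
  fixes y \<sigma> q :: real
  assumes s: "0 < \<sigma>" and q: "0 < q" and kq: "q \<le> real (2 * k)"
  shows "\<bar>y\<bar> powr q \<le> \<sigma> powr q * (y ^ (2 * k) / \<sigma> ^ (2 * k) + 1)"
proof (cases "\<bar>y\<bar> \<le> \<sigma>")
  case True
  then have "\<bar>y\<bar> powr q \<le> \<sigma> powr q" using q by (intro powr_mono2) auto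
  moreover have "\<sigma> powr q \<le> \<sigma> powr q * (y ^ (2 * k) / \<sigma> ^ (2 * k) + 1)"
    using s by (simp add: zero_le_even_power)
  ultimately show ?thesis by linarith
next
  case False
  then have y: "\<sigma> < \<bar>y\<bar>" by simp
  have r1: "1 \<le> \<bar>y\<bar> / \<sigma>" using y s by simp
  have "\<bar>y\<bar> powr q = \<sigma> powr q * (\<bar>y\<bar> / \<sigma>) powr q" using s by (simp add: powr_divide)
  also have "(\<bar>y\<bar> / \<sigma>) powr q \<le> (\<bar>y\<bar> / \<sigma>) powr real (2 * k)"
    using r1 kq by (intro powr_mono) auto
  also have "(\<bar>y\<bar> / \<sigma>) powr real (2 * k) = (\<bar>y\<bar> / \<sigma>) ^ (2 * k)"
    using s y by (intro powr_realpow) simp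
  also have "\<dots> = y ^ (2 * k) / \<sigma> ^ (2 * k)"
    by (simp add: power_divide power_even_abs)
  finally have "\<bar>y\<bar> powr q \<le> \<sigma> powr q * (y ^ (2 * k) / \<sigma> ^ (2 * k))" using s by (simp add: mult_left_mono)
  also have "\<dots> \<le> \<sigma> powr q * (y ^ (2 * k) / \<sigma> ^ (2 * k) + 1)"
    by (intro mult_left_mono) auto
  finally show ?thesis .
qed

definition weight_moment_const :: "real \<Rightarrow> real" where
  "weight_moment_const p = gauss_moment_const p * neg_moment_const (p / 2)"

lemma weight_moment_const_nonneg: "0 \<le> weight_moment_const p"
  using gauss_moment_const_pos[of p] unfolding weight_moment_const_def neg_moment_const_def by simp

definition boundary_moment_const :: "nat \<Rightarrow> real \<Rightarrow> real \<Rightarrow> real \<Rightarrow> real" where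
  "boundary_moment_const d p Cphi Lc = max (Cphi powr p) (Lc powr p * gauss_moment_const (2 * p) * (real d powr (2 * p) * real d + 1))"

lemma boundary_moment_const_nonneg: "0 \<le> boundary_moment_const d p Cphi Lc"
  unfolding boundary_moment_const_def by (rule order.trans[OF _ max.cobounded1]) simp

lemma normal_abs_moment_le:
  fixes X :: "'a \<Rightarrow> real" and \<sigma> q :: real
  assumes X: "distributed M lborel X (\<lambda>y. ennreal (normal_density 0 \<sigma> y))" and s: "0 < \<sigma>" and q: "0 < q"
  shows "(\<integral>\<^sup>+\<omega>. ennreal (\<bar>X \<omega>\<bar> powr q) \<partial>M) \<le> ennreal (gauss_moment_const q * \<sigma> powr q)"
proof -
  define k where "k = nat \<lceil>q/2\<rceil>"
  define g where "g y = \<sigma> powr q * (normal_density 0 \<sigma> y * (y - 0) ^ (2 * k)) / \<sigma> ^ (2 * k)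
      + \<sigma> powr q * (normal_density 0 \<sigma> y * (y - 0) ^ (2 * 0))" for y
  define I where "I = \<sigma> powr q * (fact (2 * k) / ((2 / \<sigma>\<^sup>2)^k * fact k)) / \<sigma> ^ (2 * k)
      + \<sigma> powr q * (fact (2 * 0) / ((2 / \<sigma>\<^sup>2)^0 * fact 0))"
  have kq: "q \<le> real (2 * k)" unfolding k_def by linarith
  have hb: "has_bochner_integral lborel g I"
    unfolding g_def I_def
    by (intro has_bochner_integral_add has_bochner_integral_divide_zero has_bochner_integral_mult_right normal_moment_even s)
  have "(\<integral>\<^sup>+\<omega>. ennreal (\<bar>X \<omega>\<bar> powr q) \<partial>M) = (\<integral>\<^sup>+y. ennreal (normal_density 0 \<sigma> y) * ennreal (\<bar>y\<bar> powr q) \<partial>lborel)"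
    by (rule distributed_nn_integral[OF X, symmetric]) simp
  also have "\<dots> \<le> (\<integral>\<^sup>+y. ennreal (g y) \<partial>lborel)"
  proof (rule nn_integral_mono)
    fix y :: real
    have nd: "0 \<le> normal_density 0 \<sigma> y" by simp
    have "normal_density 0 \<sigma> y * \<bar>y\<bar> powr q \<le> normal_density 0 \<sigma> y * (\<sigma> powr q * (y ^ (2 * k) / \<sigma> ^ (2 * k) + 1))"
      using abs_powr_le_even_power[OF s q kq] nd by (rule mult_left_mono)
    also have "\<dots> = g y" unfolding g_def by (simp add: field_simps)
    finally show "ennreal (normal_density 0 \<sigma> y) * ennreal (\<bar>y\<bar> powr q) \<le> ennreal (g y)"
      using nd by (simp add: ennreal_mult[symmetric] ennreal_leI)
  qed
  also have "\<dots> = ennreal I"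
  proof -
    have "integrable lborel g" using hb by (simp add: has_bochner_integral_iff)
    moreover have "AE y in lborel. 0 \<le> g y" by (simp add: g_def zero_le_even_power)
    ultimately have "(\<integral>\<^sup>+y. ennreal (g y) \<partial>lborel) = ennreal (integral\<^sup>L lborel g)"
      by (rule nn_integral_eq_integral)
    then show ?thesis using hb by (simp add: has_bochner_integral_iff)
  qed
  also have "I = gauss_moment_const q * \<sigma> powr q"
    using s unfolding I_def gauss_moment_const_def k_def[symmetric]
    by (simp add: field_simps power_mult power_divide power_mult_distrib[symmetric] power_commutes flip: power_mult)
  finally show ?thesis .
qed

lemma INF_shrinking_indicator:
  fixes f :: "real \<Rightarrow> ennreal"
  assumes T1: "0 < T1"
  shows "(INF n. f s * indicator {0..T1 / real (Suc n)} s) = f s * indicator {0} s"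
proof (cases "0 < s")
  case True
  obtain n0 where "T1 / s < real n0" using reals_Archimedean2 by blast
  then obtain n where "T1 / s < real (Suc n)" by (intro that[of n0]) simp
  then have "T1 / real (Suc n) < s" using True T1 by (simp add: divide_less_eq field_simps)
  then have "(INF n. f s * indicator {0..T1 / real (Suc n)} s) \<le> 0"
    by (intro INF_lower2[of n]) (auto simp: indicator_def)
  then show ?thesis using True by simp
next
  case False
  show ?thesis
  proof (cases "s = 0")
    case True then show ?thesis using T1 by simp
  next
    case False
    then have "(INF n. f s * indicator {0..T1 / real (Suc n)} s) \<le> 0"
      using \<open>\<not> 0 < s\<close> by (intro INF_lower2[of 0]) (auto simp: indicator_def)
    then show ?thesis using False by simp
  qed
qed

lemma nn_integral_Icc_small:
  fixes f :: "real \<Rightarrow> ennreal"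
  assumes f[measurable]: "f \<in> borel_measurable borel" and T1: "0 < T1"
    and fin: "(\<integral>\<^sup>+s\<in>{0..T1}. f s \<partial>lborel) < \<infinity>" and e: "0 < e"
  shows "\<exists>\<delta>>0. \<delta> \<le> T1 \<and> (\<integral>\<^sup>+s\<in>{0..\<delta>}. f s \<partial>lborel) < e"
proof -
  define g where "g n s = f s * indicator {0..T1 / real (Suc n)} s" for n s
  have dec: "decseq g"
  proof (rule decseq_SucI, rule le_funI)
    fix n s
    have "T1 / real (Suc (Suc n)) \<le> T1 / real (Suc n)" using T1 by (simp add: frac_le)
    then show "g (Suc n) s \<le> g n s" unfolding g_def
      by (intro mult_left_mono) (auto simp: indicator_def)
  qed
  have gf: "(\<integral>\<^sup>+s. g n s \<partial>lborel) < \<infinity>" for n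
  proof -
    have "T1 / real (Suc n) \<le> T1" using T1 by (simp add: divide_le_eq)
    then have "(\<integral>\<^sup>+s. g n s \<partial>lborel) \<le> (\<integral>\<^sup>+s\<in>{0..T1}. f s \<partial>lborel)" unfolding g_def
      by (intro nn_integral_mono mult_left_mono) (auto simp: indicator_def)
    then show ?thesis using fin by simp
  qed
  have "(INF n. \<integral>\<^sup>+s. g n s \<partial>lborel) = (\<integral>\<^sup>+s. (INF n. g n s) \<partial>lborel)"
    by (rule nn_integral_monotone_convergence_INF_decseq[symmetric, OF dec _ gf]) (simp add: g_def)
  also have "\<dots> = (\<integral>\<^sup>+s. f s * indicator {0} s \<partial>lborel)"
    unfolding g_def INF_shrinking_indicator[OF T1] ..
  also have "\<dots> = 0"
  proof -
    have "AE s in lborel. f s * indicator {0} s = 0"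
      using AE_lborel_singleton[of 0] by eventually_elim simp
    then show ?thesis by (simp add: nn_integral_0_iff_AE)
  qed
  finally have "(INF n. \<integral>\<^sup>+s. g n s \<partial>lborel) < e" using e by simp
  then obtain n where n: "(\<integral>\<^sup>+s. g n s \<partial>lborel) < e" by (auto simp: INF_less_iff)
  show ?thesis
    by (rule exI[of _ "T1 / real (Suc n)"]) (use n T1 in \<open>auto simp: g_def divide_le_eq\<close>)
qed

lemma nn_integral_exp_neg_mult:
  assumes a: "0 < a"
  shows "(\<integral>\<^sup>+ s. ennreal (exp (- s * a)) * indicator {0..} s \<partial>lborel) = ennreal (1 / a)"
proof -
  interpret prob_space "density lborel (exponential_density a)" by (rule prob_space_exponential_density[OF a])
  have "1 = emeasure (density lborel (exponential_density a)) UNIV" using emeasure_space_1 by simp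
  also have "\<dots> = (\<integral>\<^sup>+ s. ennreal (exponential_density a s) \<partial>lborel)"
    by (subst emeasure_density) auto
  also have "\<dots> = (\<integral>\<^sup>+ s. ennreal a * (ennreal (exp (- s * a)) * indicator {0..} s) \<partial>lborel)"
    using a by (intro nn_integral_cong) (auto simp: exponential_density_def indicator_def ennreal_mult)
  also have "\<dots> = ennreal a * (\<integral>\<^sup>+ s. ennreal (exp (- s * a)) * indicator {0..} s \<partial>lborel)"
    by (rule nn_integral_cmult) measurable
  finally have e: "ennreal a * (\<integral>\<^sup>+ s. ennreal (exp (- s * a)) * indicator {0..} s \<partial>lborel) = 1" by simp
  define X where "X = (\<integral>\<^sup>+ s. ennreal (exp (- s * a)) * indicator {0..} s \<partial>lborel)"
  have "ennreal (1 / a) * ennreal a = 1" using a by (simp add: ennreal_mult[symmetric])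
  then have "X = (ennreal (1 / a) * ennreal a) * X" by simp
  also have "\<dots> = ennreal (1 / a) * (ennreal a * X)" by (simp add: mult.assoc)
  also have "\<dots> = ennreal (1 / a)" using e unfolding X_def by simp
  finally show ?thesis unfolding X_def .
qed

lemma nn_integral_powr_neg_half_Icc_finite: "0 \<le> c \<Longrightarrow> (\<integral>\<^sup>+ l. ennreal (l powr (-1/2)) * indicator {0..c} l \<partial>lborel) < \<top>"
proof -
  assume c: "0 \<le> c"
  have "((\<lambda>x. x powr (-1/2)) has_integral (c powr (-1/2 + 1) / (-1/2 + 1))) {0..c}"
    by (rule has_integral_powr_from_0) (use c in auto)
  from nn_integral_has_integral_lebesgue'[OF _ this]
  show ?thesis by simp
qed

lemma mult_powr_div_eq:
  fixes x c q p :: real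
  assumes "0 < x" "0 \<le> c" "0 < q"
  shows "x * (c / (q * x)) powr p = (c / q) powr p * (1 / x powr (p - 1))"
proof -
  have "(c / (q * x)) powr p = (c / q) powr p / x powr p"
    using assms by (simp add: powr_divide[symmetric] divide_divide_eq_left mult.commute)
  moreover have "x powr p = x powr (p - 1) * x"
    using assms by (simp add: powr_diff)
  ultimately show ?thesis using assms by (simp add: field_simps)
qed

lemma powr_sum_le_card_powr_sum:
  fixes x :: "'i \<Rightarrow> real"
  assumes I: "finite I" and x: "\<And>i. i \<in> I \<Longrightarrow> 0 \<le> x i" and q: "0 \<le> q"
  shows "(\<Sum>i\<in>I. x i) powr q \<le> real (card I) powr q * (\<Sum>i\<in>I. x i powr q)"
proof (cases "I = {}")
  case True then show ?thesis by simp
next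
  case False
  define m where "m = Max (x ` I)"
  have mI: "m \<in> x ` I" unfolding m_def using I False by simp
  then obtain i0 where i0: "i0 \<in> I" "m = x i0" by auto
  have le: "x i \<le> m" if "i \<in> I" for i unfolding m_def using I that by simp
  have "(\<Sum>i\<in>I. x i) \<le> real (card I) * m"
    using sum_bounded_above[of I x m] le by simp
  then have "(\<Sum>i\<in>I. x i) powr q \<le> (real (card I) * m) powr q"
    using x q by (intro powr_mono2) (auto intro: sum_nonneg)
  also have "\<dots> = real (card I) powr q * m powr q" using i0 x by (simp add: powr_mult)
  also have "m powr q \<le> (\<Sum>i\<in>I. x i powr q)"
    unfolding i0(2) using i0(1) I by (intro member_le_sum) auto
  finally show ?thesis by (simp add: mult_left_mono)
qed

lemma powr_mult_le_powr_double_add: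
  fixes a b q :: real
  assumes "0 \<le> a" "0 \<le> b" "0 \<le> q"
  shows "(a * b) powr q \<le> a powr (2 * q) + b powr (2 * q)"
proof -
  have "a * b \<le> (max a b) powr 2"
    using assms by (cases "a \<le> b") (auto simp: max_def power2_eq_square intro: mult_mono)
  then have "(a * b) powr q \<le> ((max a b) powr 2) powr q" using assms by (intro powr_mono2) auto
  also have "\<dots> = max a b powr (2 * q)" by (simp add: powr_powr)
  also have "\<dots> \<le> a powr (2 * q) + b powr (2 * q)" by (cases "a \<le> b") (auto simp: max_def)
  finally show ?thesis .
qed

lemma eucl_norm_nonneg: "0 \<le> eucl_norm d v"
  unfolding eucl_norm_def by (simp add: sum_nonneg)

lemma eucl_norm_le_sum_abs: "eucl_norm d v \<le> (\<Sum>j<d. \<bar>v j\<bar>)"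
  using L2_set_le_sum_abs[of v "{..<d}"] unfolding eucl_norm_def L2_set_def .

lemma boundary_ratio_powr_le:
  fixes x :: "nat \<Rightarrow> real"
  assumes v: "0 < v" and Lc: "0 \<le> Lc" and p: "0 \<le> p"
  shows "(Lc * eucl_norm d x * \<bar>x t\<bar> / v) powr p
    \<le> (Lc powr p / v powr p) * (real d powr (2 * p) * (\<Sum>j<d. \<bar>x j\<bar> powr (2 * p)) + \<bar>x t\<bar> powr (2 * p))"
proof -
  define en where "en = eucl_norm d x"
  define y where "y = \<bar>x t\<bar>"
  have en0: "0 \<le> en" unfolding en_def by (rule eucl_norm_nonneg)
  have y0: "0 \<le> y" unfolding y_def by simp
  have "(en * y) powr p \<le> en powr (2 * p) + y powr (2 * p)" by (rule powr_mult_le_powr_double_add[OF en0 y0 p])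
  also have "en powr (2 * p) \<le> (\<Sum>j<d. \<bar>x j\<bar>) powr (2 * p)"
    unfolding en_def using p by (intro powr_mono2 eucl_norm_le_sum_abs) (auto simp: eucl_norm_nonneg)
  also have "(\<Sum>j<d. \<bar>x j\<bar>) powr (2 * p) \<le> real d powr (2 * p) * (\<Sum>j<d. \<bar>x j\<bar> powr (2 * p))"
    using powr_sum_le_card_powr_sum[of "{..<d}" "\<lambda>j. \<bar>x j\<bar>" "2 * p"] p by simp
  finally have "(en * y) powr p \<le> real d powr (2 * p) * (\<Sum>j<d. \<bar>x j\<bar> powr (2 * p)) + y powr (2 * p)"
    by simp
  from mult_left_mono[OF this, of "Lc powr p / v powr p"]
  show ?thesis
    using v Lc en0 y0 unfolding en_def[symmetric] y_def[symmetric]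
    by (simp add: powr_divide powr_mult mult.assoc)
qed

lemma bernstein_nonneg: "bernstein \<eta> \<Longrightarrow> \<forall>x>0. 0 \<le> \<eta> x"
  unfolding bernstein_def by blast

lemma bernstein_measurable_restrict:
  assumes "bernstein \<eta>"
  shows "(\<lambda>l. if 0 < l then \<eta> l else 0) \<in> borel_measurable borel"
proof -
  have "\<forall>x>0. (deriv ^^ 0) \<eta> differentiable (at x)" using assms unfolding bernstein_def by blast
  then have "continuous_on {0<..} \<eta>"
    by (auto intro!: continuous_at_imp_continuous_on differentiable_imp_continuous_within)
  then have "(\<lambda>l. if l \<in> {0<..} then \<eta> l else 0) \<in> borel_measurable borel"
    by (intro borel_measurable_continuous_on_if) auto
  then show ?thesis by simp
qed

lemma finite_family_uniform_bound:
  assumes "finite L" and "\<forall>l\<in>L. \<exists>C. \<forall>s\<in>A. \<forall>x\<in>X. \<bar>f l s x\<bar> \<le> (C::real)"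
  obtains C where "0 \<le> C" "\<forall>l\<in>L. \<forall>s\<in>A. \<forall>x\<in>X. \<bar>f l s x\<bar> \<le> C"
proof -
  from assms(2) obtain Cf where Cf: "\<forall>l\<in>L. \<forall>s\<in>A. \<forall>x\<in>X. \<bar>f l s x\<bar> \<le> Cf l" by metis
  have "\<bar>f l s x\<bar> \<le> (\<Sum>l\<in>L. \<bar>Cf l\<bar>)" if "l \<in> L" "s \<in> A" "x \<in> X" for l s x
    using Cf that member_le_sum[of l L "\<lambda>l. \<bar>Cf l\<bar>"] assms(1) by fastforce
  then show ?thesis by (intro that[of "\<Sum>l\<in>L. \<bar>Cf l\<bar>"]) (auto intro: sum_nonneg)
qed

lemma finite_family_pos_lower_bound:
  assumes "finite L" "L \<noteq> {}" "\<forall>l\<in>L. 0 < q l"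
  obtains qmin :: real where "0 < qmin" "\<forall>l\<in>L. qmin \<le> q l"
proof (rule that[of "Min (q ` L)"])
  show "0 < Min (q ` L)" using assms by simp
  show "\<forall>l\<in>L. Min (q ` L) \<le> q l" using assms(1) by simp
qed

lemma nonneg_bound_and_lipschitz_constants:
  assumes "\<exists>C. \<forall>x\<in>X. \<bar>\<phi> x\<bar> \<le> C" and "\<exists>Lc. \<forall>x\<in>X. \<forall>y\<in>X. \<bar>\<phi> x - \<phi> y\<bar> \<le> Lc * eucl_norm d (\<lambda>j. x j - y j)"
  obtains Cphi Lc where "0 \<le> Cphi" "\<forall>x\<in>X. \<bar>\<phi> x\<bar> \<le> Cphi"
    and "0 \<le> Lc" "\<forall>x\<in>X. \<forall>y\<in>X. \<bar>\<phi> x - \<phi> y\<bar> \<le> Lc * eucl_norm d (\<lambda>j. x j - y j)"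
proof -
  from assms obtain C0 L0 where C0: "\<forall>x\<in>X. \<bar>\<phi> x\<bar> \<le> C0"
    and L0: "\<forall>x\<in>X. \<forall>y\<in>X. \<bar>\<phi> x - \<phi> y\<bar> \<le> L0 * eucl_norm d (\<lambda>j. x j - y j)" by blast
  have "\<forall>x\<in>X. \<forall>y\<in>X. \<bar>\<phi> x - \<phi> y\<bar> \<le> max 0 L0 * eucl_norm d (\<lambda>j. x j - y j)"
  proof (intro ballI)
    fix x y assume "x \<in> X" "y \<in> X"
    then have "\<bar>\<phi> x - \<phi> y\<bar> \<le> L0 * eucl_norm d (\<lambda>j. x j - y j)" using L0 by blast
    also have "\<dots> \<le> max 0 L0 * eucl_norm d (\<lambda>j. x j - y j)" by (intro mult_right_mono eucl_norm_nonneg) simp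
    finally show "\<bar>\<phi> x - \<phi> y\<bar> \<le> max 0 L0 * eucl_norm d (\<lambda>j. x j - y j)" .
  qed
  then show ?thesis using C0 by (intro that[of "max 0 C0" "max 0 L0"]) (auto intro: max.coboundedI2)
qed

section \<open>The branching tree\<close>

text \<open>The majorant ignores positions, which is what makes it amenable to a moment recursion.\<close>
fun majorant :: "(nat list \<Rightarrow> real \<Rightarrow> nat \<Rightarrow> real) \<Rightarrow> (nat list \<Rightarrow> real) \<Rightarrow> (nat list \<Rightarrow> nat list) \<Rightarrow> real
   \<Rightarrow> nat \<Rightarrow> nat list \<Rightarrow> real \<Rightarrow> nat \<Rightarrow> real" where
  "majorant a tau idx T 0 pre s th = 1"
| "majorant a tau idx T (Suc n) pre s th = a pre s th *
     (if s + tau pre < T then (\<Prod>j<sum_list (idx pre). majorant a tau idx T n (pre @ [j]) (s + tau pre) (mark_of (idx pre) j)) else 1)"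

lemma majorant_ge_1: "(\<And>k s th. 1 \<le> a k s th) \<Longrightarrow> 1 \<le> majorant a tau idx T n pre s th"
proof (induction n arbitrary: pre s th)
  case 0 then show ?case by simp
next
  case (Suc n)
  have "1 \<le> (if s + tau pre < T then (\<Prod>j<sum_list (idx pre). majorant a tau idx T n (pre @ [j]) (s + tau pre) (mark_of (idx pre) j)) else 1)"
    using Suc by (auto intro!: prod_ge_1)
  then have "1 * 1 \<le> a pre s th * (if s + tau pre < T then (\<Prod>j<sum_list (idx pre). majorant a tau idx T n (pre @ [j]) (s + tau pre) (mark_of (idx pre) j)) else 1)"
    using Suc.prems[of pre s th] by (intro mult_mono) auto
  then show ?case by simp
qed

lemma tree_state_dead: "\<not> fst st \<Longrightarrow> \<not> fst (tree_state T tau idx Sp Bp pre st k)"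
proof (induction k arbitrary: pre st)
  case Nil then show ?case by simp
next
  case (Cons j js)
  obtain al b pos th where st: "st = (al, b, pos, th)" by (cases st) auto
  show ?case using Cons st by simp
qed

definition subtree_nodes where
  "subtree_nodes T tau idx Sp Bp pre st = {k. fst (tree_state T tau idx Sp Bp pre st k)}"

definition child_state where
  "child_state T tau idx Sp Bp pre b pos j = (True, b + tau pre, (\<lambda>c. pos c + Bp pre (Sp pre (tau pre)) c), mark_of (idx pre) j)"

lemma tree_state_Cons_alive: "b + tau pre < T \<Longrightarrow> j < sum_list (idx pre) \<Longrightarrow>
  tree_state T tau idx Sp Bp pre (True, b, pos, th) (j # js) = tree_state T tau idx Sp Bp (pre @ [j]) (child_state T tau idx Sp Bp pre b pos j) js"
  by (simp add: child_state_def)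

lemma subtree_nodes_depth_Suc:
  "subtree_nodes T tau idx Sp Bp pre (True, b, pos, th) \<inter> {k. length k < Suc n} =
   insert [] (\<Union>j\<in>{j. b + tau pre < T \<and> j < sum_list (idx pre)}.
       (Cons j) ` (subtree_nodes T tau idx Sp Bp (pre @ [j]) (child_state T tau idx Sp Bp pre b pos j) \<inter> {k. length k < n}))"
  (is "?L = ?R")
proof (intro set_eqI iffI)
  fix k assume k: "k \<in> ?L"
  show "k \<in> ?R"
  proof (cases k)
    case Nil then show ?thesis by simp
  next
    case (Cons j js)
    have al: "fst (tree_state T tau idx Sp Bp pre (True, b, pos, th) (j # js))" using k Cons by (simp add: subtree_nodes_def)
    have c: "b + tau pre < T \<and> j < sum_list (idx pre)"
    proof (rule ccontr)
      assume "\<not> ?thesis"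
      then have "\<not> fst (True \<and> b + tau pre < T \<and> j < sum_list (idx pre), b + tau pre,
        (\<lambda>c. pos c + Bp pre (Sp pre (tau pre)) c), mark_of (idx pre) j)" by simp
      from tree_state_dead[OF this] al show False by simp
    qed
    then show ?thesis using al k Cons by (auto simp: subtree_nodes_def tree_state_Cons_alive child_state_def)
  qed
next
  fix k assume k: "k \<in> ?R"
  then show "k \<in> ?L" by (auto simp: subtree_nodes_def tree_state_Cons_alive child_state_def)
qed

lemma prod_subtree_nodes_le_majorant:
  assumes a1: "\<And>k s th. 1 \<le> a k s th"
  shows "finite (subtree_nodes T tau idx Sp Bp pre (True, b, pos, th) \<inter> {k. length k < n}) \<and>
    (\<Prod>k\<in>subtree_nodes T tau idx Sp Bp pre (True, b, pos, th) \<inter> {k. length k < n}.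
        a (pre @ k) (fst (snd (tree_state T tau idx Sp Bp pre (True, b, pos, th) k)))
                    (snd (snd (snd (tree_state T tau idx Sp Bp pre (True, b, pos, th) k)))))
    \<le> majorant a tau idx T n pre b th"
proof (induction n arbitrary: pre b pos th)
  case 0 then show ?case by simp
next
  case (Suc n)
  define J where "J = {j. b + tau pre < T \<and> j < sum_list (idx pre)}"
  define st where "st = (True, b, pos, th)"
  define cs where "cs = child_state T tau idx Sp Bp pre b pos"
  define A where "A j = subtree_nodes T tau idx Sp Bp (pre @ [j]) (cs j) \<inter> {k. length k < n}" for j
  define f where "f k = a (pre @ k) (fst (snd (tree_state T tau idx Sp Bp pre st k))) (snd (snd (snd (tree_state T tau idx Sp Bp pre st k))))" for k
  define g where "g j k = a (pre @ [j] @ k) (fst (snd (tree_state T tau idx Sp Bp (pre @ [j]) (cs j) k))) (snd (snd (snd (tree_state T tau idx Sp Bp (pre @ [j]) (cs j) k))))" for j k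
  have dec: "subtree_nodes T tau idx Sp Bp pre st \<inter> {k. length k < Suc n} = insert [] (\<Union>j\<in>J. Cons j ` A j)"
    unfolding st_def J_def A_def cs_def by (rule subtree_nodes_depth_Suc)
  have finJ: "finite J" unfolding J_def by auto
  have csj: "cs j = (True, b + tau pre, (\<lambda>c. pos c + Bp pre (Sp pre (tau pre)) c), mark_of (idx pre) j)" for j
    by (simp add: cs_def child_state_def)
  have IH: "finite (A j) \<and> prod (g j) (A j) \<le> majorant a tau idx T n (pre @ [j]) (b + tau pre) (mark_of (idx pre) j)" for j
    using Suc.IH[of "pre @ [j]" "b + tau pre" "(\<lambda>c. pos c + Bp pre (Sp pre (tau pre)) c)" "mark_of (idx pre) j"]
    unfolding A_def g_def csj by simp
  have finU: "finite (\<Union>j\<in>J. Cons j ` A j)" using finJ IH by auto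
  have fg: "f (j # k) = g j k" if "j \<in> J" for j k
    using that unfolding f_def g_def st_def J_def cs_def by (simp add: tree_state_Cons_alive child_state_def)
  have "prod f (insert [] (\<Union>j\<in>J. Cons j ` A j)) = f [] * prod f (\<Union>j\<in>J. Cons j ` A j)"
    using finU by (subst prod.insert) auto
  also have "prod f (\<Union>j\<in>J. Cons j ` A j) = (\<Prod>j\<in>J. prod f (Cons j ` A j))"
    using finJ IH by (subst prod.UNION_disjoint) (auto)
  also have "\<dots> = (\<Prod>j\<in>J. prod (g j) (A j))"
    by (rule prod.cong[OF refl]) (simp add: prod.reindex fg)
  also have "f [] = a pre b th" unfolding f_def st_def by simp
  finally have eq: "prod f (insert [] (\<Union>j\<in>J. Cons j ` A j)) = a pre b th * (\<Prod>j\<in>J. prod (g j) (A j))" .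
  have ge0: "0 \<le> prod (g j) (A j)" for j unfolding g_def using a1 by (intro prod_nonneg) (meson dual_order.trans zero_le_one)
  have le: "(\<Prod>j\<in>J. prod (g j) (A j)) \<le> (if b + tau pre < T then (\<Prod>j<sum_list (idx pre). majorant a tau idx T n (pre @ [j]) (b + tau pre) (mark_of (idx pre) j)) else 1)"
  proof (cases "b + tau pre < T")
    case True
    then have "J = {..<sum_list (idx pre)}" unfolding J_def by auto
    then show ?thesis using True IH ge0 by (simp add: prod_mono)
  next
    case False then have "J = {}" unfolding J_def by auto
    then show ?thesis using False by simp
  qed
  have "a pre b th * (\<Prod>j\<in>J. prod (g j) (A j)) \<le> majorant a tau idx T (Suc n) pre b th"
    using le a1[of pre b th] by (simp add: mult_left_mono)
  then show ?case using eq dec finU unfolding f_def st_def by simp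
qed

lemma majorant_le_Suc: "(\<And>k s th. 1 \<le> a k s th) \<Longrightarrow> majorant a tau idx T n pre s th \<le> majorant a tau idx T (Suc n) pre s th"
proof (induction n arbitrary: pre s th)
  case 0
  have "1 \<le> majorant a tau idx T (Suc 0) pre s th" by (rule majorant_ge_1) (rule 0)
  then show ?case by simp
next
  case (Suc n)
  have le: "(if s + tau pre < T then (\<Prod>j<sum_list (idx pre). majorant a tau idx T n (pre @ [j]) (s + tau pre) (mark_of (idx pre) j)) else 1)
      \<le> (if s + tau pre < T then (\<Prod>j<sum_list (idx pre). majorant a tau idx T (Suc n) (pre @ [j]) (s + tau pre) (mark_of (idx pre) j)) else 1)"
  proof (cases "s + tau pre < T")
    case True
    have "(\<Prod>j<sum_list (idx pre). majorant a tau idx T n (pre @ [j]) (s + tau pre) (mark_of (idx pre) j))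
       \<le> (\<Prod>j<sum_list (idx pre). majorant a tau idx T (Suc n) (pre @ [j]) (s + tau pre) (mark_of (idx pre) j))"
      using Suc majorant_ge_1[of a tau idx T n] by (intro prod_mono) (meson order.trans zero_le_one)
    then show ?thesis using True by simp
  qed simp
  have "0 \<le> a pre s th" using Suc.prems[of pre s th] by simp
  from mult_left_mono[OF le this] show ?case by simp
qed

lemma tree_state_invariant:
  assumes tau: "\<forall>k. 0 \<le> tau k" and Bd: "\<forall>k u. Bp k u \<in> Rd d"
  shows "fst (tree_state T tau idx Sp Bp pre st k) \<Longrightarrow> 0 \<le> fst (snd st) \<Longrightarrow> fst (snd st) \<le> T \<Longrightarrow> fst (snd (snd st)) \<in> Rd d \<Longrightarrow>
    0 \<le> fst (snd (tree_state T tau idx Sp Bp pre st k)) \<and> fst (snd (tree_state T tau idx Sp Bp pre st k)) \<le> T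
    \<and> fst (snd (snd (tree_state T tau idx Sp Bp pre st k))) \<in> Rd d"
proof (induction k arbitrary: pre st)
  case Nil then show ?case by simp
next
  case (Cons j js)
  obtain al b pos th where st: "st = (al, b, pos, th)" by (cases st) auto
  define st' where "st' = (al \<and> b + tau pre < T \<and> j < sum_list (idx pre), b + tau pre, (\<lambda>c. pos c + Bp pre (Sp pre (tau pre)) c), mark_of (idx pre) j)"
  have eq: "tree_state T tau idx Sp Bp pre st (j # js) = tree_state T tau idx Sp Bp (pre @ [j]) st' js"
    unfolding st st'_def by simp
  have al: "fst st'"
  proof (rule ccontr)
    assume "\<not> fst st'"
    from tree_state_dead[OF this] Cons.prems(1) eq show False by simp
  qed
  then have lt: "b + tau pre < T" unfolding st'_def by simp
  have b0: "0 \<le> b" using Cons.prems st by simp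
  have pos: "pos \<in> Rd d" using Cons.prems st by simp
  have "(\<lambda>c. pos c + Bp pre (Sp pre (tau pre)) c) \<in> Rd d"
    using pos Bd unfolding Rd_def by auto
  then have "0 \<le> fst (snd st') \<and> fst (snd st') \<le> T \<and> fst (snd (snd st')) \<in> Rd d"
    unfolding st'_def using b0 tau lt by (auto intro: add_nonneg_nonneg)
  then show ?case unfolding eq using Cons.IH[of "pre @ [j]" st'] Cons.prems(1) eq by simp
qed

definition node_factor where
  "node_factor c q \<rho> \<phi> T tau idx Sp Bp b pos th k =
    (if b + tau k < T then
       c (idx k) (b + tau k) (\<lambda>j. pos j + Bp k (Sp k (tau k)) j) *
         (if th = 0 then 1 else Bp k (Sp k (tau k)) (th - 1) / Sp k (tau k)) / (q (idx k) * \<rho> (tau k))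
     else (\<phi> (\<lambda>j. pos j + Bp k (Sp k (T - b)) j) - \<phi> pos * (if th \<noteq> 0 then 1 else 0)) *
         (if th = 0 then 1 else Bp k (Sp k (T - b)) (th - 1) / Sp k (T - b)) / Fbar \<rho> (T - b))"

lemma Hfun_eq_prod_node_factor:
  assumes fin: "finite (tree_nodes T t x i tau idx Sp Bp)"
  shows "Hfun c q \<rho> \<phi> T t x i tau idx Sp Bp =
    (\<Prod>k\<in>tree_nodes T t x i tau idx Sp Bp. let st = node_state T t x i tau idx Sp Bp k in
       node_factor c q \<rho> \<phi> T tau idx Sp Bp (fst (snd st)) (fst (snd (snd st))) (snd (snd (snd st))) k)"
proof -
  define st where "st = node_state T t x i tau idx Sp Bp"
  define N where "N = tree_nodes T t x i tau idx Sp Bp"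
  define P where "P k = (fst (snd (st k)) + tau k < T)" for k
  define Fin where "Fin k = c (idx k) (fst (snd (st k)) + tau k) (\<lambda>j. fst (snd (snd (st k))) j + Bp k (Sp k (tau k)) j) *
      (if snd (snd (snd (st k))) = 0 then 1 else Bp k (Sp k (tau k)) (snd (snd (snd (st k))) - 1) / Sp k (tau k)) / (q (idx k) * \<rho> (tau k))" for k
  define Fbd where "Fbd k = (\<phi> (\<lambda>j. fst (snd (snd (st k))) j + Bp k (Sp k (T - fst (snd (st k)))) j) - \<phi> (fst (snd (snd (st k)))) * (if snd (snd (snd (st k))) \<noteq> 0 then 1 else 0)) *
      (if snd (snd (snd (st k))) = 0 then 1 else Bp k (Sp k (T - fst (snd (st k)))) (snd (snd (snd (st k))) - 1) / Sp k (T - fst (snd (st k)))) / Fbar \<rho> (T - fst (snd (st k)))" for k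
  have "Hfun c q \<rho> \<phi> T t x i tau idx Sp Bp = prod Fin {k \<in> N. fst (snd (st k)) + tau k < T} * prod Fbd {k \<in> N. T \<le> fst (snd (st k)) + tau k}"
    unfolding Hfun_def Let_def st_def N_def Fin_def[abs_def] Fbd_def[abs_def] ..
  also have "{k \<in> N. fst (snd (st k)) + tau k < T} = N \<inter> {k. P k}"
    unfolding P_def by auto
  also have "{k \<in> N. T \<le> fst (snd (st k)) + tau k} = N \<inter> - {k. P k}"
    unfolding P_def by auto
  also have "prod Fin (N \<inter> {k. P k}) * prod Fbd (N \<inter> - {k. P k}) = (\<Prod>k\<in>N. if P k then Fin k else Fbd k)"
    by (rule prod.If_cases[symmetric]) (use fin in \<open>simp add: N_def\<close>)
  finally show ?thesis
    unfolding N_def st_def Let_def node_factor_def P_def Fin_def Fbd_def .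
qed

section \<open>The particle system\<close>

text \<open>Component \<open>(k, n)\<close> of the system is the lifetime (\<open>n = 0\<close>), the offspring index (\<open>n = 1\<close>),
  the subordinator (\<open>n = 2\<close>) or the Brownian motion (\<open>n = 3\<close>) of particle \<open>k\<close>.\<close>
definition component_sets :: "'w measure \<Rightarrow> (nat list \<Rightarrow> 'w \<Rightarrow> real) \<Rightarrow> (nat list \<Rightarrow> 'w \<Rightarrow> nat list) \<Rightarrow> (nat list \<Rightarrow> 'w \<Rightarrow> real \<Rightarrow> real)
   \<Rightarrow> (nat list \<Rightarrow> 'w \<Rightarrow> real \<Rightarrow> nat \<Rightarrow> real) \<Rightarrow> nat list \<times> nat \<Rightarrow> 'w set set" where
  "component_sets M tau idx S B = (\<lambda>(k, n::nat). if n = 0 then sets (vimage_algebra (space M) (tau k) borel)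
                 else if n = 1 then sets (vimage_algebra (space M) (idx k) (count_space UNIV))
                 else if n = 2 then sets (vimage_algebra (space M) (S k) (\<Pi>\<^sub>M u\<in>UNIV. (borel :: real measure)))
                 else sets (vimage_algebra (space M) (B k) (\<Pi>\<^sub>M u\<in>UNIV. \<Pi>\<^sub>M j\<in>UNIV. (borel :: real measure))))"

locale particle_system = prob_space M for M :: "'w measure" +
  fixes d :: nat and tau :: "nat list \<Rightarrow> 'w \<Rightarrow> real" and idx :: "nat list \<Rightarrow> 'w \<Rightarrow> nat list"
    and S :: "nat list \<Rightarrow> 'w \<Rightarrow> real \<Rightarrow> real" and B :: "nat list \<Rightarrow> 'w \<Rightarrow> real \<Rightarrow> nat \<Rightarrow> real"
    and \<eta> \<rho> :: "real \<Rightarrow> real"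
  assumes indep: "indep_sets (component_sets M tau idx S B) (UNIV \<times> {..<4})"
    and S_sub: "\<forall>k. subordinator M \<eta> (S k)"
    and B_BM: "\<forall>k. std_BM M d (B k)"
    and tau_distr: "\<forall>k. distributed M lborel (tau k) (\<lambda>s. if 0 \<le> s then ennreal (\<rho> s) else 0)"
    and rho_meas: "\<rho> \<in> borel_measurable borel" and rho_pos: "\<forall>s\<ge>0. 0 < \<rho> s"
    and eta_meas: "(\<lambda>l. if 0 < l then \<eta> l else 0) \<in> borel_measurable borel"
begin

definition sigma_of :: "(nat list \<times> nat) set \<Rightarrow> 'w measure" where
  "sigma_of P = sigma (space M) (\<Union> (component_sets M tau idx S B ` (P \<inter> UNIV \<times> {..<4})))"

lemma component_sets_events: "component_sets M tau idx S B kn \<subseteq> events" if "kn \<in> UNIV \<times> {..<4}"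
  using indep that unfolding indep_sets_def by auto

lemma component_sets_subset_Pow: "component_sets M tau idx S B kn \<subseteq> Pow (space M)"
proof -
  obtain k n where kn: "kn = (k, n)" by (cases kn)
  have *: "\<And>f N A. A \<in> sets (vimage_algebra (space M) f N) \<Longrightarrow> A \<subseteq> space M"
    using sets.sets_into_space by fastforce
  show ?thesis unfolding kn component_sets_def by (auto dest!: *)
qed

lemma space_sigma_of[simp]: "space (sigma_of P) = space M"
  unfolding sigma_of_def using component_sets_subset_Pow by (intro space_measure_of) auto

lemma sets_sigma_of: "sets (sigma_of P) = sigma_sets (space M) (\<Union> (component_sets M tau idx S B ` (P \<inter> UNIV \<times> {..<4})))"
  unfolding sigma_of_def using component_sets_subset_Pow by (intro sets_measure_of) auto

lemma subalgebra_sigma_of: "subalgebra M (sigma_of P)"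
  unfolding subalgebra_def
proof
  show "space (sigma_of P) = space M" by simp
  show "sets (sigma_of P) \<subseteq> sets M" unfolding sets_sigma_of
    using component_sets_events by (intro sets.sigma_sets_subset) auto
qed

lemma sets_sigma_of_mono: "P \<subseteq> Q \<Longrightarrow> sets (sigma_of P) \<subseteq> sets (sigma_of Q)"
  unfolding sets_sigma_of by (intro sigma_sets_mono') auto

lemma measurable_ident_sigma_of: "P \<subseteq> Q \<Longrightarrow> (\<lambda>x. x) \<in> measurable (sigma_of Q) (sigma_of P)"
  using sets_sigma_of_mono[of P Q] unfolding measurable_def by auto

lemma measurable_pair_sigma_of_mono: "P \<subseteq> Q \<Longrightarrow> f \<in> measurable (K \<Otimes>\<^sub>M sigma_of P) N \<Longrightarrow> f \<in> measurable (K \<Otimes>\<^sub>M sigma_of Q) N"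
proof -
  assume PQ: "P \<subseteq> Q" and f: "f \<in> measurable (K \<Otimes>\<^sub>M sigma_of P) N"
  have "(\<lambda>x. (fst x, snd x)) \<in> measurable (K \<Otimes>\<^sub>M sigma_of Q) (K \<Otimes>\<^sub>M sigma_of P)"
    by (intro measurable_Pair measurable_fst measurable_compose[OF measurable_snd measurable_ident_sigma_of[OF PQ]])
  from measurable_compose[OF this f] show ?thesis by simp
qed

lemma component_sets_in_sigma_of: "kn \<in> P \<Longrightarrow> kn \<in> UNIV \<times> {..<4} \<Longrightarrow> A \<in> component_sets M tau idx S B kn \<Longrightarrow> A \<in> sets (sigma_of P)"
  unfolding sets_sigma_of by (rule sigma_sets.Basic) auto

lemma Int_stable_component_sets: "Int_stable (component_sets M tau idx S B kn)"
proof -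
  obtain k n where kn: "kn = (k, n)" by (cases kn)
  show ?thesis unfolding kn component_sets_def by (auto simp: Int_stable_def)
qed

lemma indep_sets_sigma_of:
  assumes "disjoint_family_on P J"
  shows "indep_sets (\<lambda>j. sets (sigma_of (P j))) J"
proof -
  let ?I = "\<lambda>j. P j \<inter> UNIV \<times> {..<4}"
  have "indep_sets (\<lambda>j. sigma_sets (space M) (\<Union>i\<in>?I j. component_sets M tau idx S B i)) J"
  proof (rule indep_sets_collect_sigma)
    show "indep_sets (component_sets M tau idx S B) (\<Union>j\<in>J. ?I j)"
      by (rule indep_sets_mono_index[OF _ indep]) auto
    show "Int_stable (component_sets M tau idx S B i)" for i by (rule Int_stable_component_sets)
    show "disjoint_family_on ?I J" using assms unfolding disjoint_family_on_def by auto
  qed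
  then show ?thesis by (simp add: sets_sigma_of)
qed

lemma emeasure_Int_sigma_of_disjoint:
  assumes "P \<inter> Q = {}" and A: "A \<in> sets (sigma_of P)" and Bs: "Bs \<in> sets (sigma_of Q)"
  shows "emeasure M (A \<inter> Bs) = emeasure M A * emeasure M Bs"
proof -
  have "disjoint_family_on (\<lambda>b. if b then P else Q) UNIV"
    using assms(1) unfolding disjoint_family_on_def by auto
  from indep_sets_sigma_of[OF this] have I: "indep_sets (\<lambda>b. sets (sigma_of (if b then P else Q))) UNIV"
    by (simp add: if_distrib)
  have "prob (\<Inter>b\<in>UNIV. (\<lambda>b. if b then A else Bs) b) = (\<Prod>b\<in>UNIV. prob ((\<lambda>b. if b then A else Bs) b))"
    by (rule indep_setsD[OF I]) (use A Bs in auto)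
  moreover have "(\<Inter>b\<in>UNIV. (\<lambda>b. if b then A else Bs) b) = A \<inter> Bs" by (auto simp: UNIV_bool)
  ultimately have "prob (A \<inter> Bs) = prob A * prob Bs" by (simp add: UNIV_bool)
  then show ?thesis by (simp add: emeasure_eq_measure ennreal_mult)
qed

lemma nn_integral_freeze_sigma_of:
  assumes "P \<inter> Q = {}"
    and h: "h \<in> borel_measurable (sigma_of P)" and Z: "Z \<in> measurable (sigma_of P) K"
    and G: "(\<lambda>(z,\<omega>). G z \<omega>) \<in> borel_measurable (K \<Otimes>\<^sub>M sigma_of Q)"
  shows "(\<integral>\<^sup>+\<omega>. h \<omega> * G (Z \<omega>) \<omega> \<partial>M) = (\<integral>\<^sup>+\<omega>. h \<omega> * (\<integral>\<^sup>+\<omega>'. G (Z \<omega>) \<omega>' \<partial>M) \<partial>M)"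
  by (rule nn_integral_indep_freeze[OF prob_space_axioms subalgebra_sigma_of subalgebra_sigma_of _ h Z G]) (rule emeasure_Int_sigma_of_disjoint[OF assms(1)])

lemma measurable_tau_sigma_of: "(k, 0) \<in> P \<Longrightarrow> tau k \<in> borel_measurable (sigma_of P)"
proof -
  assume "(k, 0) \<in> P"
  then have "sets (vimage_algebra (space M) (tau k) borel) \<subseteq> sets (sigma_of P)"
    using component_sets_in_sigma_of[of "(k,0)" P] by (auto simp: component_sets_def)
  then show ?thesis
    using measurable_vimage_algebra1[of "tau k" "space M" borel] unfolding measurable_def by auto
qed

lemma measurable_idx_sigma_of: "(k, 1) \<in> P \<Longrightarrow> idx k \<in> measurable (sigma_of P) (count_space UNIV)"
proof -
  assume "(k, 1) \<in> P"
  then have "sets (vimage_algebra (space M) (idx k) (count_space UNIV)) \<subseteq> sets (sigma_of P)"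
    using component_sets_in_sigma_of[of "(k,1)" P] by (auto simp: component_sets_def)
  then show ?thesis
    using measurable_vimage_algebra1[of "idx k" "space M" "count_space UNIV"] unfolding measurable_def by auto
qed

lemma measurable_S_sigma_of: "(k, 2) \<in> P \<Longrightarrow> (\<lambda>\<omega>. S k \<omega> u) \<in> borel_measurable (sigma_of P)"
proof -
  assume "(k, 2) \<in> P"
  then have "sets (vimage_algebra (space M) (S k) (\<Pi>\<^sub>M u\<in>UNIV. (borel :: real measure))) \<subseteq> sets (sigma_of P)"
    using component_sets_in_sigma_of[of "(k,2)" P] by (auto simp: component_sets_def)
  moreover have "S k \<in> space M \<rightarrow> space (\<Pi>\<^sub>M u\<in>UNIV. (borel :: real measure))" by (auto simp: space_PiM)
  ultimately have "S k \<in> measurable (sigma_of P) (\<Pi>\<^sub>M u\<in>UNIV. (borel :: real measure))"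
    using measurable_vimage_algebra1[of "S k" "space M" "\<Pi>\<^sub>M u\<in>UNIV. (borel :: real measure)"] unfolding measurable_def by auto
  from measurable_compose[OF this measurable_component_singleton[of u UNIV]] show ?thesis by simp
qed

lemma measurable_B_sigma_of: "(k, 3) \<in> P \<Longrightarrow> (\<lambda>\<omega>. B k \<omega> v j) \<in> borel_measurable (sigma_of P)"
proof -
  assume "(k, 3) \<in> P"
  then have "sets (vimage_algebra (space M) (B k) (\<Pi>\<^sub>M u\<in>UNIV. \<Pi>\<^sub>M j\<in>UNIV. (borel :: real measure))) \<subseteq> sets (sigma_of P)"
    using component_sets_in_sigma_of[of "(k,3)" P] by (auto simp: component_sets_def)
  moreover have "B k \<in> space M \<rightarrow> space (\<Pi>\<^sub>M u\<in>UNIV. \<Pi>\<^sub>M j\<in>UNIV. (borel :: real measure))" by (auto simp: space_PiM)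
  ultimately have "B k \<in> measurable (sigma_of P) (\<Pi>\<^sub>M u\<in>UNIV. \<Pi>\<^sub>M j\<in>UNIV. (borel :: real measure))"
    using measurable_vimage_algebra1[of "B k" "space M" "\<Pi>\<^sub>M u\<in>UNIV. \<Pi>\<^sub>M j\<in>UNIV. (borel :: real measure)"] unfolding measurable_def by auto
  from measurable_compose[OF measurable_compose[OF this measurable_component_singleton[of v UNIV]] measurable_component_singleton[of j UNIV]]
  show ?thesis by simp
qed

lemma subordinator_path: "\<omega> \<in> space M \<Longrightarrow> S k \<omega> 0 = 0 \<and> mono_on {0..} (S k \<omega>) \<and> (\<forall>t\<ge>0. continuous (at_right t) (S k \<omega>))"
  using S_sub unfolding subordinator_def by blast

lemma subordinator_nonneg: "\<omega> \<in> space M \<Longrightarrow> 0 \<le> u \<Longrightarrow> 0 \<le> S k \<omega> u"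
  using subordinator_path[of \<omega> k] unfolding mono_on_def by (metis atLeast_iff order_refl)

lemma BM_path: "\<omega> \<in> space M \<Longrightarrow> B k \<omega> 0 = (\<lambda>_. 0) \<and> (\<forall>t j. d \<le> j \<longrightarrow> B k \<omega> t j = 0) \<and> (\<forall>j. continuous_on {0..} (\<lambda>t. B k \<omega> t j))"
  using B_BM unfolding std_BM_def by blast

text \<open>Clamping the time at \<open>0\<close> makes the subordinated Brownian motion \<open>B(S(u))\<close> jointly measurable in \<open>u\<close>
  and \<open>\<omega>\<close> on all of \<open>\<real>\<close>.\<close>
definition sub_time where "sub_time k u \<omega> = S k \<omega> (max 0 u)"
definition sub_BM where "sub_BM k u j \<omega> = B k \<omega> (max 0 (sub_time k u \<omega>)) j"

lemma sub_time_nonneg: "\<omega> \<in> space M \<Longrightarrow> 0 \<le> sub_time k u \<omega>"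
  unfolding sub_time_def by (rule subordinator_nonneg) auto

lemma measurable_sub_time: "(k, 2) \<in> P \<Longrightarrow> (\<lambda>x. sub_time k (fst x) (snd x)) \<in> borel_measurable ((borel :: real measure) \<Otimes>\<^sub>M sigma_of P)"
  unfolding sub_time_def
  by (rule measurable_right_continuous_process[where f="\<lambda>u \<omega>. S k \<omega> u"]) (use measurable_S_sigma_of subordinator_path in auto)

lemma measurable_BM_joint: "(k, 3) \<in> P \<Longrightarrow> (\<lambda>x. B k (snd x) (max 0 (fst x)) j) \<in> borel_measurable ((borel :: real measure) \<Otimes>\<^sub>M sigma_of P)"
proof (rule measurable_right_continuous_process[where f="\<lambda>u \<omega>. B k \<omega> u j"])
  fix \<omega> u assume "\<omega> \<in> space (sigma_of P)" "0 \<le> (u::real)"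
  then have "continuous_on {0..} (\<lambda>t. B k \<omega> t j)" "u \<in> {0..}" using BM_path[of \<omega> k] by auto
  then have c: "continuous (at u within {0..}) (\<lambda>t. B k \<omega> t j)" by (simp add: continuous_on_eq_continuous_within)
  show "continuous (at_right u) (\<lambda>v. B k \<omega> v j)"
    by (rule continuous_within_subset[OF c]) (use \<open>0 \<le> u\<close> in auto)
qed (use measurable_B_sigma_of in auto)

lemma measurable_sub_BM: "(k, 2) \<in> P \<Longrightarrow> (k, 3) \<in> P \<Longrightarrow> (\<lambda>x. sub_BM k (fst x) j (snd x)) \<in> borel_measurable ((borel :: real measure) \<Otimes>\<^sub>M sigma_of P)"
proof -
  assume a: "(k, 2) \<in> P" "(k, 3) \<in> P"
  have "(\<lambda>x. (sub_time k (fst x) (snd x), snd x)) \<in> measurable (borel \<Otimes>\<^sub>M sigma_of P) (borel \<Otimes>\<^sub>M sigma_of P)"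
    by (intro measurable_Pair measurable_sub_time[OF a(1)] measurable_snd)
  from measurable_compose[OF this measurable_BM_joint[OF a(2)]] show ?thesis unfolding sub_BM_def by simp
qed

lemma measurable_sub_time_comp: "(k, 2) \<in> P \<Longrightarrow> f \<in> borel_measurable N \<Longrightarrow> g \<in> measurable N (sigma_of P) \<Longrightarrow> (\<lambda>x. sub_time k (f x) (g x)) \<in> borel_measurable N"
  using measurable_compose[OF measurable_Pair measurable_sub_time] by simp

lemma measurable_sub_BM_comp: "(k, 2) \<in> P \<Longrightarrow> (k, 3) \<in> P \<Longrightarrow> f \<in> borel_measurable N \<Longrightarrow> g \<in> measurable N (sigma_of P) \<Longrightarrow> (\<lambda>x. sub_BM k (f x) j (g x)) \<in> borel_measurable N"
  using measurable_compose[OF measurable_Pair measurable_sub_BM] by simp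

definition laplace_moment :: "real \<Rightarrow> real \<Rightarrow> ennreal" where
  "laplace_moment a u = (\<integral>\<^sup>+ l\<in>{0<..}. ennreal (exp (- u * \<eta> l) * l powr (a - 1)) \<partial>lborel)"

definition rho_mass :: "real \<Rightarrow> ennreal" where
  "rho_mass T = (\<integral>\<^sup>+ s\<in>{0..T}. ennreal (\<rho> s) \<partial>lborel)"

definition cond1_integral :: "real \<Rightarrow> real \<Rightarrow> ennreal" where
  "cond1_integral p T = (\<integral>\<^sup>+ s\<in>{0..T}. ennreal (1 / \<rho> s powr (p - 1)) \<partial>lborel)"

definition cond2_integrand :: "real \<Rightarrow> real \<Rightarrow> ennreal" where
  "cond2_integrand p u = (\<integral>\<^sup>+ lam\<in>{0<..}. ennreal (exp (- u * \<eta> lam) / \<rho> u powr (p - 1) * lam powr (p / 2 - 1)) \<partial>lborel)"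

definition cond2_integral :: "real \<Rightarrow> real \<Rightarrow> ennreal" where
  "cond2_integral p T = (\<integral>\<^sup>+ s\<in>{0..T}. cond2_integrand p s \<partial>lborel)"

lemma cond1_iff: "cond1 \<rho> p T \<longleftrightarrow> cond1_integral p T < \<infinity>"
  unfolding cond1_def cond1_integral_def ..

lemma cond2_iff: "cond2 \<rho> \<eta> p T \<longleftrightarrow> cond2_integral p T < \<infinity>"
  unfolding cond2_def cond2_integral_def cond2_integrand_def ..

lemma laplace_moment_restrict:
  "laplace_moment a u = (\<integral>\<^sup>+ l. ennreal (exp (- u * (if 0 < l then \<eta> l else 0)) * l powr (a - 1)) * indicator {0<..} l \<partial>lborel)"
  unfolding laplace_moment_def by (intro nn_integral_cong) (auto simp: indicator_def)

lemma cond2_integrand_restrict: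
  "cond2_integrand p u = (\<integral>\<^sup>+ lam. ennreal (exp (- u * (if 0 < lam then \<eta> lam else 0)) / \<rho> u powr (p - 1) * lam powr (p / 2 - 1)) * indicator {0<..} lam \<partial>lborel)"
  unfolding cond2_integrand_def by (intro nn_integral_cong) (auto simp: indicator_def)

lemma measurable_cond2_integrand: "cond2_integrand p \<in> borel_measurable borel"
proof -
  have [measurable]: "(\<lambda>l. if 0 < l then \<eta> l else 0) \<in> borel_measurable borel" by (rule eta_meas)
  have [measurable]: "\<rho> \<in> borel_measurable borel" by (rule rho_meas)
  have "(\<lambda>x. ennreal (exp (- fst x * (if 0 < snd x then \<eta> (snd x) else 0)) / \<rho> (fst x) powr (p - 1) * snd x powr (p / 2 - 1)) * indicator {0<..} (snd x))
     \<in> borel_measurable ((borel :: real measure) \<Otimes>\<^sub>M lborel)"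
    by measurable
  from sigma_finite_measure.borel_measurable_nn_integral_fst[OF sigma_finite_lborel this]
  show ?thesis unfolding cond2_integrand_restrict[abs_def] by simp
qed

lemma cond2_integrand_eq: "0 < \<rho> u \<Longrightarrow> cond2_integrand p u = ennreal (1 / \<rho> u powr (p - 1)) * laplace_moment (p/2) u"
proof -
  assume r: "0 < \<rho> u"
  have [measurable]: "(\<lambda>l. if 0 < l then \<eta> l else 0) \<in> borel_measurable borel" by (rule eta_meas)
  have "cond2_integrand p u = (\<integral>\<^sup>+ l. ennreal (1 / \<rho> u powr (p - 1)) * (ennreal (exp (- u * (if 0 < l then \<eta> l else 0)) * l powr (p/2 - 1)) * indicator {0<..} l) \<partial>lborel)"
    unfolding cond2_integrand_restrict using r by (intro nn_integral_cong) (simp add: ennreal_mult[symmetric] mult_ac)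
  also have "\<dots> = ennreal (1 / \<rho> u powr (p - 1)) * laplace_moment (p/2) u"
    unfolding laplace_moment_restrict by (rule nn_integral_cmult) measurable
  finally show ?thesis .
qed

lemma nn_integral_rho_eq_1: "(\<integral>\<^sup>+ s\<in>{0..}. ennreal (\<rho> s) \<partial>lborel) = 1"
proof -
  have D: "distributed M lborel (tau []) (\<lambda>s. if 0 \<le> s then ennreal (\<rho> s) else 0)" using tau_distr by blast
  then have "distr M lborel (tau []) = density lborel (\<lambda>s. if 0 \<le> s then ennreal (\<rho> s) else 0)"
    and m: "tau [] \<in> measurable M lborel" "(\<lambda>s. if 0 \<le> s then ennreal (\<rho> s) else 0) \<in> borel_measurable lborel"
    unfolding distributed_def by auto
  then have "emeasure (density lborel (\<lambda>s. if 0 \<le> s then ennreal (\<rho> s) else 0)) UNIV = emeasure (distr M lborel (tau [])) UNIV"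
    by simp
  also have "\<dots> = 1" using m by (simp add: emeasure_distr emeasure_space_1)
  finally have "(\<integral>\<^sup>+ s. (if 0 \<le> s then ennreal (\<rho> s) else 0) \<partial>lborel) = 1"
    using m by (simp add: emeasure_density)
  moreover have "(\<lambda>s. (if 0 \<le> s then ennreal (\<rho> s) else 0)) = (\<lambda>s. ennreal (\<rho> s) * indicator {0..} s)"
    by (auto simp: indicator_def)
  ultimately show ?thesis by simp
qed

lemma Fbar_ennreal: "0 \<le> z \<Longrightarrow> ennreal (Fbar \<rho> z) = (\<integral>\<^sup>+ s\<in>{z..}. ennreal (\<rho> s) \<partial>lborel)"
proof -
  assume z: "0 \<le> z"
  have "(\<integral>\<^sup>+ s\<in>{z..}. ennreal (\<rho> s) \<partial>lborel) \<le> (\<integral>\<^sup>+ s\<in>{0..}. ennreal (\<rho> s) \<partial>lborel)"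
    using z by (intro nn_integral_mono) (auto simp: indicator_def)
  then have "(\<integral>\<^sup>+ s\<in>{z..}. ennreal (\<rho> s) \<partial>lborel) \<le> 1" using nn_integral_rho_eq_1 by simp
  then have "(\<integral>\<^sup>+ s\<in>{z..}. ennreal (\<rho> s) \<partial>lborel) < \<top>" using ennreal_one_less_top by (meson le_less_trans)
  then show ?thesis unfolding Fbar_def by simp
qed

lemma Fbar_nonneg: "0 \<le> Fbar \<rho> z" unfolding Fbar_def by simp

lemma Fbar_anti: "0 \<le> a \<Longrightarrow> a \<le> b \<Longrightarrow> Fbar \<rho> b \<le> Fbar \<rho> a"
proof -
  assume ab: "0 \<le> a" "a \<le> b"
  have b0: "0 \<le> b" using ab by simp
  have "ennreal (Fbar \<rho> b) \<le> ennreal (Fbar \<rho> a)"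
    unfolding Fbar_ennreal[OF ab(1)] Fbar_ennreal[OF b0] using ab by (intro nn_integral_mono) (auto simp: indicator_def)
  then show ?thesis using Fbar_nonneg by (simp add: ennreal_le_iff)
qed

lemma Fbar_pos: "0 \<le> z \<Longrightarrow> 0 < Fbar \<rho> z"
proof -
  assume z: "0 \<le> z"
  have "(\<integral>\<^sup>+ s\<in>{z..}. ennreal (\<rho> s) \<partial>lborel) \<noteq> 0"
  proof
    assume "(\<integral>\<^sup>+ s\<in>{z..}. ennreal (\<rho> s) \<partial>lborel) = 0"
    then have "AE s in lborel. ennreal (\<rho> s) * indicator {z..} s = 0"
      using rho_meas by (subst (asm) nn_integral_0_iff_AE) auto
    moreover have pt: "ennreal (\<rho> s) * indicator {z..} s = 0 \<longrightarrow> s \<notin> {z..}" for s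
    proof (intro impI notI)
      assume "ennreal (\<rho> s) * indicator {z..} s = 0" "s \<in> {z..}"
      moreover have "0 < \<rho> s" using rho_pos z \<open>s \<in> {z..}\<close> by auto
      ultimately show False by simp
    qed
    ultimately have "AE s in lborel. s \<notin> {z..}"
      by (rule AE_mp[OF _ AE_I2])
    then have "{z..} \<in> null_sets lborel"
      by (subst AE_iff_null_sets) auto
    moreover have "emeasure lborel {z..z+1} \<le> emeasure lborel {z..}"
      by (intro emeasure_mono) auto
    ultimately show False by (simp add: null_sets_def)
  qed
  then have "0 < ennreal (Fbar \<rho> z)" unfolding Fbar_ennreal[OF z] by (simp add: zero_less_iff_neq_zero)
  then show ?thesis by (simp add: ennreal_less_iff)
qed

lemma measurable_sigma_of_M: "f \<in> measurable (sigma_of P) N \<Longrightarrow> f \<in> measurable M N"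
  by (rule measurable_from_subalg[OF subalgebra_sigma_of])

lemma nn_integral_tau: "g \<in> borel_measurable borel \<Longrightarrow>
   (\<integral>\<^sup>+\<omega>. g (tau r \<omega>) \<partial>M) = (\<integral>\<^sup>+u. ennreal (\<rho> u) * indicator {0..} u * g u \<partial>lborel)"
proof -
  assume g: "g \<in> borel_measurable borel"
  have D: "distributed M lborel (tau r) (\<lambda>s. if 0 \<le> s then ennreal (\<rho> s) else 0)" using tau_distr by blast
  have "(\<integral>\<^sup>+\<omega>. g (tau r \<omega>) \<partial>M) = (\<integral>\<^sup>+u. (if 0 \<le> u then ennreal (\<rho> u) else 0) * g u \<partial>lborel)"
    by (rule distributed_nn_integral[OF D, symmetric]) (use g in simp)
  also have "\<dots> = (\<integral>\<^sup>+u. ennreal (\<rho> u) * indicator {0..} u * g u \<partial>lborel)"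
    by (intro nn_integral_cong) (auto simp: indicator_def)
  finally show ?thesis .
qed

lemma nn_integral_freeze_lifetime:
  assumes Q: "(r, 0) \<notin> Q" and G: "(\<lambda>(u, \<omega>). G u \<omega>) \<in> borel_measurable ((borel :: real measure) \<Otimes>\<^sub>M sigma_of Q)"
  shows "(\<integral>\<^sup>+\<omega>. G (tau r \<omega>) \<omega> \<partial>M) = (\<integral>\<^sup>+u. ennreal (\<rho> u) * indicator {0..} u * (\<integral>\<^sup>+\<omega>'. G u \<omega>' \<partial>M) \<partial>lborel)"
proof -
  have "(\<integral>\<^sup>+\<omega>. G (tau r \<omega>) \<omega> \<partial>M) = (\<integral>\<^sup>+\<omega>. 1 * (\<integral>\<^sup>+\<omega>'. G (tau r \<omega>) \<omega>' \<partial>M) \<partial>M)"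
    using nn_integral_freeze_sigma_of[of "{(r,0)}" Q "\<lambda>_. 1" "tau r" borel G] Q G
      measurable_tau_sigma_of[of r "{(r,0)}"] by simp
  also have "\<dots> = (\<integral>\<^sup>+u. ennreal (\<rho> u) * indicator {0..} u * (\<integral>\<^sup>+\<omega>'. G u \<omega>' \<partial>M) \<partial>lborel)"
  proof -
    have "(\<lambda>x. x) \<in> measurable M (sigma_of Q)"
      using subalgebra_sigma_of[of Q] sets.sets_into_space
      by (auto simp: measurable_def subalgebra_def Int_absorb2)
    then have "(\<lambda>x. (fst x, snd x)) \<in> measurable ((borel :: real measure) \<Otimes>\<^sub>M M) (borel \<Otimes>\<^sub>M sigma_of Q)"
      by (intro measurable_Pair measurable_fst measurable_compose[OF measurable_snd])
    from measurable_compose[OF this G]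
    have "(\<lambda>x. G (fst x) (snd x)) \<in> borel_measurable ((borel :: real measure) \<Otimes>\<^sub>M M)" by simp
    from borel_measurable_nn_integral_fst[OF this]
    have "(\<lambda>u. \<integral>\<^sup>+\<omega>'. G u \<omega>' \<partial>M) \<in> borel_measurable borel" by simp
    then show ?thesis by simp (rule nn_integral_tau)
  qed
  finally show ?thesis .
qed

lemma AE_tau_nonneg: "AE \<omega> in M. \<forall>k. 0 \<le> tau k \<omega>"
proof (subst AE_all_countable, intro allI)
  fix k
  have m: "tau k \<in> borel_measurable M" by (rule measurable_sigma_of_M[OF measurable_tau_sigma_of[of k "{(k,0)}"]]) auto
  have sm: "{\<omega>\<in>space M. tau k \<omega> < 0} \<in> sets M" using m by measurable
  have "emeasure M {\<omega>\<in>space M. tau k \<omega> < 0} = (\<integral>\<^sup>+\<omega>. indicator {\<omega>\<in>space M. tau k \<omega> < 0} \<omega> \<partial>M)"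
    using sm by simp
  also have "\<dots> = (\<integral>\<^sup>+\<omega>. indicator {..<0} (tau k \<omega>) \<partial>M)"
    by (intro nn_integral_cong) (auto simp: indicator_def)
  also have "\<dots> = (\<integral>\<^sup>+u. ennreal (\<rho> u) * indicator {0..} u * indicator {..<0} u \<partial>lborel)"
    by (rule nn_integral_tau) simp
  also have "\<dots> = (\<integral>\<^sup>+(u::real). 0 \<partial>lborel)" by (rule nn_integral_cong) (auto simp: indicator_def)
  also have "\<dots> = 0" by simp
  finally show "AE \<omega> in M. 0 \<le> tau k \<omega>"
    using m by (subst AE_iff_measurable[where N="{\<omega>\<in>space M. tau k \<omega> < 0}"]) (auto simp: not_le)
qed

lemma BM_abs_moment_le:
  assumes v: "0 < v" and q: "0 < q"
  shows "(\<integral>\<^sup>+\<omega>. ennreal (\<bar>B r \<omega> v j\<bar> powr q) \<partial>M) \<le> ennreal (gauss_moment_const q * v powr (q/2))"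
proof (cases "j < d")
  case True
  have Br: "std_BM M d (B r)" using B_BM by blast
  have D: "distributed M lborel (\<lambda>\<omega>. B r \<omega> v j - B r \<omega> 0 j) (\<lambda>y. ennreal (normal_density 0 (sqrt (v - 0)) y))"
    using Br True v unfolding std_BM_def by blast
  have "(\<integral>\<^sup>+\<omega>. ennreal (\<bar>B r \<omega> v j\<bar> powr q) \<partial>M) = (\<integral>\<^sup>+\<omega>. ennreal (\<bar>B r \<omega> v j - B r \<omega> 0 j\<bar> powr q) \<partial>M)"
    by (intro nn_integral_cong) (simp add: BM_path)
  also have "\<dots> \<le> ennreal (gauss_moment_const q * sqrt v powr q)"
    using normal_abs_moment_le[OF D _ q] v by (simp del: diff_0_right)
  also have "sqrt v powr q = v powr (q/2)"
    using v by (simp add: powr_half_sqrt[symmetric] powr_powr)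
  finally show ?thesis .
next
  case False
  then have "(\<integral>\<^sup>+\<omega>. ennreal (\<bar>B r \<omega> v j\<bar> powr q) \<partial>M) = (\<integral>\<^sup>+\<omega>. 0 \<partial>M)"
    by (intro nn_integral_cong) (simp add: BM_path)
  then show ?thesis by simp
qed

lemma BM_ratio_moment_le:
  assumes v: "0 < v" and p: "0 < p"
  shows "(\<integral>\<^sup>+\<omega>. ennreal ((\<bar>B r \<omega> v j\<bar> / v) powr p) \<partial>M) \<le> ennreal (gauss_moment_const p * v powr (-(p/2)))"
proof -
  have [measurable]: "(\<lambda>\<omega>. B r \<omega> v j) \<in> borel_measurable M"
    using measurable_sigma_of_M[OF measurable_B_sigma_of[of r "{(r,3)}" v j]] by simp
  have "(\<integral>\<^sup>+\<omega>. ennreal ((\<bar>B r \<omega> v j\<bar> / v) powr p) \<partial>M) = (\<integral>\<^sup>+\<omega>. ennreal (1 / v powr p) * ennreal (\<bar>B r \<omega> v j\<bar> powr p) \<partial>M)"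
    using v by (intro nn_integral_cong) (simp add: powr_divide ennreal_mult[symmetric])
  also have "\<dots> = ennreal (1 / v powr p) * (\<integral>\<^sup>+\<omega>. ennreal (\<bar>B r \<omega> v j\<bar> powr p) \<partial>M)"
    by (rule nn_integral_cmult) measurable
  also have "\<dots> \<le> ennreal (1 / v powr p) * ennreal (gauss_moment_const p * v powr (p/2))"
    by (intro mult_left_mono BM_abs_moment_le v p) simp
  also have "\<dots> = ennreal (gauss_moment_const p * v powr (-(p/2)))"
  proof -
    have "1 / v powr p * (gauss_moment_const p * v powr (p/2)) = gauss_moment_const p * v powr (-(p/2))"
      using v by (simp add: powr_minus_divide field_simps powr_add[symmetric] flip: powr_add)
    then show ?thesis using v gauss_moment_const_pos[of p] by (simp add: ennreal_mult[symmetric])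
  qed
  finally show ?thesis .
qed

lemma BM_boundary_moment_le:
  assumes v: "0 < v" and Lc: "0 \<le> Lc" and p: "0 < p"
  shows "(\<integral>\<^sup>+\<omega>. ennreal ((Lc * eucl_norm d (\<lambda>j. B r \<omega> v j) * \<bar>B r \<omega> v t\<bar> / v) powr p) \<partial>M)
    \<le> ennreal (Lc powr p * gauss_moment_const (2 * p) * (real d powr (2 * p) * real d + 1))"
proof -
  define C2 where "C2 = gauss_moment_const (2 * p)"
  have C2: "0 < C2" unfolding C2_def by (rule gauss_moment_const_pos)
  define c where "c = Lc powr p / v powr p"
  have c: "0 \<le> c" unfolding c_def by simp
  have [measurable]: "(\<lambda>\<omega>. B r \<omega> v j) \<in> borel_measurable M" for j
    using measurable_sigma_of_M[OF measurable_B_sigma_of[of r "{(r,3)}" v j]] by simp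
  have mom: "(\<integral>\<^sup>+\<omega>. ennreal (\<bar>B r \<omega> v j\<bar> powr (2 * p)) \<partial>M) \<le> ennreal (C2 * v powr p)" for j
    using BM_abs_moment_le[OF v, of "2 * p" r j] p unfolding C2_def by simp
  have "(\<integral>\<^sup>+\<omega>. ennreal ((Lc * eucl_norm d (\<lambda>j. B r \<omega> v j) * \<bar>B r \<omega> v t\<bar> / v) powr p) \<partial>M)
      \<le> (\<integral>\<^sup>+\<omega>. ennreal c * (ennreal (real d powr (2 * p)) * (\<Sum>j<d. ennreal (\<bar>B r \<omega> v j\<bar> powr (2 * p)))
          + ennreal (\<bar>B r \<omega> v t\<bar> powr (2 * p))) \<partial>M)"
  proof (rule nn_integral_mono)
    fix \<omega>
    show "ennreal ((Lc * eucl_norm d (\<lambda>j. B r \<omega> v j) * \<bar>B r \<omega> v t\<bar> / v) powr p)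
        \<le> ennreal c * (ennreal (real d powr (2 * p)) * (\<Sum>j<d. ennreal (\<bar>B r \<omega> v j\<bar> powr (2 * p)))
          + ennreal (\<bar>B r \<omega> v t\<bar> powr (2 * p)))"
    proof -
      have "ennreal ((Lc * eucl_norm d (\<lambda>j. B r \<omega> v j) * \<bar>B r \<omega> v t\<bar> / v) powr p)
          \<le> ennreal (c * (real d powr (2 * p) * (\<Sum>j<d. \<bar>B r \<omega> v j\<bar> powr (2 * p)) + \<bar>B r \<omega> v t\<bar> powr (2 * p)))"
        unfolding c_def using p by (intro ennreal_leI boundary_ratio_powr_le v Lc) simp
      also have "\<dots> = ennreal c * (ennreal (real d powr (2 * p)) * ennreal (\<Sum>j<d. \<bar>B r \<omega> v j\<bar> powr (2 * p))
          + ennreal (\<bar>B r \<omega> v t\<bar> powr (2 * p)))"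
        using c by (simp add: ennreal_mult' ennreal_plus sum_nonneg del: sum_ennreal)
      finally show ?thesis by simp
    qed
  qed
  also have "\<dots> = ennreal c * (ennreal (real d powr (2 * p)) * (\<Sum>j<d. \<integral>\<^sup>+\<omega>. ennreal (\<bar>B r \<omega> v j\<bar> powr (2 * p)) \<partial>M)
      + (\<integral>\<^sup>+\<omega>. ennreal (\<bar>B r \<omega> v t\<bar> powr (2 * p)) \<partial>M))"
    by (simp add: nn_integral_cmult nn_integral_add nn_integral_sum del: sum_ennreal)
  also have "\<dots> \<le> ennreal c * (ennreal (real d powr (2 * p)) * (\<Sum>j<d. ennreal (C2 * v powr p)) + ennreal (C2 * v powr p))"
    by (intro mult_left_mono add_mono sum_mono mom) auto
  also have "\<dots> = ennreal (c * (real d powr (2 * p) * (real d * (C2 * v powr p)) + C2 * v powr p))"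
    using C2 c by (simp add: ennreal_mult ennreal_plus ennreal_of_nat_eq_real_of_nat)
  also have "c * (real d powr (2 * p) * (real d * (C2 * v powr p)) + C2 * v powr p)
      = Lc powr p * C2 * (real d powr (2 * p) * real d + 1)"
    using v unfolding c_def by (simp add: field_simps)
  finally show ?thesis unfolding C2_def .
qed

lemma nn_integral_exp_subordinator:
  assumes l: "0 < l" and u: "0 \<le> u"
  shows "(\<integral>\<^sup>+\<omega>. ennreal (exp (- l * S r \<omega> u)) \<partial>M) = ennreal (exp (- u * \<eta> l))"
proof -
  have m: "(\<lambda>\<omega>. S r \<omega> u) \<in> borel_measurable M" by (rule measurable_sigma_of_M[OF measurable_S_sigma_of[of r "{(r,2)}"]]) auto
  have int: "integrable M (\<lambda>\<omega>. exp (- l * S r \<omega> u))"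
  proof (rule integrable_const_bound[where B=1])
    show "AE \<omega> in M. norm (exp (- l * S r \<omega> u)) \<le> 1"
      using subordinator_nonneg l u by (auto intro!: AE_I2 simp: mult_nonneg_nonneg)
  qed (use m in simp)
  have "(\<integral>\<^sup>+\<omega>. ennreal (exp (- l * S r \<omega> u)) \<partial>M) = ennreal (\<integral>\<omega>. exp (- l * S r \<omega> u) \<partial>M)"
    by (rule nn_integral_eq_integral[OF int]) simp
  also have "(\<integral>\<omega>. exp (- l * S r \<omega> u) \<partial>M) = exp (- u * \<eta> l)"
    using S_sub l u unfolding subordinator_def by blast
  finally show ?thesis .
qed
lemma subordinator_neg_moment_le:
  assumes u: "0 \<le> u" and a: "0 < a"
  shows "(\<integral>\<^sup>+\<omega>. ennreal (if 0 < S r \<omega> u then S r \<omega> u powr (-a) else 0) \<partial>M) \<le> ennreal (neg_moment_const a) * laplace_moment a u"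
proof -
  have m: "(\<lambda>\<omega>. S r \<omega> u) \<in> borel_measurable M" by (rule measurable_sigma_of_M[OF measurable_S_sigma_of[of r "{(r,2)}"]]) auto
  interpret pair_sigma_finite M lborel ..
  have "(\<integral>\<^sup>+\<omega>. ennreal (if 0 < S r \<omega> u then S r \<omega> u powr (-a) else 0) \<partial>M)
     \<le> (\<integral>\<^sup>+\<omega>. ennreal (neg_moment_const a) * (\<integral>\<^sup>+ l. ennreal (l powr (a - 1) * exp (- l * S r \<omega> u)) * indicator {0<..} l \<partial>lborel) \<partial>M)"
  proof (rule nn_integral_mono)
    fix \<omega> assume "\<omega> \<in> space M"
    show "ennreal (if 0 < S r \<omega> u then S r \<omega> u powr (-a) else 0) \<le> ennreal (neg_moment_const a) * (\<integral>\<^sup>+ l. ennreal (l powr (a - 1) * exp (- l * S r \<omega> u)) * indicator {0<..} l \<partial>lborel)"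
    proof (cases "0 < S r \<omega> u")
      case True
      then show ?thesis using powr_neg_le_laplace_integral[OF True a] by simp
    qed simp
  qed
  also have "\<dots> = ennreal (neg_moment_const a) * (\<integral>\<^sup>+\<omega>. (\<integral>\<^sup>+ l. ennreal (l powr (a - 1) * exp (- l * S r \<omega> u)) * indicator {0<..} l \<partial>lborel) \<partial>M)"
    by (rule nn_integral_cmult) (use m in measurable)
  also have "(\<integral>\<^sup>+\<omega>. (\<integral>\<^sup>+ l. ennreal (l powr (a - 1) * exp (- l * S r \<omega> u)) * indicator {0<..} l \<partial>lborel) \<partial>M)
     = (\<integral>\<^sup>+ l. (\<integral>\<^sup>+\<omega>. ennreal (l powr (a - 1) * exp (- l * S r \<omega> u)) * indicator {0<..} l \<partial>M) \<partial>lborel)"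
    by (rule Fubini'[symmetric]) (use m in measurable)
  also have "\<dots> = (\<integral>\<^sup>+ l. ennreal (exp (- u * \<eta> l) * l powr (a - 1)) * indicator {0<..} l \<partial>lborel)"
  proof (rule nn_integral_cong)
    fix l :: real
    show "(\<integral>\<^sup>+\<omega>. ennreal (l powr (a - 1) * exp (- l * S r \<omega> u)) * indicator {0<..} l \<partial>M) = ennreal (exp (- u * \<eta> l) * l powr (a - 1)) * indicator {0<..} l"
    proof (cases "0 < l")
      case True
      have "(\<integral>\<^sup>+\<omega>. ennreal (l powr (a - 1) * exp (- l * S r \<omega> u)) * indicator {0<..} l \<partial>M)
          = (\<integral>\<^sup>+\<omega>. ennreal (l powr (a - 1)) * ennreal (exp (- l * S r \<omega> u)) \<partial>M)"
        using True by (intro nn_integral_cong) (simp add: ennreal_mult)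
      also have "\<dots> = ennreal (l powr (a - 1)) * (\<integral>\<^sup>+\<omega>. ennreal (exp (- l * S r \<omega> u)) \<partial>M)"
        by (rule nn_integral_cmult) (use m in measurable)
      also have "\<dots> = ennreal (exp (- u * \<eta> l) * l powr (a - 1)) * indicator {0<..} l"
        unfolding nn_integral_exp_subordinator[OF True u] using True by (simp add: ennreal_mult mult.commute)
      finally show ?thesis .
    qed simp
  qed
  finally show ?thesis unfolding laplace_moment_def .
qed

lemma AE_idx_in:
  assumes L_fin: "finite L" and q_sum: "(\<Sum>l\<in>L. q l) = 1"
    and idx_distr: "\<forall>k. \<forall>l\<in>L. measure M {\<omega>\<in>space M. idx k \<omega> = l} = q l"
  shows "AE \<omega> in M. \<forall>k. idx k \<omega> \<in> L"
proof (subst AE_all_countable, intro allI)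
  fix k
  have im: "idx k \<in> measurable M (count_space UNIV)" using measurable_sigma_of_M[OF measurable_idx_sigma_of[of k "{(k,1)}"]] by simp
  have sets: "{\<omega>\<in>space M. idx k \<omega> = l} \<in> sets M" for l using im by measurable
  have "measure M (\<Union>l\<in>L. {\<omega>\<in>space M. idx k \<omega> = l}) = (\<Sum>l\<in>L. measure M {\<omega>\<in>space M. idx k \<omega> = l})"
    by (rule finite_measure_finite_Union[OF L_fin]) (auto simp: sets disjoint_family_on_def)
  also have "\<dots> = 1" using idx_distr q_sum by simp
  finally have m1: "measure M {\<omega>\<in>space M. idx k \<omega> \<in> L} = 1"
    by (simp add: Collect_bex_eq[symmetric] conj_commute)
  have sL: "{\<omega>\<in>space M. idx k \<omega> \<in> L} \<in> sets M" using im by measurable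
  show "AE \<omega> in M. idx k \<omega> \<in> L"
    using prob_space.AE_prob_1[OF prob_space_axioms m1] by simp
qed

end

section \<open>Moment bounds along the tree\<close>

locale majorant_setup = particle_system +
  fixes T p Cc qmin Cphi Lc :: real
    and L :: "nat list set" and c :: "nat list \<Rightarrow> real \<Rightarrow> (nat \<Rightarrow> real) \<Rightarrow> real"
    and q :: "nat list \<Rightarrow> real" and \<phi> :: "(nat \<Rightarrow> real) \<Rightarrow> real"
  assumes T: "0 < T" and p: "1 \<le> p" and Cc: "0 \<le> Cc" and qmin: "0 < qmin" and Cphi: "0 \<le> Cphi" and Lc: "0 \<le> Lc"
    and c_bound: "\<forall>l\<in>L. \<forall>s\<in>{0..T}. \<forall>y\<in>Rd d. \<bar>c l s y\<bar> \<le> Cc"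
    and q_lower: "\<forall>l\<in>L. qmin \<le> q l"
    and phi_bound: "\<forall>y\<in>Rd d. \<bar>\<phi> y\<bar> \<le> Cphi"
    and phi_lipschitz: "\<forall>y\<in>Rd d. \<forall>z\<in>Rd d. \<bar>\<phi> y - \<phi> z\<bar> \<le> Lc * eucl_norm d (\<lambda>j. y j - z j)"
begin

definition weight_bound where "weight_bound th k u \<omega> = (if th = 0 then 1 else \<bar>sub_BM k u (th - 1) \<omega>\<bar> / sub_time k u \<omega>)"
definition boundary_bound where "boundary_bound th k u \<omega> = (if th = 0 then Cphi else Lc * eucl_norm d (\<lambda>j. sub_BM k u j \<omega>) * \<bar>sub_BM k u (th - 1) \<omega>\<bar> / sub_time k u \<omega>)"
definition tail_prob where "tail_prob s = Fbar \<rho> (max 0 (T - s))"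
definition factor_bound where "factor_bound k s th \<omega> = (if s + tau k \<omega> < T then (Cc * weight_bound th k (tau k \<omega>) \<omega> / (qmin * \<rho> (tau k \<omega>))) powr p
     else (boundary_bound th k (T - s) \<omega> / tail_prob s) powr p)"
definition factor_majorant where "factor_majorant k s th \<omega> = 2 * max 1 (factor_bound k s th \<omega>)"
text \<open>\<open>tree_majorant n [] t i\<close> is the majorant \<open>\<psi>\<^sub>n\<close> of the overview.\<close>
definition tree_majorant where "tree_majorant n r s th \<omega> = majorant (\<lambda>k s th. factor_majorant k s th \<omega>) (\<lambda>k. tau k \<omega>) (\<lambda>k. idx k \<omega>) T n r s th"

lemma factor_bound_nonneg: "0 \<le> factor_bound k s th \<omega>" unfolding factor_bound_def by simp
lemma factor_majorant_ge_2: "2 \<le> factor_majorant k s th \<omega>" unfolding factor_majorant_def by simp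
lemma tree_majorant_ge_1: "1 \<le> tree_majorant n r s th \<omega>" unfolding tree_majorant_def by (rule majorant_ge_1) (simp add: factor_majorant_def)

lemma tree_majorant_Suc: "tree_majorant (Suc n) r s th \<omega> = factor_majorant r s th \<omega> *
  (if s + tau r \<omega> < T then (\<Prod>j<sum_list (idx r \<omega>). tree_majorant n (r @ [j]) (s + tau r \<omega>) (mark_of (idx r \<omega>) j) \<omega>) else 1)"
  unfolding tree_majorant_def by simp

lemma tail_prob_mono: "mono tail_prob"
proof (rule monoI)
  fix a b :: real assume "a \<le> b"
  then show "tail_prob a \<le> tail_prob b" unfolding tail_prob_def by (intro Fbar_anti) auto
qed

lemma measurable_tail_prob[measurable]: "tail_prob \<in> borel_measurable borel"
  by (rule borel_measurable_mono[OF tail_prob_mono])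

lemma measurable_factor_bound: "(\<lambda>x. factor_bound k (fst x) th (snd x)) \<in> borel_measurable ((borel :: real measure) \<Otimes>\<^sub>M sigma_of ({k} \<times> UNIV))"
proof -
  let ?N = "(borel :: real measure) \<Otimes>\<^sub>M sigma_of ({k} \<times> UNIV)"
  have snd: "snd \<in> measurable ?N (sigma_of ({k} \<times> UNIV))" by simp
  have t[measurable]: "(\<lambda>x. tau k (snd x)) \<in> borel_measurable ?N"
    by (rule measurable_compose[OF snd measurable_tau_sigma_of]) auto
  have r[measurable]: "\<rho> \<in> borel_measurable borel" by (rule rho_meas)
  have y1[measurable]: "(\<lambda>x. sub_BM k (tau k (snd x)) j (snd x)) \<in> borel_measurable ?N" for j
    by (rule measurable_sub_BM_comp[OF _ _ t snd]) auto
  have s1[measurable]: "(\<lambda>x. sub_time k (tau k (snd x)) (snd x)) \<in> borel_measurable ?N"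
    by (rule measurable_sub_time_comp[OF _ t snd]) auto
  have y2[measurable]: "(\<lambda>x. sub_BM k (T - fst x) j (snd x)) \<in> borel_measurable ?N" for j
    by (rule measurable_sub_BM_comp[OF _ _ _ snd]) auto
  have s2[measurable]: "(\<lambda>x. sub_time k (T - fst x) (snd x)) \<in> borel_measurable ?N"
    by (rule measurable_sub_time_comp[OF _ _ snd]) auto
  show ?thesis unfolding factor_bound_def weight_bound_def boundary_bound_def eucl_norm_def by measurable
qed

lemma measurable_factor_majorant: "(\<lambda>x. factor_majorant k (fst x) th (snd x)) \<in> borel_measurable ((borel :: real measure) \<Otimes>\<^sub>M sigma_of ({k} \<times> UNIV))"
  unfolding factor_majorant_def using measurable_factor_bound by measurable

definition subtree_comps where "subtree_comps r = {k. \<exists>k'. k = r @ k'} \<times> (UNIV :: nat set)"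
definition strict_subtree_comps where "strict_subtree_comps r = {k. \<exists>j k'. k = r @ (j # k')} \<times> (UNIV :: nat set)"

lemma subtree_comps_child_subset_strict: "subtree_comps (r @ [j]) \<subseteq> strict_subtree_comps r" unfolding subtree_comps_def strict_subtree_comps_def by auto
lemma subtree_comps_child_subset: "subtree_comps (r @ [j]) \<subseteq> subtree_comps r" unfolding subtree_comps_def by auto
lemma root_comps_subset_subtree: "{r} \<times> UNIV \<subseteq> subtree_comps r" unfolding subtree_comps_def by auto
lemma root_comps_disjoint_strict: "({r} \<times> UNIV) \<inter> strict_subtree_comps r = {}" unfolding strict_subtree_comps_def by auto
lemma disjoint_family_subtree_comps_children: "disjoint_family_on (\<lambda>j. subtree_comps (r @ [j])) J" unfolding disjoint_family_on_def subtree_comps_def by auto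

lemma measurable_tree_majorant: "(\<lambda>x. tree_majorant n r (fst x) th (snd x)) \<in> borel_measurable ((borel :: real measure) \<Otimes>\<^sub>M sigma_of (subtree_comps r))"
proof (induction n arbitrary: r th)
  case 0 then show ?case by (simp add: tree_majorant_def)
next
  case (Suc n)
  let ?N = "(borel :: real measure) \<Otimes>\<^sub>M sigma_of (subtree_comps r)"
  have snd: "snd \<in> measurable ?N (sigma_of (subtree_comps r))" by simp
  have t[measurable]: "(\<lambda>x. tau r (snd x)) \<in> borel_measurable ?N"
    by (rule measurable_compose[OF snd measurable_tau_sigma_of]) (auto simp: subtree_comps_def)
  have i: "(\<lambda>x. idx r (snd x)) \<in> measurable ?N (count_space UNIV)"
    by (rule measurable_compose[OF snd measurable_idx_sigma_of]) (auto simp: subtree_comps_def)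
  have a: "(\<lambda>x. factor_majorant r (fst x) th (snd x)) \<in> borel_measurable ?N"
    by (rule measurable_pair_sigma_of_mono[OF root_comps_subset_subtree measurable_factor_majorant])
  have ch: "(\<lambda>x. tree_majorant n (r @ [j]) (fst x + tau r (snd x)) th' (snd x)) \<in> borel_measurable ?N" for j th'
  proof -
    have "(\<lambda>x. (fst x + tau r (snd x), snd x)) \<in> measurable ?N (borel \<Otimes>\<^sub>M sigma_of (subtree_comps (r @ [j])))"
      by (intro measurable_Pair measurable_compose[OF snd measurable_ident_sigma_of[OF subtree_comps_child_subset]]) auto
    from measurable_compose[OF this Suc.IH[of "r @ [j]" th']] show ?thesis by simp
  qed
  have "(\<lambda>x. (\<lambda>l. if fst x + tau r (snd x) < T then (\<Prod>j<sum_list l. tree_majorant n (r @ [j]) (fst x + tau r (snd x)) (mark_of l j) (snd x)) else 1) (idx r (snd x))) \<in> borel_measurable ?N"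
  proof (rule measurable_compose_countable[OF _ i])
    fix l :: "nat list"
    show "(\<lambda>x. if fst x + tau r (snd x) < T then (\<Prod>j<sum_list l. tree_majorant n (r @ [j]) (fst x + tau r (snd x)) (mark_of l j) (snd x)) else 1) \<in> borel_measurable ?N"
      using ch by measurable
  qed
  then have "(\<lambda>x. factor_majorant r (fst x) th (snd x) * (if fst x + tau r (snd x) < T then (\<Prod>j<sum_list (idx r (snd x)). tree_majorant n (r @ [j]) (fst x + tau r (snd x)) (mark_of (idx r (snd x)) j) (snd x)) else 1)) \<in> borel_measurable ?N"
    using a by measurable
  then show ?case by (simp add: tree_majorant_Suc)
qed

lemma weight_moment_le:
  assumes u: "0 \<le> u"
  shows "(\<integral>\<^sup>+\<omega>. ennreal ((\<bar>sub_BM r u th \<omega>\<bar> / sub_time r u \<omega>) powr p) \<partial>M) \<le> ennreal (weight_moment_const p) * laplace_moment (p/2) u"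
proof -
  have p0: "0 < p" using p by simp
  define G where "G v \<omega> = ennreal ((\<bar>B r \<omega> (max 0 v) th\<bar> / v) powr p)" for v \<omega>
  have Gm: "(\<lambda>(z, \<omega>). G z \<omega>) \<in> borel_measurable ((borel :: real measure) \<Otimes>\<^sub>M sigma_of {(r,3)})"
  proof -
    have [measurable]: "(\<lambda>x. B r (snd x) (max 0 (fst x)) th) \<in> borel_measurable ((borel :: real measure) \<Otimes>\<^sub>M sigma_of {(r,3)})"
      by (rule measurable_BM_joint) simp
    show ?thesis unfolding G_def split_beta by measurable
  qed
  have Zm: "sub_time r u \<in> borel_measurable (sigma_of {(r,2)})"
    using measurable_sub_time_comp[of r "{(r,2)}" "\<lambda>_. u" "sigma_of {(r,2)}" "\<lambda>\<omega>. \<omega>"] by simp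
  have [measurable]: "(\<lambda>\<omega>. S r \<omega> u) \<in> borel_measurable M"
    by (rule measurable_sigma_of_M[OF measurable_S_sigma_of[of r "{(r,2)}"]]) auto
  have "(\<integral>\<^sup>+\<omega>. ennreal ((\<bar>sub_BM r u th \<omega>\<bar> / sub_time r u \<omega>) powr p) \<partial>M) = (\<integral>\<^sup>+\<omega>. 1 * G (sub_time r u \<omega>) \<omega> \<partial>M)"
    unfolding G_def sub_BM_def by simp
  also have "\<dots> = (\<integral>\<^sup>+\<omega>. 1 * (\<integral>\<^sup>+\<omega>'. G (sub_time r u \<omega>) \<omega>' \<partial>M) \<partial>M)"
    by (rule nn_integral_freeze_sigma_of[OF _ _ Zm Gm]) auto
  also have "\<dots> \<le> (\<integral>\<^sup>+\<omega>. ennreal (gauss_moment_const p) * ennreal (if 0 < S r \<omega> u then S r \<omega> u powr (-(p/2)) else 0) \<partial>M)"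
  proof (rule nn_integral_mono)
    fix \<omega> assume \<omega>: "\<omega> \<in> space M"
    have v: "sub_time r u \<omega> = S r \<omega> u" unfolding sub_time_def using u by simp
    show "1 * (\<integral>\<^sup>+\<omega>'. G (sub_time r u \<omega>) \<omega>' \<partial>M) \<le> ennreal (gauss_moment_const p) * ennreal (if 0 < S r \<omega> u then S r \<omega> u powr (-(p/2)) else 0)"
    proof (cases "0 < S r \<omega> u")
      case True
      then show ?thesis
        using BM_ratio_moment_le[OF True p0, of r th] gauss_moment_const_pos[of p]
        unfolding G_def v by (simp add: ennreal_mult[symmetric])
    next
      case False
      then have "S r \<omega> u = 0" using subordinator_nonneg[OF \<omega> u, of r] by simp
      then show ?thesis using v p0 unfolding G_def by simp
    qed
  qed
  also have "\<dots> = ennreal (gauss_moment_const p) * (\<integral>\<^sup>+\<omega>. ennreal (if 0 < S r \<omega> u then S r \<omega> u powr (-(p/2)) else 0) \<partial>M)"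
    by (rule nn_integral_cmult) measurable
  also have "\<dots> \<le> ennreal (gauss_moment_const p) * (ennreal (neg_moment_const (p/2)) * laplace_moment (p/2) u)"
    by (intro mult_left_mono subordinator_neg_moment_le u) (use p0 in auto)
  also have "\<dots> = ennreal (weight_moment_const p) * laplace_moment (p/2) u"
    using gauss_moment_const_pos[of p]
    by (simp add: weight_moment_const_def ennreal_mult mult.assoc neg_moment_const_def)
  finally show ?thesis .
qed

lemma interior_density_identity:
  assumes "0 \<le> u"
  shows "\<rho> u * (Cc / (qmin * \<rho> u)) powr p = (Cc/qmin) powr p * (1 / \<rho> u powr (p - 1))"
  using mult_powr_div_eq[OF _ Cc qmin] rho_pos assms by auto

lemma interior_factor_moment_le_mark_0:
  assumes s: "0 \<le> s"
  shows "(\<integral>\<^sup>+\<omega>. ennreal (if s + tau r \<omega> < T then (Cc / (qmin * \<rho> (tau r \<omega>))) powr p else 0) \<partial>M)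
     \<le> ennreal ((Cc/qmin) powr p) * cond1_integral p T"
proof -
  have [measurable]: "\<rho> \<in> borel_measurable borel" by (rule rho_meas)
  have "(\<integral>\<^sup>+\<omega>. ennreal (if s + tau r \<omega> < T then (Cc / (qmin * \<rho> (tau r \<omega>))) powr p else 0) \<partial>M)
      = (\<integral>\<^sup>+u. ennreal (\<rho> u) * indicator {0..} u * ennreal (if s + u < T then (Cc / (qmin * \<rho> u)) powr p else 0) \<partial>lborel)"
    by (rule nn_integral_tau[where g="\<lambda>u. ennreal (if s + u < T then (Cc / (qmin * \<rho> u)) powr p else 0)"]) measurable
  also have "\<dots> \<le> (\<integral>\<^sup>+u. ennreal ((Cc/qmin) powr p) * (ennreal (1 / \<rho> u powr (p - 1)) * indicator {0..T} u) \<partial>lborel)"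
  proof (rule nn_integral_mono)
    fix u :: real
    show "ennreal (\<rho> u) * indicator {0..} u * ennreal (if s + u < T then (Cc / (qmin * \<rho> u)) powr p else 0)
        \<le> ennreal ((Cc/qmin) powr p) * (ennreal (1 / \<rho> u powr (p - 1)) * indicator {0..T} u)"
    proof (cases "0 \<le> u \<and> s + u < T")
      case True
      then have "0 < \<rho> u" using rho_pos by auto
      then show ?thesis using True s interior_density_identity[of u]
        by (simp add: ennreal_mult[symmetric] indicator_def)
    qed (auto simp: indicator_def)
  qed
  also have "\<dots> = ennreal ((Cc/qmin) powr p) * cond1_integral p T"
    unfolding cond1_integral_def by (rule nn_integral_cmult) measurable
  finally show ?thesis .
qed

lemma interior_integrand_le:
  assumes s: "0 \<le> s"
  shows "ennreal (\<rho> u) * indicator {0..} u * (ennreal (if s + u < T then (Cc / (qmin * \<rho> u)) powr p else 0)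
      * (ennreal (weight_moment_const p) * laplace_moment (p/2) u))
    \<le> ennreal ((Cc/qmin) powr p * weight_moment_const p) * (cond2_integrand p u * indicator {0..T} u)"
proof (cases "0 \<le> u \<and> s + u < T")
  case True
  then have r0: "0 < \<rho> u" using rho_pos by auto
  have "ennreal (\<rho> u) * indicator {0..} u * (ennreal (if s + u < T then (Cc / (qmin * \<rho> u)) powr p else 0)
      * (ennreal (weight_moment_const p) * laplace_moment (p/2) u))
      = ennreal (\<rho> u * (Cc / (qmin * \<rho> u)) powr p) * ennreal (weight_moment_const p) * laplace_moment (p/2) u"
    using True r0 by (simp add: indicator_def ennreal_mult mult_ac)
  also have "\<rho> u * (Cc / (qmin * \<rho> u)) powr p = (Cc/qmin) powr p * (1 / \<rho> u powr (p - 1))"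
    using True by (simp add: interior_density_identity)
  also have "ennreal ((Cc/qmin) powr p * (1 / \<rho> u powr (p - 1))) * ennreal (weight_moment_const p) * laplace_moment (p/2) u
      = ennreal ((Cc/qmin) powr p) * ennreal (weight_moment_const p) * (ennreal (1 / \<rho> u powr (p - 1)) * laplace_moment (p/2) u)"
    by (simp only: ennreal_mult[of "(Cc/qmin) powr p" "1 / \<rho> u powr (p - 1)"] powr_ge_zero divide_nonneg_nonneg
        zero_le_one mult_ac simp_thms)
  also have "\<dots> = ennreal ((Cc/qmin) powr p * weight_moment_const p) * (cond2_integrand p u * indicator {0..T} u)"
    using True s r0 weight_moment_const_nonneg[of p] by (simp add: cond2_integrand_eq indicator_def ennreal_mult)
  finally show ?thesis by simp
qed (auto simp: indicator_def)

lemma interior_factor_moment_le_mark_nonzero: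
  assumes s: "0 \<le> s" and th: "th \<noteq> 0"
  shows "(\<integral>\<^sup>+\<omega>. ennreal (if s + tau r \<omega> < T then (Cc * weight_bound th r (tau r \<omega>) \<omega> / (qmin * \<rho> (tau r \<omega>))) powr p else 0) \<partial>M)
     \<le> ennreal ((Cc/qmin) powr p * weight_moment_const p) * cond2_integral p T"
proof -
  have [measurable]: "\<rho> \<in> borel_measurable borel" by (rule rho_meas)
  define g where "g u = (if s + u < T then (Cc / (qmin * \<rho> u)) powr p else 0)" for u
  define W where "W u \<omega> = (\<bar>sub_BM r u (th - 1) \<omega>\<bar> / sub_time r u \<omega>) powr p" for u \<omega>
  have [measurable]: "g \<in> borel_measurable borel" unfolding g_def by measurable
  have Wm: "(\<lambda>(u, \<omega>). ennreal (W u \<omega>)) \<in> borel_measurable ((borel :: real measure) \<Otimes>\<^sub>M sigma_of {(r,2),(r,3)})"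
  proof -
    have [measurable]: "(\<lambda>x. sub_BM r (fst x) (th - 1) (snd x)) \<in> borel_measurable ((borel :: real measure) \<Otimes>\<^sub>M sigma_of {(r,2),(r,3)})"
      by (rule measurable_sub_BM) auto
    have [measurable]: "(\<lambda>x. sub_time r (fst x) (snd x)) \<in> borel_measurable ((borel :: real measure) \<Otimes>\<^sub>M sigma_of {(r,2),(r,3)})"
      by (rule measurable_sub_time) auto
    show ?thesis unfolding W_def split_beta by measurable
  qed
  then have [measurable]: "(\<lambda>x. ennreal (W (fst x) (snd x))) \<in> borel_measurable ((borel :: real measure) \<Otimes>\<^sub>M sigma_of {(r,2),(r,3)})"
    by (simp add: split_beta)
  have Wu: "(\<lambda>\<omega>. ennreal (W u \<omega>)) \<in> borel_measurable M" for u
    using measurable_sigma_of_M[OF measurable_Pair2[OF Wm, of u]] by simp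
  have "(\<integral>\<^sup>+\<omega>. ennreal (if s + tau r \<omega> < T then (Cc * weight_bound th r (tau r \<omega>) \<omega> / (qmin * \<rho> (tau r \<omega>))) powr p else 0) \<partial>M)
      = (\<integral>\<^sup>+\<omega>. ennreal (g (tau r \<omega>)) * ennreal (W (tau r \<omega>) \<omega>) \<partial>M)"
  proof (rule nn_integral_cong_AE)
    show "AE \<omega> in M. ennreal (if s + tau r \<omega> < T then (Cc * weight_bound th r (tau r \<omega>) \<omega> / (qmin * \<rho> (tau r \<omega>))) powr p else 0)
        = ennreal (g (tau r \<omega>)) * ennreal (W (tau r \<omega>) \<omega>)"
      using AE_tau_nonneg AE_space
    proof eventually_elim
      case (elim \<omega>)
      then have "0 < \<rho> (tau r \<omega>)" and "0 \<le> sub_time r (tau r \<omega>) \<omega>"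
        using rho_pos sub_time_nonneg by auto
      then show ?case
        using th Cc qmin unfolding g_def W_def weight_bound_def
        by (simp add: ennreal_mult[symmetric] powr_mult[symmetric] mult_ac)
    qed
  qed
  also have "\<dots> = (\<integral>\<^sup>+u. ennreal (\<rho> u) * indicator {0..} u * (\<integral>\<^sup>+\<omega>'. ennreal (g u) * ennreal (W u \<omega>') \<partial>M) \<partial>lborel)"
    by (rule nn_integral_freeze_lifetime[where Q="{(r,2),(r,3)}" and G="\<lambda>u \<omega>. ennreal (g u) * ennreal (W u \<omega>)"]) measurable
  also have "\<dots> \<le> (\<integral>\<^sup>+u. ennreal (\<rho> u) * indicator {0..} u * (ennreal (g u) * (ennreal (weight_moment_const p) * laplace_moment (p/2) u)) \<partial>lborel)"
  proof (intro nn_integral_mono)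
    fix u :: real
    show "ennreal (\<rho> u) * indicator {0..} u * (\<integral>\<^sup>+\<omega>'. ennreal (g u) * ennreal (W u \<omega>') \<partial>M)
        \<le> ennreal (\<rho> u) * indicator {0..} u * (ennreal (g u) * (ennreal (weight_moment_const p) * laplace_moment (p/2) u))"
    proof (cases "0 \<le> u")
      case True
      have "(\<integral>\<^sup>+\<omega>'. ennreal (g u) * ennreal (W u \<omega>') \<partial>M) = ennreal (g u) * (\<integral>\<^sup>+\<omega>'. ennreal (W u \<omega>') \<partial>M)"
        by (rule nn_integral_cmult[OF Wu])
      also have "\<dots> \<le> ennreal (g u) * (ennreal (weight_moment_const p) * laplace_moment (p/2) u)"
        unfolding W_def by (intro mult_left_mono weight_moment_le True) simp
      finally show ?thesis by (intro mult_left_mono) auto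
    qed (simp add: indicator_def)
  qed
  also have "\<dots> \<le> (\<integral>\<^sup>+u. ennreal ((Cc/qmin) powr p * weight_moment_const p) * (cond2_integrand p u * indicator {0..T} u) \<partial>lborel)"
    unfolding g_def by (intro nn_integral_mono interior_integrand_le s)
  also have "\<dots> = ennreal ((Cc/qmin) powr p * weight_moment_const p) * cond2_integral p T"
    unfolding cond2_integral_def by (rule nn_integral_cmult) (use measurable_cond2_integrand in measurable)
  finally show ?thesis .
qed

lemma boundary_bound_nonneg: "\<omega> \<in> space M \<Longrightarrow> 0 \<le> boundary_bound th r u \<omega>"
  unfolding boundary_bound_def using sub_time_nonneg[of \<omega> r u] Cphi Lc by (auto intro!: divide_nonneg_nonneg mult_nonneg_nonneg eucl_norm_nonneg)

lemma boundary_bound_moment_le: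
  assumes u: "0 \<le> u"
  shows "(\<integral>\<^sup>+\<omega>. ennreal (boundary_bound th r u \<omega> powr p) \<partial>M) \<le> ennreal (boundary_moment_const d p Cphi Lc)"
proof (cases "th = 0")
  case True
  have "(\<integral>\<^sup>+\<omega>. ennreal (boundary_bound th r u \<omega> powr p) \<partial>M) = ennreal (Cphi powr p)"
    using True unfolding boundary_bound_def by (simp add: emeasure_space_1)
  also have "\<dots> \<le> ennreal (boundary_moment_const d p Cphi Lc)" unfolding boundary_moment_const_def by (rule ennreal_leI) simp
  finally show ?thesis .
next
  case False
  have p0: "0 < p" using p by simp
  define C where "C = Lc powr p * gauss_moment_const (2 * p) * (real d powr (2 * p) * real d + 1)"
  define G where "G v \<omega> = ennreal ((Lc * eucl_norm d (\<lambda>j. B r \<omega> (max 0 v) j) * \<bar>B r \<omega> (max 0 v) (th - 1)\<bar> / v) powr p)" for v \<omega>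
  have Gm: "(\<lambda>(z, \<omega>). G z \<omega>) \<in> borel_measurable ((borel :: real measure) \<Otimes>\<^sub>M sigma_of {(r,3)})"
  proof -
    have [measurable]: "(\<lambda>x. B r (snd x) (max 0 (fst x)) j) \<in> borel_measurable ((borel :: real measure) \<Otimes>\<^sub>M sigma_of {(r,3)})" for j
      by (rule measurable_BM_joint) simp
    show ?thesis unfolding G_def split_beta eucl_norm_def by measurable
  qed
  have Zm: "sub_time r u \<in> borel_measurable (sigma_of {(r,2)})"
    using measurable_sub_time_comp[of r "{(r,2)}" "\<lambda>_. u" "sigma_of {(r,2)}" "\<lambda>\<omega>. \<omega>"] by simp
  have "(\<integral>\<^sup>+\<omega>. ennreal (boundary_bound th r u \<omega> powr p) \<partial>M) = (\<integral>\<^sup>+\<omega>. 1 * G (sub_time r u \<omega>) \<omega> \<partial>M)"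
    using False unfolding G_def boundary_bound_def sub_BM_def by simp
  also have "\<dots> = (\<integral>\<^sup>+\<omega>. 1 * (\<integral>\<^sup>+\<omega>'. G (sub_time r u \<omega>) \<omega>' \<partial>M) \<partial>M)"
    by (rule nn_integral_freeze_sigma_of[OF _ _ Zm Gm]) auto
  also have "\<dots> \<le> (\<integral>\<^sup>+\<omega>. ennreal C \<partial>M)"
  proof (rule nn_integral_mono)
    fix \<omega> assume \<omega>: "\<omega> \<in> space M"
    show "1 * (\<integral>\<^sup>+\<omega>'. G (sub_time r u \<omega>) \<omega>' \<partial>M) \<le> ennreal C"
    proof (cases "0 < sub_time r u \<omega>")
      case True
      then show ?thesis
        using BM_boundary_moment_le[OF True Lc p0, of r "th - 1"] unfolding G_def C_def by simp
    next
      case False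
      then have "sub_time r u \<omega> = 0" using sub_time_nonneg[OF \<omega>, of r u] by simp
      then show ?thesis unfolding G_def using p0 by simp
    qed
  qed
  also have "\<dots> = ennreal C" by (simp add: emeasure_space_1)
  also have "\<dots> \<le> ennreal (boundary_moment_const d p Cphi Lc)" unfolding boundary_moment_const_def C_def by (rule ennreal_leI) simp
  finally show ?thesis .
qed

lemma tail_prob_pos: "0 < tail_prob s" unfolding tail_prob_def by (rule Fbar_pos) simp

lemma Fbar_le_tail_prob: "0 \<le> s \<Longrightarrow> Fbar \<rho> T \<le> tail_prob s"
  unfolding tail_prob_def by (rule Fbar_anti) (use T in auto)

lemma boundary_factor_moment_le_tail:
  assumes s: "0 \<le> s" "s \<le> T"
  shows "(\<integral>\<^sup>+\<omega>. ennreal (if s + tau r \<omega> < T then 0 else (boundary_bound th r (T - s) \<omega> / tail_prob s) powr p) \<partial>M)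
     \<le> ennreal (tail_prob s powr (1 - p) * boundary_moment_const d p Cphi Lc)"
proof -
  have F0: "0 < tail_prob s" by (rule tail_prob_pos)
  have [measurable]: "\<rho> \<in> borel_measurable borel" by (rule rho_meas)
  define X where "X \<omega> = ennreal ((boundary_bound th r (T - s) \<omega> / tail_prob s) powr p)" for \<omega>
  have XBm: "(\<lambda>\<omega>. boundary_bound th r (T - s) \<omega>) \<in> borel_measurable (sigma_of {(r,2),(r,3)})"
  proof -
    have [measurable]: "(\<lambda>\<omega>'. sub_BM r (T - s) j \<omega>') \<in> borel_measurable (sigma_of {(r,2),(r,3)})" for j
      by (rule measurable_sub_BM_comp[where P="{(r,2),(r,3)}" and f="\<lambda>_. T - s"]) auto
    have [measurable]: "(\<lambda>\<omega>'. sub_time r (T - s) \<omega>') \<in> borel_measurable (sigma_of {(r,2),(r,3)})"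
      by (rule measurable_sub_time_comp[where P="{(r,2),(r,3)}" and f="\<lambda>_. T - s"]) auto
    show ?thesis unfolding boundary_bound_def eucl_norm_def by measurable
  qed
  have Xm: "X \<in> borel_measurable (sigma_of {(r,2),(r,3)})" unfolding X_def using XBm by measurable
  then have [measurable]: "(\<lambda>x. X (snd x)) \<in> borel_measurable ((borel :: real measure) \<Otimes>\<^sub>M sigma_of {(r,2),(r,3)})"
    by measurable
  have "(\<integral>\<^sup>+\<omega>. ennreal (if s + tau r \<omega> < T then 0 else (boundary_bound th r (T - s) \<omega> / tail_prob s) powr p) \<partial>M)
      = (\<integral>\<^sup>+\<omega>. ennreal (if s + tau r \<omega> < T then 0 else 1) * X \<omega> \<partial>M)"
    unfolding X_def by (intro nn_integral_cong) simp
  also have "\<dots> = (\<integral>\<^sup>+u. ennreal (\<rho> u) * indicator {0..} u * (\<integral>\<^sup>+\<omega>'. ennreal (if s + u < T then 0 else 1) * X \<omega>' \<partial>M) \<partial>lborel)"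
    by (rule nn_integral_freeze_lifetime[where Q="{(r,2),(r,3)}" and G="\<lambda>u \<omega>. ennreal (if s + u < T then 0 else 1) * X \<omega>"])
      measurable
  also have "\<dots> = (\<integral>\<^sup>+u. ennreal (\<rho> u) * indicator {T - s..} u \<partial>lborel) * (\<integral>\<^sup>+\<omega>'. X \<omega>' \<partial>M)"
    using s measurable_sigma_of_M[OF Xm]
    by (subst nn_integral_multc[symmetric]) (auto intro!: nn_integral_cong simp: nn_integral_cmult indicator_def)
  also have "(\<integral>\<^sup>+u. ennreal (\<rho> u) * indicator {T - s..} u \<partial>lborel) = ennreal (tail_prob s)"
    unfolding tail_prob_def using s by (simp add: Fbar_ennreal)
  also have "(\<integral>\<^sup>+\<omega>'. X \<omega>' \<partial>M) = ennreal (1 / tail_prob s powr p) * (\<integral>\<^sup>+\<omega>'. ennreal (boundary_bound th r (T - s) \<omega>' powr p) \<partial>M)"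
  proof -
    have "(\<integral>\<^sup>+\<omega>'. X \<omega>' \<partial>M) = (\<integral>\<^sup>+\<omega>'. ennreal (1 / tail_prob s powr p) * ennreal (boundary_bound th r (T - s) \<omega>' powr p) \<partial>M)"
      using boundary_bound_nonneg F0 unfolding X_def
      by (intro nn_integral_cong) (simp add: powr_divide ennreal_mult[symmetric])
    also have "\<dots> = ennreal (1 / tail_prob s powr p) * (\<integral>\<^sup>+\<omega>'. ennreal (boundary_bound th r (T - s) \<omega>' powr p) \<partial>M)"
      by (rule nn_integral_cmult) (use measurable_sigma_of_M[OF XBm] in measurable)
    finally show ?thesis .
  qed
  also have "ennreal (tail_prob s) * (ennreal (1 / tail_prob s powr p) * (\<integral>\<^sup>+\<omega>'. ennreal (boundary_bound th r (T - s) \<omega>' powr p) \<partial>M))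
      \<le> ennreal (tail_prob s) * (ennreal (1 / tail_prob s powr p) * ennreal (boundary_moment_const d p Cphi Lc))"
    by (intro mult_left_mono boundary_bound_moment_le) (use s in auto)
  also have "\<dots> = ennreal (tail_prob s powr (1 - p) * boundary_moment_const d p Cphi Lc)"
  proof -
    have "tail_prob s * (1 / tail_prob s powr p * boundary_moment_const d p Cphi Lc) = tail_prob s powr (1 - p) * boundary_moment_const d p Cphi Lc"
      using F0 by (simp add: powr_diff field_simps)
    then show ?thesis using F0 boundary_moment_const_nonneg[of d p Cphi Lc] by (simp add: ennreal_mult[symmetric])
  qed
  finally show ?thesis .
qed

definition interior_const where "interior_const = ennreal ((Cc/qmin) powr p) * (cond1_integral p T + ennreal (weight_moment_const p) * cond2_integral p T)"
definition boundary_const where "boundary_const = ennreal (Fbar \<rho> T powr (1 - p) * boundary_moment_const d p Cphi Lc)"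

lemma boundary_factor_moment_le: "0 \<le> s \<Longrightarrow> s \<le> T \<Longrightarrow>
  (\<integral>\<^sup>+\<omega>. ennreal (if s + tau r \<omega> < T then 0 else (boundary_bound th r (T - s) \<omega> / tail_prob s) powr p) \<partial>M) \<le> boundary_const"
proof -
  assume s: "0 \<le> s" "s \<le> T"
  have F: "0 < Fbar \<rho> T" by (rule Fbar_pos) (use T in simp)
  have "tail_prob s powr (1 - p) \<le> Fbar \<rho> T powr (1 - p)"
    by (rule powr_mono2'[OF _ F Fbar_le_tail_prob[OF s(1)]]) (use p in simp)
  then have "tail_prob s powr (1 - p) * boundary_moment_const d p Cphi Lc \<le> Fbar \<rho> T powr (1 - p) * boundary_moment_const d p Cphi Lc" using boundary_moment_const_nonneg[of d p Cphi Lc] by (rule mult_right_mono)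
  then show ?thesis unfolding boundary_const_def using boundary_factor_moment_le_tail[OF s, of r th] by (meson ennreal_leI order.trans)
qed

lemma interior_factor_moment_le:
  assumes s: "0 \<le> s"
  shows "(\<integral>\<^sup>+\<omega>. ennreal (if s + tau r \<omega> < T then (Cc * weight_bound th r (tau r \<omega>) \<omega> / (qmin * \<rho> (tau r \<omega>))) powr p else 0) \<partial>M)
    \<le> interior_const"
proof (cases "th = 0")
  case True
  then have "(\<integral>\<^sup>+\<omega>. ennreal (if s + tau r \<omega> < T then (Cc * weight_bound th r (tau r \<omega>) \<omega> / (qmin * \<rho> (tau r \<omega>))) powr p else 0) \<partial>M)
      = (\<integral>\<^sup>+\<omega>. ennreal (if s + tau r \<omega> < T then (Cc / (qmin * \<rho> (tau r \<omega>))) powr p else 0) \<partial>M)"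
    by (intro nn_integral_cong) (simp add: weight_bound_def)
  also have "\<dots> \<le> ennreal ((Cc/qmin) powr p) * cond1_integral p T"
    by (rule interior_factor_moment_le_mark_0[OF s])
  also have "\<dots> \<le> interior_const"
    unfolding interior_const_def by (intro mult_left_mono add_increasing2) auto
  finally show ?thesis .
next
  case False
  have "ennreal ((Cc/qmin) powr p * weight_moment_const p) * cond2_integral p T
      = ennreal ((Cc/qmin) powr p) * (ennreal (weight_moment_const p) * cond2_integral p T)"
    using weight_moment_const_nonneg[of p] by (simp add: ennreal_mult mult.assoc)
  also have "\<dots> \<le> interior_const" unfolding interior_const_def
    by (intro mult_left_mono add_increasing) auto
  finally show ?thesis using interior_factor_moment_le_mark_nonzero[OF s False, of r] by (rule order.trans[rotated])
qed

lemma interior_prob_le: "0 \<le> s \<Longrightarrow> (\<integral>\<^sup>+\<omega>. ennreal (if s + tau r \<omega> < T then 1 else 0) \<partial>M) \<le> rho_mass T"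
proof -
  assume s: "0 \<le> s"
  have "(\<integral>\<^sup>+\<omega>. (\<lambda>u. ennreal (if s + u < T then 1 else 0)) (tau r \<omega>) \<partial>M) = (\<integral>\<^sup>+u. ennreal (\<rho> u) * indicator {0..} u * ennreal (if s + u < T then 1 else 0) \<partial>lborel)"
    by (rule nn_integral_tau) simp
  also have "\<dots> \<le> (\<integral>\<^sup>+u. ennreal (\<rho> u) * indicator {0..T} u \<partial>lborel)"
    using s by (intro nn_integral_mono) (auto simp: indicator_def)
  finally show ?thesis unfolding rho_mass_def by simp
qed

lemma measurable_factor_majorant_at: "(\<lambda>\<omega>. factor_majorant k s th \<omega>) \<in> borel_measurable (sigma_of ({k} \<times> UNIV))"
  using measurable_compose[OF measurable_Pair1'[of s borel] measurable_factor_majorant] by simp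

lemma measurable_factor_bound_at: "(\<lambda>\<omega>. factor_bound k s th \<omega>) \<in> borel_measurable (sigma_of ({k} \<times> UNIV))"
  using measurable_compose[OF measurable_Pair1'[of s borel] measurable_factor_bound] by simp

lemma factor_majorant_weighted_le:
  assumes W: "1 \<le> W"
  shows "ennreal (factor_majorant r s th \<omega>) * ennreal (if s + tau r \<omega> < T then W else 1)
    \<le> 2 * (ennreal W * ennreal (if s + tau r \<omega> < T then 1 else 0) + 1
        + ennreal W * ennreal (if s + tau r \<omega> < T then factor_bound r s th \<omega> else 0)
        + ennreal (if s + tau r \<omega> < T then 0 else factor_bound r s th \<omega>))"
proof -
  have b0: "0 \<le> factor_bound r s th \<omega>" by (rule factor_bound_nonneg)
  have a: "factor_majorant r s th \<omega> \<le> 2 * (1 + factor_bound r s th \<omega>)"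
    unfolding factor_majorant_def using b0 by simp
  show ?thesis
  proof (cases "s + tau r \<omega> < T")
    case True
    have "factor_majorant r s th \<omega> * W \<le> 2 * (1 + factor_bound r s th \<omega>) * W" using a W by (intro mult_right_mono) auto
    then have "ennreal (factor_majorant r s th \<omega> * W) \<le> ennreal (2 * (W + W * factor_bound r s th \<omega>))"
      by (intro ennreal_leI) (simp add: algebra_simps)
    moreover have "ennreal (factor_majorant r s th \<omega> * W) = ennreal (factor_majorant r s th \<omega>) * ennreal W"
      by (rule ennreal_mult) (use factor_majorant_ge_2[of r s th \<omega>] W in auto)
    ultimately have "ennreal (factor_majorant r s th \<omega>) * ennreal W \<le> 2 * (ennreal W + ennreal W * ennreal (factor_bound r s th \<omega>))"
      using W b0 by (simp add: ennreal_mult ennreal_plus)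
    also have "\<dots> \<le> 2 * (ennreal W + (1 + ennreal W * ennreal (factor_bound r s th \<omega>)))"
      by (intro mult_left_mono add_left_mono add_increasing) auto
    finally show ?thesis using True by (simp add: ac_simps)
  next
    case False
    have "ennreal (factor_majorant r s th \<omega>) \<le> ennreal (2 * (1 + factor_bound r s th \<omega>))" using a by (rule ennreal_leI)
    also have "\<dots> = 2 * (1 + ennreal (factor_bound r s th \<omega>))" using b0 by (simp add: ennreal_mult ennreal_plus)
    finally show ?thesis using False by (simp add: add_increasing mult_left_mono)
  qed
qed

lemma factor_majorant_moment_le:
  assumes s: "0 \<le> s" "s \<le> T" and W: "1 \<le> W"
  shows "(\<integral>\<^sup>+\<omega>. ennreal (factor_majorant r s th \<omega>) * ennreal (if s + tau r \<omega> < T then W else 1) \<partial>M)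
      \<le> 2 + 2 * boundary_const + 2 * ennreal W * (rho_mass T + interior_const)"
proof -
  define ind where "ind \<omega> = ennreal (if s + tau r \<omega> < T then 1 else 0)" for \<omega>
  define fin where "fin \<omega> = ennreal (if s + tau r \<omega> < T then factor_bound r s th \<omega> else 0)" for \<omega>
  define fbd where "fbd \<omega> = ennreal (if s + tau r \<omega> < T then 0 else factor_bound r s th \<omega>)" for \<omega>
  have [measurable]: "tau r \<in> borel_measurable M"
    by (rule measurable_sigma_of_M[OF measurable_tau_sigma_of[of r "{(r,0)}"]]) auto
  have [measurable]: "(\<lambda>\<omega>. factor_bound r s th \<omega>) \<in> borel_measurable M"
    by (rule measurable_sigma_of_M[OF measurable_factor_bound_at])
  have "(\<integral>\<^sup>+\<omega>. ennreal (factor_majorant r s th \<omega>) * ennreal (if s + tau r \<omega> < T then W else 1) \<partial>M)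
      \<le> (\<integral>\<^sup>+\<omega>. 2 * (ennreal W * ind \<omega> + 1 + ennreal W * fin \<omega> + fbd \<omega>) \<partial>M)"
    unfolding ind_def fin_def fbd_def by (intro nn_integral_mono factor_majorant_weighted_le W)
  also have "\<dots> = 2 * (ennreal W * (\<integral>\<^sup>+\<omega>. ind \<omega> \<partial>M) + 1 + ennreal W * (\<integral>\<^sup>+\<omega>. fin \<omega> \<partial>M) + (\<integral>\<^sup>+\<omega>. fbd \<omega> \<partial>M))"
    unfolding ind_def fin_def fbd_def by (simp add: nn_integral_cmult nn_integral_add emeasure_space_1)
  also have "\<dots> \<le> 2 * (ennreal W * rho_mass T + 1 + ennreal W * interior_const + boundary_const)"
  proof -
    have "fin = (\<lambda>\<omega>. ennreal (if s + tau r \<omega> < T then (Cc * weight_bound th r (tau r \<omega>) \<omega> / (qmin * \<rho> (tau r \<omega>))) powr p else 0))"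
      "fbd = (\<lambda>\<omega>. ennreal (if s + tau r \<omega> < T then 0 else (boundary_bound th r (T - s) \<omega> / tail_prob s) powr p))"
      unfolding fin_def fbd_def factor_bound_def by auto
    then show ?thesis
      using interior_prob_le[OF s(1), of r] interior_factor_moment_le[OF s(1), of r th] boundary_factor_moment_le[OF s, of r th]
      unfolding ind_def by (intro mult_left_mono add_mono) auto
  qed
  also have "\<dots> = 2 + 2 * boundary_const + 2 * ennreal W * (rho_mass T + interior_const)" by (simp add: algebra_simps)
  finally show ?thesis .
qed

lemma measurable_tree_majorant_at: "(\<lambda>\<omega>. tree_majorant n r s th \<omega>) \<in> borel_measurable (sigma_of (subtree_comps r))"
  using measurable_compose[OF measurable_Pair1'[of s borel] measurable_tree_majorant] by simp

lemma indep_vars_tree_majorant_children: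
  "indep_vars (\<lambda>_. borel) (\<lambda>j \<omega>. ennreal (tree_majorant n (r @ [j]) s (f j) \<omega>)) J"
proof -
  have I: "indep_sets (\<lambda>j. sets (sigma_of (subtree_comps (r @ [j])))) J" by (rule indep_sets_sigma_of[OF disjoint_family_subtree_comps_children])
  have m: "(\<lambda>\<omega>. ennreal (tree_majorant n (r @ [j]) s (f j) \<omega>)) \<in> borel_measurable (sigma_of (subtree_comps (r @ [j])))" for j
    using measurable_tree_majorant_at by measurable
  have A: "\<forall>i\<in>J. random_variable borel (\<lambda>\<omega>. ennreal (tree_majorant n (r @ [i]) s (f i) \<omega>))" using measurable_sigma_of_M[OF m] by blast
  have B: "indep_sets (\<lambda>i. sigma_sets (space M) {(\<lambda>\<omega>. ennreal (tree_majorant n (r @ [i]) s (f i) \<omega>)) -` A \<inter> space M |A. A \<in> sets borel}) J"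
  proof (rule indep_sets_mono_sets[OF I])
    fix j assume j: "j \<in> J"
    have "{(\<lambda>\<omega>. ennreal (tree_majorant n (r @ [j]) s (f j) \<omega>)) -` A \<inter> space M |A. A \<in> sets borel} \<subseteq> sets (sigma_of (subtree_comps (r @ [j])))"
      using measurable_sets[OF m] by auto
    from sets.sigma_sets_subset[OF this] show "sigma_sets (space M) {(\<lambda>\<omega>. ennreal (tree_majorant n (r @ [j]) s (f j) \<omega>)) -` A \<inter> space M |A. A \<in> sets borel} \<subseteq> sets (sigma_of (subtree_comps (r @ [j])))"
      by simp
  qed
  show ?thesis unfolding indep_vars_def using A B by simp
qed

definition children_majorant where
  "children_majorant n r s z \<omega> = (if s + fst z < T then
     \<Prod>j<sum_list (snd z). tree_majorant n (r @ [j]) (s + fst z) (mark_of (snd z) j) \<omega> else 1)"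

lemma children_majorant_ge_1: "1 \<le> children_majorant n r s z \<omega>"
  unfolding children_majorant_def using tree_majorant_ge_1 by (auto intro: prod_ge_1)

lemma tree_majorant_Suc_children:
  "tree_majorant (Suc n) r s th \<omega> = factor_majorant r s th \<omega> * children_majorant n r s (tau r \<omega>, idx r \<omega>) \<omega>"
  unfolding tree_majorant_Suc children_majorant_def by simp

lemma measurable_children_majorant:
  "(\<lambda>(z, \<omega>). ennreal (children_majorant n r s z \<omega>))
     \<in> borel_measurable (((borel :: real measure) \<Otimes>\<^sub>M (count_space UNIV :: nat list measure)) \<Otimes>\<^sub>M sigma_of (strict_subtree_comps r))"
proof -
  let ?N = "((borel :: real measure) \<Otimes>\<^sub>M (count_space UNIV :: nat list measure)) \<Otimes>\<^sub>M sigma_of (strict_subtree_comps r)"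
  have child: "(\<lambda>x. tree_majorant n (r @ [j]) (s + fst (fst x)) th' (snd x)) \<in> borel_measurable ?N" for j th'
  proof -
    have "(\<lambda>x. (s + fst (fst x), snd x)) \<in> measurable ?N (borel \<Otimes>\<^sub>M sigma_of (subtree_comps (r @ [j])))"
      by (intro measurable_Pair measurable_compose[OF measurable_snd measurable_ident_sigma_of[OF subtree_comps_child_subset_strict]]) auto
    from measurable_compose[OF this measurable_tree_majorant[of n "r @ [j]" th']] show ?thesis by simp
  qed
  have "(\<lambda>x. (\<lambda>l. ennreal (if s + fst (fst x) < T then \<Prod>j<sum_list l. tree_majorant n (r @ [j]) (s + fst (fst x)) (mark_of l j) (snd x) else 1)) (snd (fst x))) \<in> borel_measurable ?N"
  proof (rule measurable_compose_countable[where g="\<lambda>x. snd (fst x)"])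
    fix l :: "nat list"
    show "(\<lambda>x. ennreal (if s + fst (fst x) < T then \<Prod>j<sum_list l. tree_majorant n (r @ [j]) (s + fst (fst x)) (mark_of l j) (snd x) else 1)) \<in> borel_measurable ?N"
      using child by measurable
  qed measurable
  then show ?thesis unfolding children_majorant_def split_beta by simp
qed

text \<open>The children's subtrees are independent, so the expectation of the product factorizes.\<close>
lemma nn_integral_children_majorant_le:
  assumes V: "1 \<le> V" and u: "0 \<le> s + u" "s + u \<le> T"
    and IH: "\<And>j th'. (\<integral>\<^sup>+\<omega>. ennreal (tree_majorant n (r @ [j]) (s + u) th' \<omega>) \<partial>M) \<le> ennreal V"
  shows "(\<integral>\<^sup>+\<omega>. ennreal (children_majorant n r s (u, l) \<omega>) \<partial>M) \<le> ennreal (if s + u < T then V ^ sum_list l else 1)"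
proof (cases "s + u < T")
  case True
  have "(\<integral>\<^sup>+\<omega>. ennreal (children_majorant n r s (u, l) \<omega>) \<partial>M)
      = (\<integral>\<^sup>+\<omega>. (\<Prod>j<sum_list l. ennreal (tree_majorant n (r @ [j]) (s + u) (mark_of l j) \<omega>)) \<partial>M)"
    unfolding children_majorant_def using True tree_majorant_ge_1
    by (intro nn_integral_cong) (simp add: prod_ennreal[symmetric] order.trans[OF zero_le_one])
  also have "\<dots> = (\<Prod>j<sum_list l. (\<integral>\<^sup>+\<omega>. ennreal (tree_majorant n (r @ [j]) (s + u) (mark_of l j) \<omega>) \<partial>M))"
    by (rule indep_vars_nn_integral) (auto intro: indep_vars_tree_majorant_children)
  also have "\<dots> \<le> (\<Prod>j<sum_list l. ennreal V)"
    by (rule prod_mono_ennreal) (rule IH)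
  also have "\<dots> = ennreal (V ^ sum_list l)" using V by (simp add: ennreal_power)
  finally show ?thesis using True by simp
qed (simp add: children_majorant_def emeasure_space_1)

lemma tree_majorant_moment_le:
  assumes V: "1 \<le> V" and AEN: "AE \<omega> in M. \<forall>k. sum_list (idx k \<omega>) \<le> Nm"
    and H: "2 + 2 * boundary_const + 2 * ennreal (V ^ Nm) * (rho_mass T + interior_const) \<le> ennreal V"
  shows "0 \<le> s \<Longrightarrow> s \<le> T \<Longrightarrow> (\<integral>\<^sup>+\<omega>. ennreal (tree_majorant n r s th \<omega>) \<partial>M) \<le> ennreal V"
proof (induction n arbitrary: r s th)
  case 0 then show ?case using V by (simp add: tree_majorant_def emeasure_space_1)
next
  case (Suc n)
  let ?C = "\<lambda>z \<omega>. ennreal (children_majorant n r s z \<omega>)"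
  have "(\<integral>\<^sup>+\<omega>. ennreal (tree_majorant (Suc n) r s th \<omega>) \<partial>M) = (\<integral>\<^sup>+\<omega>. ennreal (factor_majorant r s th \<omega>) * ?C (tau r \<omega>, idx r \<omega>) \<omega> \<partial>M)"
    unfolding tree_majorant_Suc_children
  proof (intro nn_integral_cong ennreal_mult)
    show "0 \<le> factor_majorant r s th \<omega>" "0 \<le> children_majorant n r s (tau r \<omega>, idx r \<omega>) \<omega>" for \<omega>
      using factor_majorant_ge_2[of r s th \<omega>] children_majorant_ge_1[of n r s "(tau r \<omega>, idx r \<omega>)" \<omega>] by auto
  qed
  also have "\<dots> = (\<integral>\<^sup>+\<omega>. ennreal (factor_majorant r s th \<omega>) * (\<integral>\<^sup>+\<omega>'. ?C (tau r \<omega>, idx r \<omega>) \<omega>' \<partial>M) \<partial>M)"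
  proof (rule nn_integral_freeze_sigma_of[OF root_comps_disjoint_strict _ _ measurable_children_majorant])
    show "(\<lambda>\<omega>. ennreal (factor_majorant r s th \<omega>)) \<in> borel_measurable (sigma_of ({r} \<times> UNIV))"
      using measurable_factor_majorant_at by measurable
    show "(\<lambda>\<omega>. (tau r \<omega>, idx r \<omega>)) \<in> measurable (sigma_of ({r} \<times> UNIV)) (borel \<Otimes>\<^sub>M count_space UNIV)"
      by (intro measurable_Pair measurable_tau_sigma_of measurable_idx_sigma_of) auto
  qed
  also have "\<dots> \<le> (\<integral>\<^sup>+\<omega>. ennreal (factor_majorant r s th \<omega>) * ennreal (if s + tau r \<omega> < T then V ^ Nm else 1) \<partial>M)"
  proof (rule nn_integral_mono_AE)
    show "AE \<omega> in M. ennreal (factor_majorant r s th \<omega>) * (\<integral>\<^sup>+\<omega>'. ?C (tau r \<omega>, idx r \<omega>) \<omega>' \<partial>M)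
        \<le> ennreal (factor_majorant r s th \<omega>) * ennreal (if s + tau r \<omega> < T then V ^ Nm else 1)"
      using AE_tau_nonneg AEN
    proof eventually_elim
      case (elim \<omega>)
      show ?case
      proof (intro mult_left_mono)
        show "(\<integral>\<^sup>+\<omega>'. ?C (tau r \<omega>, idx r \<omega>) \<omega>' \<partial>M) \<le> ennreal (if s + tau r \<omega> < T then V ^ Nm else 1)"
        proof (cases "s + tau r \<omega> < T")
          case True
          have "(\<integral>\<^sup>+\<omega>'. ?C (tau r \<omega>, idx r \<omega>) \<omega>' \<partial>M) \<le> ennreal (V ^ sum_list (idx r \<omega>))"
            using nn_integral_children_majorant_le[OF V, of s "tau r \<omega>" n r "idx r \<omega>"] Suc elim True by simp
          also have "\<dots> \<le> ennreal (V ^ Nm)" using V elim by (intro ennreal_leI power_increasing) auto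
          finally show ?thesis using True by simp
        qed (simp add: children_majorant_def emeasure_space_1)
      qed simp
    qed
  qed
  also have "\<dots> \<le> 2 + 2 * boundary_const + 2 * ennreal (V ^ Nm) * (rho_mass T + interior_const)"
    by (rule factor_majorant_moment_le[OF Suc.prems]) (use V in simp)
  also have "\<dots> \<le> ennreal V" by (rule H)
  finally show ?case .
qed

lemma BM_shift_in_Rd:
  assumes "\<omega> \<in> space M" and "pos \<in> Rd d"
  shows "(\<lambda>j. pos j + B k \<omega> u j) \<in> Rd d"
  using BM_path[OF assms(1), of k] assms(2) unfolding Rd_def by auto

lemma interior_factor_powr_le:
  assumes \<omega>: "\<omega> \<in> space M" and tau0: "0 \<le> tau k \<omega>" and iL: "idx k \<omega> \<in> L"
    and b: "0 \<le> b" "b + tau k \<omega> < T" and pos: "pos \<in> Rd d"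
  shows "\<bar>c (idx k \<omega>) (b + tau k \<omega>) (\<lambda>j. pos j + B k \<omega> (S k \<omega> (tau k \<omega>)) j) *
        (if th = 0 then 1 else B k \<omega> (S k \<omega> (tau k \<omega>)) (th - 1) / S k \<omega> (tau k \<omega>)) / (q (idx k \<omega>) * \<rho> (tau k \<omega>))\<bar> powr p
    \<le> (Cc * weight_bound th k (tau k \<omega>) \<omega> / (qmin * \<rho> (tau k \<omega>))) powr p"
proof -
  define u where "u = tau k \<omega>"
  have r0: "0 < \<rho> u" using rho_pos tau0 unfolding u_def by auto
  have q0: "qmin \<le> q (idx k \<omega>)" using q_lower iL by auto
  have sx: "sub_time k u \<omega> = S k \<omega> u" unfolding sub_time_def u_def using tau0 by simp
  have S0: "0 \<le> S k \<omega> u" using subordinator_nonneg[OF \<omega>] tau0 unfolding u_def by simp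
  have W: "\<bar>if th = 0 then 1 else B k \<omega> (S k \<omega> u) (th - 1) / S k \<omega> u\<bar> = weight_bound th k u \<omega>"
    unfolding weight_bound_def sub_BM_def sx using S0 by auto
  have w0: "0 \<le> weight_bound th k u \<omega>" unfolding weight_bound_def using S0 sx by auto
  have "\<bar>c (idx k \<omega>) (b + u) (\<lambda>j. pos j + B k \<omega> (S k \<omega> u) j)\<bar> \<le> Cc"
    using c_bound iL BM_shift_in_Rd[OF \<omega> pos] b tau0 unfolding u_def by auto
  then have "\<bar>c (idx k \<omega>) (b + u) (\<lambda>j. pos j + B k \<omega> (S k \<omega> u) j)\<bar> * weight_bound th k u \<omega> / (q (idx k \<omega>) * \<rho> u)
      \<le> Cc * weight_bound th k u \<omega> / (qmin * \<rho> u)"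
    using qmin r0 Cc w0 q0 by (intro frac_le mult_right_mono) auto
  then have "\<bar>c (idx k \<omega>) (b + u) (\<lambda>j. pos j + B k \<omega> (S k \<omega> u) j) * (if th = 0 then 1 else B k \<omega> (S k \<omega> u) (th - 1) / S k \<omega> u) / (q (idx k \<omega>) * \<rho> u)\<bar>
      \<le> Cc * weight_bound th k u \<omega> / (qmin * \<rho> u)"
    using r0 q0 qmin unfolding W[symmetric] by (simp add: abs_mult)
  then show ?thesis unfolding u_def by (rule powr_mono2[rotated 2]) (use p in auto)
qed

lemma boundary_factor_powr_le:
  assumes \<omega>: "\<omega> \<in> space M" and b: "0 \<le> b" "b \<le> T" and pos: "pos \<in> Rd d"
  shows "\<bar>(\<phi> (\<lambda>j. pos j + B k \<omega> (S k \<omega> (T - b)) j) - \<phi> pos * (if th \<noteq> 0 then 1 else 0)) *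
        (if th = 0 then 1 else B k \<omega> (S k \<omega> (T - b)) (th - 1) / S k \<omega> (T - b)) / Fbar \<rho> (T - b)\<bar> powr p
    \<le> (boundary_bound th k (T - b) \<omega> / tail_prob b) powr p"
proof -
  define u where "u = T - b"
  have u0: "0 \<le> u" using b unfolding u_def by simp
  have F0: "0 < Fbar \<rho> u" by (rule Fbar_pos[OF u0])
  have tail: "tail_prob b = Fbar \<rho> u" unfolding tail_prob_def u_def using b by simp
  have sx: "sub_time k u \<omega> = S k \<omega> u" unfolding sub_time_def using u0 by simp
  have S0: "0 \<le> S k \<omega> u" using subordinator_nonneg[OF \<omega> u0] .
  have Yu: "sub_BM k u j \<omega> = B k \<omega> (S k \<omega> u) j" for j unfolding sub_BM_def sx using S0 by simp
  have posB: "(\<lambda>j. pos j + B k \<omega> (S k \<omega> u) j) \<in> Rd d" by (rule BM_shift_in_Rd[OF \<omega> pos])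
  have num: "\<bar>(\<phi> (\<lambda>j. pos j + B k \<omega> (S k \<omega> u) j) - \<phi> pos * (if th \<noteq> 0 then 1 else 0)) * (if th = 0 then 1 else B k \<omega> (S k \<omega> u) (th - 1) / S k \<omega> u)\<bar>
      \<le> boundary_bound th k u \<omega>"
  proof (cases "th = 0")
    case True
    then show ?thesis unfolding boundary_bound_def using phi_bound posB by simp
  next
    case False
    have "\<bar>\<phi> (\<lambda>j. pos j + B k \<omega> (S k \<omega> u) j) - \<phi> pos\<bar> \<le> Lc * eucl_norm d (\<lambda>j. (pos j + B k \<omega> (S k \<omega> u) j) - pos j)"
      using phi_lipschitz posB pos by blast
    also have "(\<lambda>j. (pos j + B k \<omega> (S k \<omega> u) j) - pos j) = (\<lambda>j. sub_BM k u j \<omega>)" unfolding Yu by simp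
    finally have ph: "\<bar>\<phi> (\<lambda>j. pos j + B k \<omega> (S k \<omega> u) j) - \<phi> pos\<bar> \<le> Lc * eucl_norm d (\<lambda>j. sub_BM k u j \<omega>)" .
    have "\<bar>(\<phi> (\<lambda>j. pos j + B k \<omega> (S k \<omega> u) j) - \<phi> pos) * (B k \<omega> (S k \<omega> u) (th - 1) / S k \<omega> u)\<bar>
        = \<bar>\<phi> (\<lambda>j. pos j + B k \<omega> (S k \<omega> u) j) - \<phi> pos\<bar> * (\<bar>sub_BM k u (th - 1) \<omega>\<bar> / sub_time k u \<omega>)"
      unfolding Yu sx using S0 by (simp add: abs_mult)
    also have "\<dots> \<le> Lc * eucl_norm d (\<lambda>j. sub_BM k u j \<omega>) * (\<bar>sub_BM k u (th - 1) \<omega>\<bar> / sub_time k u \<omega>)"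
      by (rule mult_right_mono[OF ph]) (use S0 sx in simp)
    finally show ?thesis unfolding boundary_bound_def using False by simp
  qed
  then have "\<bar>(\<phi> (\<lambda>j. pos j + B k \<omega> (S k \<omega> u) j) - \<phi> pos * (if th \<noteq> 0 then 1 else 0)) * (if th = 0 then 1 else B k \<omega> (S k \<omega> u) (th - 1) / S k \<omega> u) / Fbar \<rho> u\<bar>
      \<le> boundary_bound th k u \<omega> / Fbar \<rho> u"
    using F0 by (simp add: divide_right_mono)
  then show ?thesis unfolding tail u_def by (rule powr_mono2[rotated 2]) (use p in auto)
qed

lemma factor_powr_le_factor_majorant:
  assumes \<omega>: "\<omega> \<in> space M" and tau0: "0 \<le> tau k \<omega>" and iL: "idx k \<omega> \<in> L"
    and b: "0 \<le> b" "b \<le> T" and pos: "pos \<in> Rd d"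
  shows "\<bar>node_factor c q \<rho> \<phi> T (\<lambda>k. tau k \<omega>) (\<lambda>k. idx k \<omega>) (\<lambda>k. S k \<omega>) (\<lambda>k. B k \<omega>) b pos th k\<bar> powr p
    \<le> factor_majorant k b th \<omega>"
proof -
  have "factor_bound k b th \<omega> \<le> factor_majorant k b th \<omega>" unfolding factor_majorant_def by simp
  then show ?thesis
    using interior_factor_powr_le[OF \<omega> tau0 iL b(1) _ pos, of th] boundary_factor_powr_le[OF \<omega> b pos, of k th]
    unfolding factor_bound_def node_factor_def by (auto split: if_splits)
qed

definition nodes_at where
  "nodes_at t x i \<omega> = tree_nodes T t x i (\<lambda>k. tau k \<omega>) (\<lambda>k. idx k \<omega>) (\<lambda>k. S k \<omega>) (\<lambda>k. B k \<omega>)"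

definition state_at where
  "state_at t x i \<omega> = node_state T t x i (\<lambda>k. tau k \<omega>) (\<lambda>k. idx k \<omega>) (\<lambda>k. S k \<omega>) (\<lambda>k. B k \<omega>)"

definition node_weight where
  "node_weight t x i \<omega> k = factor_majorant k (fst (snd (state_at t x i \<omega> k))) (snd (snd (snd (state_at t x i \<omega> k)))) \<omega>"

lemma prod_node_weight_le_tree_majorant:
  "finite (nodes_at t x i \<omega> \<inter> {k. length k < n})
   \<and> prod (node_weight t x i \<omega>) (nodes_at t x i \<omega> \<inter> {k. length k < n}) \<le> tree_majorant n [] t i \<omega>"
proof -
  have "1 \<le> factor_majorant k s th \<omega>" for k s th using factor_majorant_ge_2[of k s th \<omega>] by simp
  from prod_subtree_nodes_le_majorant[where a="\<lambda>k s th. factor_majorant k s th \<omega>", OF this,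
      of T "\<lambda>k. tau k \<omega>" "\<lambda>k. idx k \<omega>" "\<lambda>k. S k \<omega>" "\<lambda>k. B k \<omega>" "[]" t x i n]
  show ?thesis
    unfolding nodes_at_def node_weight_def state_at_def tree_majorant_def tree_nodes_def subtree_nodes_def node_state_def
    by simp
qed

text \<open>Every node weight is at least \<open>2\<close>, so infinitely many nodes force the majorants to blow up.\<close>
lemma SUP_tree_majorant_eq_top:
  assumes "infinite (nodes_at t x i \<omega>)"
  shows "(SUP n. ennreal (tree_majorant n [] t i \<omega>)) = \<top>"
proof (rule ennreal_SUP_eq_top)
  fix K :: nat
  define N where "N = nodes_at t x i \<omega>"
  obtain F where F: "F \<subseteq> N" "finite F" "card F = K"
    using infinite_arbitrarily_large assms unfolding N_def by blast
  define n where "n = Suc (Max (insert 0 (length ` F)))"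
  have Fn: "F \<subseteq> N \<inter> {k. length k < n}"
    using F unfolding n_def by (auto simp: less_Suc_eq_le intro: Max_ge)
  have w2: "2 \<le> node_weight t x i \<omega> k" for k unfolding node_weight_def by (rule factor_majorant_ge_2)
  have PL: "finite (N \<inter> {k. length k < n})" "prod (node_weight t x i \<omega>) (N \<inter> {k. length k < n}) \<le> tree_majorant n [] t i \<omega>"
    using prod_node_weight_le_tree_majorant unfolding N_def by auto
  have "real K \<le> 2 ^ K" using of_nat_less_two_power[of K, where 'a=real] by linarith
  also have "(2::real) ^ K = (\<Prod>k\<in>F. 2)" using F by simp
  also have "\<dots> \<le> prod (node_weight t x i \<omega>) F" using w2 by (intro prod_mono) auto
  also have "\<dots> \<le> prod (node_weight t x i \<omega>) (N \<inter> {k. length k < n})"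
    by (rule prod_mono2[OF PL(1) Fn]) (use w2 in \<open>auto intro: order.trans[OF one_le_numeral] order.trans[OF zero_le_numeral]\<close>)
  also have "\<dots> \<le> tree_majorant n [] t i \<omega>" by (rule PL(2))
  finally show "\<exists>n\<in>UNIV. of_nat K \<le> ennreal (tree_majorant n [] t i \<omega>)"
    by (intro bexI[of _ n]) (auto simp: ennreal_of_nat_eq_real_of_nat intro: ennreal_leI)
qed

lemma Hfun_powr_le_tree_majorant:
  assumes \<omega>: "\<omega> \<in> space M" and tau0: "\<forall>k. 0 \<le> tau k \<omega>" and iL: "\<forall>k. idx k \<omega> \<in> L"
    and x: "x \<in> Rd d" and t: "0 \<le> t" "t \<le> T" and fin: "finite (nodes_at t x i \<omega>)"
  shows "\<exists>n. \<bar>Hfun c q \<rho> \<phi> T t x i (\<lambda>k. tau k \<omega>) (\<lambda>k. idx k \<omega>) (\<lambda>k. S k \<omega>) (\<lambda>k. B k \<omega>)\<bar> powr p \<le> tree_majorant n [] t i \<omega>"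
proof
  define N where "N = nodes_at t x i \<omega>"
  define st where "st = state_at t x i \<omega>"
  define n where "n = Suc (Max (insert 0 (length ` N)))"
  have Nn: "N \<inter> {k. length k < n} = N"
    using fin unfolding N_def n_def by (auto simp: less_Suc_eq_le intro: Max_ge)
  have Bd: "\<forall>k u. B k \<omega> u \<in> Rd d" using BM_path[OF \<omega>] Rd_def by auto
  have fb: "\<bar>node_factor c q \<rho> \<phi> T (\<lambda>k. tau k \<omega>) (\<lambda>k. idx k \<omega>) (\<lambda>k. S k \<omega>) (\<lambda>k. B k \<omega>)
      (fst (snd (st k))) (fst (snd (snd (st k)))) (snd (snd (snd (st k)))) k\<bar> powr p \<le> node_weight t x i \<omega> k"
    if k: "k \<in> N" for k
  proof -
    have alive: "fst (st k)" using k unfolding N_def st_def nodes_at_def tree_nodes_def state_at_def by simp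
    have "0 \<le> fst (snd (st k)) \<and> fst (snd (st k)) \<le> T \<and> fst (snd (snd (st k))) \<in> Rd d"
      unfolding st_def state_at_def node_state_def
      by (rule tree_state_invariant[OF _ Bd]) (use alive tau0 t x in \<open>auto simp: st_def state_at_def node_state_def\<close>)
    then show ?thesis unfolding node_weight_def st_def
      by (intro factor_powr_le_factor_majorant[OF \<omega>]) (use tau0 iL in auto)
  qed
  have "\<bar>Hfun c q \<rho> \<phi> T t x i (\<lambda>k. tau k \<omega>) (\<lambda>k. idx k \<omega>) (\<lambda>k. S k \<omega>) (\<lambda>k. B k \<omega>)\<bar> powr p
      = (\<Prod>k\<in>N. \<bar>node_factor c q \<rho> \<phi> T (\<lambda>k. tau k \<omega>) (\<lambda>k. idx k \<omega>) (\<lambda>k. S k \<omega>) (\<lambda>k. B k \<omega>)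
          (fst (snd (st k))) (fst (snd (snd (st k)))) (snd (snd (snd (st k)))) k\<bar> powr p)"
    using fin unfolding N_def st_def nodes_at_def state_at_def
    by (simp add: Hfun_eq_prod_node_factor abs_prod prod_powr_distrib Let_def)
  also have "\<dots> \<le> prod (node_weight t x i \<omega>) N" using fb by (intro prod_mono) auto
  also have "\<dots> \<le> tree_majorant n [] t i \<omega>"
    using prod_node_weight_le_tree_majorant[of t x i \<omega> n] unfolding N_def[symmetric] Nn by simp
  finally show "\<bar>Hfun c q \<rho> \<phi> T t x i (\<lambda>k. tau k \<omega>) (\<lambda>k. idx k \<omega>) (\<lambda>k. S k \<omega>) (\<lambda>k. B k \<omega>)\<bar> powr p \<le> tree_majorant n [] t i \<omega>" .
qed

lemma Hfun_powr_le_SUP_tree_majorant: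
  assumes \<omega>: "\<omega> \<in> space M" and tau0: "\<forall>k. 0 \<le> tau k \<omega>" and iL: "\<forall>k. idx k \<omega> \<in> L"
    and x: "x \<in> Rd d" and t: "0 \<le> t" "t \<le> T"
  shows "ennreal (\<bar>Hfun c q \<rho> \<phi> T t x i (\<lambda>k. tau k \<omega>) (\<lambda>k. idx k \<omega>) (\<lambda>k. S k \<omega>) (\<lambda>k. B k \<omega>)\<bar> powr p)
    \<le> (SUP n. ennreal (tree_majorant n [] t i \<omega>))"
proof (cases "finite (nodes_at t x i \<omega>)")
  case True
  then obtain n where "\<bar>Hfun c q \<rho> \<phi> T t x i (\<lambda>k. tau k \<omega>) (\<lambda>k. idx k \<omega>) (\<lambda>k. S k \<omega>) (\<lambda>k. B k \<omega>)\<bar> powr p \<le> tree_majorant n [] t i \<omega>"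
    using Hfun_powr_le_tree_majorant[OF assms] by blast
  then show ?thesis by (intro SUP_upper2[of n] ennreal_leI) auto
qed (simp add: SUP_tree_majorant_eq_top)

end

section \<open>Small horizons and the case \<open>p = 1\<close>\<close>

lemma nn_integral_exp_neg_Icc_le_length:
  assumes "0 \<le> a" "0 \<le> T"
  shows "(\<integral>\<^sup>+ s. ennreal (exp (- s * a)) * indicator {0..T} s \<partial>lborel) \<le> ennreal T"
proof -
  have "(\<integral>\<^sup>+ s. ennreal (exp (- s * a)) * indicator {0..T} s \<partial>lborel) \<le> (\<integral>\<^sup>+ s. indicator {0..T} s \<partial>lborel)"
    using assms by (intro nn_integral_mono) (auto simp: indicator_def mult_nonneg_nonneg)
  then show ?thesis using assms by simp
qed

lemma nn_integral_exp_neg_Icc_le_inverse: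
  assumes "0 < a"
  shows "(\<integral>\<^sup>+ s. ennreal (exp (- s * a)) * indicator {0..T} s \<partial>lborel) \<le> ennreal (1 / a)"
proof -
  have "(\<integral>\<^sup>+ s. ennreal (exp (- s * a)) * indicator {0..T} s \<partial>lborel) \<le> (\<integral>\<^sup>+ s. ennreal (exp (- s * a)) * indicator {0..} s \<partial>lborel)"
    by (intro nn_integral_mono) (auto simp: indicator_def)
  then show ?thesis using nn_integral_exp_neg_mult[OF assms] by simp
qed

lemma time_integral_laplace_p1_le:
  assumes eta_nn: "0 \<le> \<eta> lam" and T: "0 \<le> T" and lam: "0 < lam"
  shows "(\<integral>\<^sup>+ s. ennreal (exp (- s * \<eta> lam) * lam powr (-1/2)) * indicator {0..T} s \<partial>lborel)
    \<le> ennreal T * (ennreal (lam powr (-1/2)) * indicator {0..lam0} lam) + 1 / ennreal (\<eta> lam * sqrt lam) * indicator {lam0..} lam"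
proof -
  have I: "(\<integral>\<^sup>+ s. ennreal (exp (- s * \<eta> lam) * lam powr (-1/2)) * indicator {0..T} s \<partial>lborel)
      = ennreal (lam powr (-1/2)) * (\<integral>\<^sup>+ s. ennreal (exp (- s * \<eta> lam)) * indicator {0..T} s \<partial>lborel)"
    by (subst nn_integral_cmult[symmetric]) (auto intro!: nn_integral_cong simp: ennreal_mult[symmetric] mult_ac)
  show ?thesis
  proof (cases "lam \<le> lam0")
    case True
    have "(\<integral>\<^sup>+ s. ennreal (exp (- s * \<eta> lam) * lam powr (-1/2)) * indicator {0..T} s \<partial>lborel) \<le> ennreal (lam powr (-1/2)) * ennreal T"
      unfolding I by (intro mult_left_mono nn_integral_exp_neg_Icc_le_length eta_nn T) simp
    then show ?thesis using True lam by (auto simp: mult.commute intro: order.trans)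
  next
    case False
    have "(\<integral>\<^sup>+ s. ennreal (exp (- s * \<eta> lam) * lam powr (-1/2)) * indicator {0..T} s \<partial>lborel) \<le> 1 / ennreal (\<eta> lam * sqrt lam)"
    proof (cases "\<eta> lam = 0")
      case True then show ?thesis by (simp add: divide_ennreal_def)
    next
      case False
      then have ap: "0 < \<eta> lam" using eta_nn by simp
      have "(\<integral>\<^sup>+ s. ennreal (exp (- s * \<eta> lam) * lam powr (-1/2)) * indicator {0..T} s \<partial>lborel) \<le> ennreal (lam powr (-1/2)) * ennreal (1 / \<eta> lam)"
        unfolding I by (intro mult_left_mono nn_integral_exp_neg_Icc_le_inverse ap) simp
      also have "\<dots> = ennreal (1 / (\<eta> lam * sqrt lam))"
        using ap lam by (simp add: powr_minus_divide powr_half_sqrt[symmetric] ennreal_mult[symmetric])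
      also have "\<dots> = 1 / ennreal (\<eta> lam * sqrt lam)"
        using ap lam by (simp add: divide_ennreal[symmetric])
      finally show ?thesis .
    qed
    then show ?thesis using False by (simp add: indicator_def)
  qed
qed

lemma cond1_p1:
  assumes "0 \<le> T"
  shows "cond1 \<rho> 1 T"
proof -
  have "(\<integral>\<^sup>+ s\<in>{0..T}. ennreal (1 / \<rho> s powr (1 - 1)) \<partial>lborel) \<le> (\<integral>\<^sup>+ s. indicator {0..T} s \<partial>lborel)"
    by (intro nn_integral_mono) (auto simp: indicator_def)
  then show ?thesis unfolding cond1_def using assms by (simp add: le_less_trans)
qed

lemma cond2_p1:
  fixes \<eta> \<rho> :: "real \<Rightarrow> real" and T lam0 :: real
  assumes eta_nn: "\<forall>x>0. 0 \<le> \<eta> x" and eta_meas: "(\<lambda>l. if 0 < l then \<eta> l else 0) \<in> borel_measurable borel"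
    and rho_pos: "\<forall>s\<ge>0. 0 < \<rho> s"
    and T: "0 < T" and lam0: "0 < lam0"
    and fin: "(\<integral>\<^sup>+ lam\<in>{lam0..}. 1 / ennreal (\<eta> lam * sqrt lam) \<partial>lborel) < \<infinity>"
  shows "cond2 \<rho> \<eta> 1 T"
proof -
  define e' where "e' l = (if 0 < l then \<eta> l else 0)" for l
  have [measurable]: "e' \<in> borel_measurable borel" unfolding e'_def by (rule eta_meas)
  define F where "F x = ennreal (exp (- fst x * e' (snd x)) * snd x powr (-1/2)) * indicator {0<..} (snd x) * indicator {0..T} (fst x)" for x :: "real \<times> real"
  have Fm: "F \<in> borel_measurable (lborel \<Otimes>\<^sub>M lborel)" unfolding F_def by measurable
  have "(\<integral>\<^sup>+ s\<in>{0..T}. (\<integral>\<^sup>+ lam\<in>{0<..}. ennreal (exp (- s * \<eta> lam) / \<rho> s powr (1 - 1) * lam powr (1 / 2 - 1)) \<partial>lborel) \<partial>lborel)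
      \<le> (\<integral>\<^sup>+ s. (\<integral>\<^sup>+ lam. F (s, lam) \<partial>lborel) \<partial>lborel)"
  proof (rule nn_integral_mono)
    fix s :: real
    show "(\<integral>\<^sup>+ lam\<in>{0<..}. ennreal (exp (- s * \<eta> lam) / \<rho> s powr (1 - 1) * lam powr (1 / 2 - 1)) \<partial>lborel) * indicator {0..T} s
        \<le> (\<integral>\<^sup>+ lam. F (s, lam) \<partial>lborel)"
    proof (cases "s \<in> {0..T}")
      case True
      then have "\<rho> s powr (1 - 1) = 1" using rho_pos by auto
      then show ?thesis using True unfolding F_def
        by (auto intro!: nn_integral_mono simp: indicator_def e'_def)
    qed (auto simp: indicator_def)
  qed
  also have "\<dots> = (\<integral>\<^sup>+ lam. (\<integral>\<^sup>+ s. F (s, lam) \<partial>lborel) \<partial>lborel)"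
    using lborel_pair.Fubini'[of "\<lambda>s lam. F (s, lam)"] Fm by simp
  also have "\<dots> \<le> (\<integral>\<^sup>+ lam. ennreal T * (ennreal (lam powr (-1/2)) * indicator {0..lam0} lam) + 1 / ennreal (\<eta> lam * sqrt lam) * indicator {lam0..} lam \<partial>lborel)"
  proof (rule nn_integral_mono)
    fix lam :: real
    show "(\<integral>\<^sup>+ s. F (s, lam) \<partial>lborel) \<le> ennreal T * (ennreal (lam powr (-1/2)) * indicator {0..lam0} lam) + 1 / ennreal (\<eta> lam * sqrt lam) * indicator {lam0..} lam"
    proof (cases "0 < lam")
      case True
      then have "(\<integral>\<^sup>+ s. F (s, lam) \<partial>lborel) = (\<integral>\<^sup>+ s. ennreal (exp (- s * \<eta> lam) * lam powr (-1/2)) * indicator {0..T} s \<partial>lborel)"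
        unfolding F_def e'_def by simp
      also have "\<dots> \<le> ennreal T * (ennreal (lam powr (-1/2)) * indicator {0..lam0} lam) + 1 / ennreal (\<eta> lam * sqrt lam) * indicator {lam0..} lam"
        using eta_nn T True by (intro time_integral_laplace_p1_le) auto
      finally show ?thesis .
    qed (simp add: F_def)
  qed
  also have "\<dots> = ennreal T * (\<integral>\<^sup>+ lam. ennreal (lam powr (-1/2)) * indicator {0..lam0} lam \<partial>lborel) + (\<integral>\<^sup>+ lam\<in>{lam0..}. 1 / ennreal (\<eta> lam * sqrt lam) \<partial>lborel)"
  proof -
    have "(\<lambda>lam. 1 / ennreal (e' lam * sqrt lam) * indicator {lam0..} lam) \<in> borel_measurable lborel" by measurable
    moreover have "(\<lambda>lam. 1 / ennreal (e' lam * sqrt lam) * indicator {lam0..} lam) = (\<lambda>lam. 1 / ennreal (\<eta> lam * sqrt lam) * indicator {lam0..} lam)"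
      using lam0 by (auto simp: fun_eq_iff indicator_def e'_def)
    ultimately show ?thesis by (simp add: nn_integral_add nn_integral_cmult)
  qed
  also have "\<dots> < \<top>"
    using nn_integral_powr_neg_half_Icc_finite[of lam0] lam0 fin by (simp add: ennreal_mult_less_top)
  finally show ?thesis unfolding cond2_def by simp
qed

context majorant_setup
begin

lemma nn_integral_SUP_tree_majorant_le:
  assumes V: "1 \<le> V" and AEN: "AE \<omega> in M. \<forall>k. sum_list (idx k \<omega>) \<le> Nm"
    and H: "2 + 2 * boundary_const + 2 * ennreal (V ^ Nm) * (rho_mass T + interior_const) \<le> ennreal V"
    and t: "0 \<le> t" "t \<le> T"
  shows "(\<integral>\<^sup>+\<omega>. (SUP n. ennreal (tree_majorant n [] t i \<omega>)) \<partial>M) \<le> ennreal V"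
proof -
  have pm: "(\<lambda>\<omega>. ennreal (tree_majorant n [] t i \<omega>)) \<in> borel_measurable M" for n
    using measurable_sigma_of_M[OF measurable_tree_majorant_at[of n "[]" t i]] by measurable
  have inc: "incseq (\<lambda>n \<omega>. ennreal (tree_majorant n [] t i \<omega>))"
  proof (rule incseq_SucI, rule le_funI)
    fix n \<omega>
    show "ennreal (tree_majorant n [] t i \<omega>) \<le> ennreal (tree_majorant (Suc n) [] t i \<omega>)"
      unfolding tree_majorant_def by (intro ennreal_leI majorant_le_Suc) (simp add: factor_majorant_def)
  qed
  have "(\<integral>\<^sup>+\<omega>. (SUP n. ennreal (tree_majorant n [] t i \<omega>)) \<partial>M) = (SUP n. \<integral>\<^sup>+\<omega>. ennreal (tree_majorant n [] t i \<omega>) \<partial>M)"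
    by (rule nn_integral_monotone_convergence_SUP[OF inc pm])
  also have "\<dots> \<le> ennreal V" by (rule SUP_least) (rule tree_majorant_moment_le[OF V AEN H t])
  finally show ?thesis .
qed

lemma finite_tree_and_integrable_Hfun:
  assumes V: "1 \<le> V" and AEN: "AE \<omega> in M. \<forall>k. sum_list (idx k \<omega>) \<le> Nm"
    and H: "2 + 2 * boundary_const + 2 * ennreal (V ^ Nm) * (rho_mass T + interior_const) \<le> ennreal V"
    and t: "0 \<le> t" "t \<le> T" and AEL: "AE \<omega> in M. \<forall>k. idx k \<omega> \<in> L"
  shows "(AE \<omega> in M. \<forall>x\<in>Rd d. finite (tree_nodes T t x i (\<lambda>k. tau k \<omega>) (\<lambda>k. idx k \<omega>) (\<lambda>k. S k \<omega>) (\<lambda>k. B k \<omega>)))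
    \<and> (\<integral>\<^sup>+ \<omega>. (SUP x\<in>Rd d. ennreal (\<bar>Hfun c q \<rho> \<phi> T t x i (\<lambda>k. tau k \<omega>) (\<lambda>k. idx k \<omega>) (\<lambda>k. S k \<omega>) (\<lambda>k. B k \<omega>)\<bar> powr p)) \<partial>M) < \<infinity>"
proof
  define G where "G \<omega> = (SUP n. ennreal (tree_majorant n [] t i \<omega>))" for \<omega>
  have IG: "(\<integral>\<^sup>+\<omega>. G \<omega> \<partial>M) \<le> ennreal V" unfolding G_def by (rule nn_integral_SUP_tree_majorant_le[OF V AEN H t])
  have "G \<in> borel_measurable M"
    unfolding G_def using measurable_sigma_of_M[OF measurable_tree_majorant_at] by measurable
  then have "AE \<omega> in M. G \<omega> \<noteq> \<infinity>"
    by (rule nn_integral_noteq_infinite) (use IG in \<open>auto simp: top_unique\<close>)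
  then have good: "AE \<omega> in M. \<omega> \<in> space M \<and> (\<forall>k. 0 \<le> tau k \<omega>) \<and> (\<forall>k. idx k \<omega> \<in> L) \<and> G \<omega> \<noteq> \<infinity>"
    using AE_space AE_tau_nonneg AEL by eventually_elim auto
  show "AE \<omega> in M. \<forall>x\<in>Rd d. finite (tree_nodes T t x i (\<lambda>k. tau k \<omega>) (\<lambda>k. idx k \<omega>) (\<lambda>k. S k \<omega>) (\<lambda>k. B k \<omega>))"
    using good
  proof eventually_elim
    case (elim \<omega>)
    show ?case
    proof (intro ballI notI[of "infinite _", THEN notnotD])
      fix x assume "infinite (tree_nodes T t x i (\<lambda>k. tau k \<omega>) (\<lambda>k. idx k \<omega>) (\<lambda>k. S k \<omega>) (\<lambda>k. B k \<omega>))"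
      then have "G \<omega> = \<top>" using SUP_tree_majorant_eq_top[of t x i \<omega>] unfolding G_def nodes_at_def by simp
      then show False using elim by simp
    qed
  qed
  have "(\<integral>\<^sup>+ \<omega>. (SUP x\<in>Rd d. ennreal (\<bar>Hfun c q \<rho> \<phi> T t x i (\<lambda>k. tau k \<omega>) (\<lambda>k. idx k \<omega>) (\<lambda>k. S k \<omega>) (\<lambda>k. B k \<omega>)\<bar> powr p)) \<partial>M)
      \<le> (\<integral>\<^sup>+\<omega>. G \<omega> \<partial>M)"
    using good by (intro nn_integral_mono_AE, eventually_elim)
      (use Hfun_powr_le_SUP_tree_majorant t in \<open>auto intro!: SUP_least simp: G_def\<close>)
  also have "\<dots> < \<infinity>" using IG by (simp add: le_less_trans)
  finally show "(\<integral>\<^sup>+ \<omega>. (SUP x\<in>Rd d. ennreal (\<bar>Hfun c q \<rho> \<phi> T t x i (\<lambda>k. tau k \<omega>) (\<lambda>k. idx k \<omega>) (\<lambda>k. S k \<omega>) (\<lambda>k. B k \<omega>)\<bar> powr p)) \<partial>M) < \<infinity>" .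
qed

text \<open>Choice of the constants: \<open>V = 3 + 2 A0\<close>, and \<open>\<epsilon>\<close> so small that the integrals below \<open>\<epsilon>\<close> contribute at most \<open>1\<close>.\<close>
lemma recursion_condition:
  assumes A0: "Fbar \<rho> T powr (1 - p) * boundary_moment_const d p Cphi Lc \<le> A0"
    and small: "rho_mass T \<le> ennreal \<epsilon>" "cond1_integral p T \<le> ennreal \<epsilon>" "cond2_integral p T \<le> ennreal \<epsilon>"
    and \<epsilon>: "\<epsilon> = 1 / (2 * (3 + 2 * A0) ^ Nm * (1 + (Cc/qmin) powr p + (Cc/qmin) powr p * weight_moment_const p))"
  shows "2 + 2 * boundary_const + 2 * ennreal ((3 + 2 * A0) ^ Nm) * (rho_mass T + interior_const) \<le> ennreal (3 + 2 * A0)"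
proof -
  define V where "V = 3 + 2 * A0"
  define c1 where "c1 = (Cc/qmin) powr p"
  define K where "K = weight_moment_const p"
  have A00: "0 \<le> A0"
    using A0 boundary_moment_const_nonneg[of d p Cphi Lc] Fbar_nonneg[of T] by (meson order.trans mult_nonneg_nonneg powr_ge_zero)
  have VN: "0 < V ^ Nm" using A00 unfolding V_def by simp
  have c10: "0 \<le> c1" and K0: "0 \<le> K" unfolding c1_def K_def using weight_moment_const_nonneg by auto
  have den: "0 < 2 * V ^ Nm * (1 + c1 + c1 * K)" using VN c10 K0 by (simp add: add_pos_nonneg)
  have e0: "0 < \<epsilon>" unfolding \<epsilon> using den unfolding V_def c1_def K_def by simp
  have key: "2 * V ^ Nm * (\<epsilon> + c1 * (\<epsilon> + K * \<epsilon>)) = 1"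
    using den unfolding \<epsilon> V_def[symmetric] c1_def[symmetric] K_def[symmetric] by (simp add: field_simps)
  have "boundary_const \<le> ennreal A0" unfolding boundary_const_def by (rule ennreal_leI[OF A0])
  moreover have "interior_const \<le> ennreal c1 * (ennreal \<epsilon> + ennreal K * ennreal \<epsilon>)"
    unfolding interior_const_def c1_def K_def using small by (intro mult_left_mono add_mono) auto
  ultimately have "2 + 2 * boundary_const + 2 * ennreal (V ^ Nm) * (rho_mass T + interior_const)
      \<le> 2 + 2 * ennreal A0 + 2 * ennreal (V ^ Nm) * (ennreal \<epsilon> + ennreal c1 * (ennreal \<epsilon> + ennreal K * ennreal \<epsilon>))"
    using small by (intro add_mono mult_left_mono order.refl) auto
  also have "\<dots> = ennreal (2 + 2 * A0 + 2 * V ^ Nm * (\<epsilon> + c1 * (\<epsilon> + K * \<epsilon>)))"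
    using A00 VN e0 c10 K0
    by (simp add: ennreal_plus ennreal_mult add_nonneg_nonneg mult_nonneg_nonneg del: ennreal_numeral)
      (simp add: ennreal_numeral[symmetric] ennreal_mult ennreal_plus del: ennreal_numeral)
  also have "\<dots> = ennreal V" by (subst key) (simp add: V_def)
  finally show ?thesis unfolding V_def .
qed

end

context particle_system
begin

lemma exists_horizon_small_integrals:
  assumes e: "0 < \<epsilon>" and Tmax: "0 < Tmax"
  shows "\<exists>T0>0. T0 \<le> Tmax \<and> (\<forall>T\<in>{0<..T0}. cond1 \<rho> p T \<and> cond2 \<rho> \<eta> p T \<longrightarrow>
      rho_mass T < ennreal \<epsilon> \<and> cond1_integral p T < ennreal \<epsilon> \<and> cond2_integral p T < ennreal \<epsilon>)"
proof (cases "\<exists>T1. 0 < T1 \<and> T1 \<le> Tmax \<and> cond1 \<rho> p T1 \<and> cond2 \<rho> \<eta> p T1")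
  case True
  then obtain T1 where T1: "0 < T1" "T1 \<le> Tmax" "cond1 \<rho> p T1" "cond2 \<rho> \<eta> p T1" by blast
  have [measurable]: "\<rho> \<in> borel_measurable borel" by (rule rho_meas)
  have "(\<integral>\<^sup>+s\<in>{0..T1}. ennreal (\<rho> s) \<partial>lborel) \<le> (\<integral>\<^sup>+s\<in>{0..}. ennreal (\<rho> s) \<partial>lborel)"
    by (intro nn_integral_mono) (auto simp: indicator_def)
  then have "(\<integral>\<^sup>+s\<in>{0..T1}. ennreal (\<rho> s) \<partial>lborel) < \<infinity>" using nn_integral_rho_eq_1 by (simp add: le_less_trans)
  then obtain \<delta>0 where d0: "0 < \<delta>0" "\<delta>0 \<le> T1" "rho_mass \<delta>0 < ennreal \<epsilon>"
    using nn_integral_Icc_small[of "\<lambda>s. ennreal (\<rho> s)" T1 "ennreal \<epsilon>"] T1 e unfolding rho_mass_def by auto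
  obtain \<delta>1 where d1: "0 < \<delta>1" "\<delta>1 \<le> T1" "cond1_integral p \<delta>1 < ennreal \<epsilon>"
    using nn_integral_Icc_small[of "\<lambda>s. ennreal (1 / \<rho> s powr (p - 1))" T1 "ennreal \<epsilon>"] T1 e
    unfolding cond1_iff cond1_integral_def by auto
  obtain \<delta>2 where d2: "0 < \<delta>2" "\<delta>2 \<le> T1" "cond2_integral p \<delta>2 < ennreal \<epsilon>"
    using nn_integral_Icc_small[of "cond2_integrand p" T1 "ennreal \<epsilon>"] T1 e measurable_cond2_integrand
    unfolding cond2_iff cond2_integral_def by auto
  have mono: "(\<integral>\<^sup>+s\<in>{0..T}. f s \<partial>lborel) \<le> (\<integral>\<^sup>+s\<in>{0..T'}. f s \<partial>lborel)" if "T \<le> T'" for f :: "real \<Rightarrow> ennreal" and T T'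
    using that by (intro nn_integral_mono) (auto simp: indicator_def)
  show ?thesis
  proof (intro exI[of _ "min \<delta>0 (min \<delta>1 \<delta>2)"] conjI ballI impI)
    fix T assume T: "T \<in> {0<..min \<delta>0 (min \<delta>1 \<delta>2)}"
    show "rho_mass T < ennreal \<epsilon>" using mono[of T \<delta>0 "\<lambda>s. ennreal (\<rho> s)"] d0 T unfolding rho_mass_def by (auto intro: le_less_trans)
    show "cond1_integral p T < ennreal \<epsilon>" using mono[of T \<delta>1 "\<lambda>s. ennreal (1 / \<rho> s powr (p - 1))"] d1 T unfolding cond1_integral_def by (auto intro: le_less_trans)
    show "cond2_integral p T < ennreal \<epsilon>" using mono[of T \<delta>2 "cond2_integrand p"] d2 T unfolding cond2_integral_def by (auto intro: le_less_trans)
  qed (use d0 d1 d2 T1 in auto)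
qed (use Tmax in auto)

lemma Hfun_moment_finite_small_horizon:
  assumes Tmax: "0 < Tmax" and p: "1 \<le> p" and Cc: "0 \<le> Cc" and qmin: "0 < qmin" and Cphi: "0 \<le> Cphi" and Lc: "0 \<le> Lc"
    and c_bound: "\<forall>l\<in>L. \<forall>s\<in>{0..Tmax}. \<forall>y\<in>Rd d. \<bar>c l s y\<bar> \<le> Cc"
    and q_lower: "\<forall>l\<in>L. qmin \<le> q l"
    and phi_bound: "\<forall>y\<in>Rd d. \<bar>\<phi> y\<bar> \<le> Cphi"
    and phi_lipschitz: "\<forall>y\<in>Rd d. \<forall>z\<in>Rd d. \<bar>\<phi> y - \<phi> z\<bar> \<le> Lc * eucl_norm d (\<lambda>j. y j - z j)"
    and AEL: "AE \<omega> in M. \<forall>k. idx k \<omega> \<in> L" and AEN: "AE \<omega> in M. \<forall>k. sum_list (idx k \<omega>) \<le> Nm"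
  shows "\<exists>T0>0. T0 \<le> Tmax \<and> (\<forall>T\<in>{0<..T0}. cond1 \<rho> p T \<and> cond2 \<rho> \<eta> p T \<longrightarrow> (\<forall>t\<in>{0..T}. \<forall>i.
    (AE \<omega> in M. \<forall>x\<in>Rd d. finite (tree_nodes T t x i (\<lambda>k. tau k \<omega>) (\<lambda>k. idx k \<omega>) (\<lambda>k. S k \<omega>) (\<lambda>k. B k \<omega>)))
    \<and> (\<integral>\<^sup>+ \<omega>. (SUP x\<in>Rd d. ennreal (\<bar>Hfun c q \<rho> \<phi> T t x i (\<lambda>k. tau k \<omega>) (\<lambda>k. idx k \<omega>) (\<lambda>k. S k \<omega>) (\<lambda>k. B k \<omega>)\<bar> powr p)) \<partial>M) < \<infinity>))"
proof -
  define A0 where "A0 = Fbar \<rho> Tmax powr (1 - p) * boundary_moment_const d p Cphi Lc"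
  define \<epsilon> where "\<epsilon> = 1 / (2 * (3 + 2 * A0) ^ Nm * (1 + (Cc/qmin) powr p + (Cc/qmin) powr p * weight_moment_const p))"
  have A00: "0 \<le> A0" unfolding A0_def using boundary_moment_const_nonneg Fbar_nonneg by simp
  have "0 < \<epsilon>" unfolding \<epsilon>_def using A00 weight_moment_const_nonneg[of p] by (simp add: add_pos_nonneg)
  then obtain T0 where T0: "0 < T0" "T0 \<le> Tmax" and small: "\<And>T. T \<in> {0<..T0} \<Longrightarrow> cond1 \<rho> p T \<and> cond2 \<rho> \<eta> p T \<Longrightarrow>
      rho_mass T < ennreal \<epsilon> \<and> cond1_integral p T < ennreal \<epsilon> \<and> cond2_integral p T < ennreal \<epsilon>"
    using exists_horizon_small_integrals[OF _ Tmax] by blast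
  show ?thesis
  proof (intro exI[of _ T0] conjI[OF T0(1)] conjI[OF T0(2)] ballI impI allI)
    fix T t i assume T_in: "T \<in> {0<..T0}" and conds: "cond1 \<rho> p T \<and> cond2 \<rho> \<eta> p T" and t: "t \<in> {0..T}"
    interpret majorant_setup M d tau idx S B \<eta> \<rho> T p Cc qmin Cphi Lc L c q \<phi>
      by unfold_locales (use T_in T0 p Cc qmin Cphi Lc c_bound q_lower phi_bound phi_lipschitz in auto)
    have "0 < T" "T \<le> Tmax" using T_in T0 by auto
    then have "Fbar \<rho> T powr (1 - p) \<le> Fbar \<rho> Tmax powr (1 - p)"
      using p by (intro powr_mono2' Fbar_pos Fbar_anti) auto
    then have "Fbar \<rho> T powr (1 - p) * boundary_moment_const d p Cphi Lc \<le> A0"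
      unfolding A0_def using boundary_moment_const_nonneg by (rule mult_right_mono)
    then have H: "2 + 2 * boundary_const + 2 * ennreal ((3 + 2 * A0) ^ Nm) * (rho_mass T + interior_const) \<le> ennreal (3 + 2 * A0)"
      by (rule recursion_condition) (use small[OF T_in conds] \<epsilon>_def in auto)
    show "(AE \<omega> in M. \<forall>x\<in>Rd d. finite (tree_nodes T t x i (\<lambda>k. tau k \<omega>) (\<lambda>k. idx k \<omega>) (\<lambda>k. S k \<omega>) (\<lambda>k. B k \<omega>)))
      \<and> (\<integral>\<^sup>+ \<omega>. (SUP x\<in>Rd d. ennreal (\<bar>Hfun c q \<rho> \<phi> T t x i (\<lambda>k. tau k \<omega>) (\<lambda>k. idx k \<omega>) (\<lambda>k. S k \<omega>) (\<lambda>k. B k \<omega>)\<bar> powr p)) \<partial>M) < \<infinity>"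
      by (rule finite_tree_and_integrable_Hfun[OF _ AEN H _ _ AEL]) (use A00 t in auto)
  qed
qed

end

theorem theorem4p1:
  fixes M :: "'w measure"
    and d m :: nat and Tmax :: real
    and \<eta> \<rho> :: "real \<Rightarrow> real"
    and L :: "nat list set" and q :: "nat list \<Rightarrow> real"
    and c :: "nat list \<Rightarrow> real \<Rightarrow> (nat \<Rightarrow> real) \<Rightarrow> real"
    and \<phi> :: "(nat \<Rightarrow> real) \<Rightarrow> real"
    and tau :: "nat list \<Rightarrow> 'w \<Rightarrow> real" and idx :: "nat list \<Rightarrow> 'w \<Rightarrow> nat list"
    and S :: "nat list \<Rightarrow> 'w \<Rightarrow> real \<Rightarrow> real" and B :: "nat list \<Rightarrow> 'w \<Rightarrow> real \<Rightarrow> nat \<Rightarrow> real"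
    and p :: real and m0 :: nat
  assumes d: "1 \<le> d" and Tmax: "0 < Tmax" and md: "m \<le> d"
    and bern: "bernstein \<eta>" and eta0: "(\<eta> \<longlongrightarrow> 0) (at_right 0)"
    and rho_meas: "\<rho> \<in> borel_measurable borel" and rho_pos: "\<forall>s\<ge>0. 0 < \<rho> s"
    and L_fin: "finite L" and L_len: "\<forall>l\<in>L. length l = Suc m"
    and q_pos: "\<forall>l\<in>L. 0 < q l" and q_sum: "(\<Sum>l\<in>L. q l) = 1"
    and c_meas: "\<forall>l\<in>L. (\<lambda>(s, x). indicator {0..Tmax} s * c l s (\<lambda>j. if j < d then x j else 0))
                    \<in> borel_measurable (borel \<Otimes>\<^sub>M (\<Pi>\<^sub>M j\<in>UNIV. (borel :: real measure)))"
    and c_bdd: "\<forall>l\<in>L. \<exists>C. \<forall>s\<in>{0..Tmax}. \<forall>x\<in>Rd d. \<bar>c l s x\<bar> \<le> C"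
    and phi_bdd: "\<exists>C. \<forall>x\<in>Rd d. \<bar>\<phi> x\<bar> \<le> C"
    and phi_lip: "\<exists>Lc. \<forall>x\<in>Rd d. \<forall>y\<in>Rd d. \<bar>\<phi> x - \<phi> y\<bar> \<le> Lc * eucl_norm d (\<lambda>j. x j - y j)"
    and M: "prob_space M"
    and tau_distr: "\<forall>k. distributed M lborel (tau k) (\<lambda>s. if 0 \<le> s then ennreal (\<rho> s) else 0)"
    and idx_meas: "\<forall>k. idx k \<in> measurable M (count_space UNIV)"
    and idx_distr: "\<forall>k. \<forall>l\<in>L. measure M {\<omega>\<in>space M. idx k \<omega> = l} = q l"
    and S_sub: "\<forall>k. subordinator M \<eta> (S k)"
    and B_BM: "\<forall>k. std_BM M d (B k)"
    and indep: "prob_space.indep_sets M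
        (\<lambda>(k, n::nat). if n = 0 then sets (vimage_algebra (space M) (tau k) borel)
                 else if n = 1 then sets (vimage_algebra (space M) (idx k) (count_space UNIV))
                 else if n = 2 then sets (vimage_algebra (space M) (S k) (\<Pi>\<^sub>M u\<in>UNIV. (borel :: real measure)))
                 else sets (vimage_algebra (space M) (B k) (\<Pi>\<^sub>M u\<in>UNIV. \<Pi>\<^sub>M j\<in>UNIV. (borel :: real measure))))
        (UNIV \<times> {..<(4::nat)})"
    and p: "1 \<le> p" and m0: "m \<le> m0" "m0 \<le> d"
  shows "(\<exists>T0>0. T0 \<le> Tmax \<and>
           (\<forall>T\<in>{0<..T0}. cond1 \<rho> p T \<and> cond2 \<rho> \<eta> p T \<longrightarrow>
              (\<forall>t\<in>{0..T}. \<forall>i\<in>{0..m0}.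
                 (AE \<omega> in M. \<forall>x\<in>Rd d. finite (tree_nodes T t x i (\<lambda>k. tau k \<omega>) (\<lambda>k. idx k \<omega>) (\<lambda>k. S k \<omega>) (\<lambda>k. B k \<omega>)))
               \<and> (\<integral>\<^sup>+ \<omega>. (SUP x\<in>Rd d. ennreal (\<bar>Hfun c q \<rho> \<phi> T t x i (\<lambda>k. tau k \<omega>) (\<lambda>k. idx k \<omega>)
                                              (\<lambda>k. S k \<omega>) (\<lambda>k. B k \<omega>)\<bar> powr p)) \<partial>M) < \<infinity>)))
       \<and> (\<forall>T>0. (\<exists>lam0>0. (\<integral>\<^sup>+ lam\<in>{lam0..}. 1 / ennreal (\<eta> lam * sqrt lam) \<partial>lborel) < \<infinity>)
                 \<longrightarrow> cond1 \<rho> 1 T \<and> cond2 \<rho> \<eta> 1 T)"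
proof -
  interpret prob_space M by (rule M)
  have eta_meas: "(\<lambda>l. if 0 < l then \<eta> l else 0) \<in> borel_measurable borel"
    by (rule bernstein_measurable_restrict[OF bern])
  have "indep_sets (component_sets M tau idx S B) (UNIV \<times> {..<4})"
    unfolding component_sets_def by (rule indep)
  then interpret particle_system M d tau idx S B \<eta> \<rho>
    by unfold_locales (use S_sub B_BM tau_distr rho_meas rho_pos eta_meas in auto)
  obtain Cc where Cc: "0 \<le> Cc" "\<forall>l\<in>L. \<forall>s\<in>{0..Tmax}. \<forall>x\<in>Rd d. \<bar>c l s x\<bar> \<le> Cc"
    using finite_family_uniform_bound[OF L_fin c_bdd] by blast
  have "L \<noteq> {}" using q_sum by auto
  then obtain qmin where qmin: "0 < qmin" "\<forall>l\<in>L. qmin \<le> q l"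
    using finite_family_pos_lower_bound[OF L_fin _ q_pos] by blast
  obtain Cphi Lc where Cphi: "0 \<le> Cphi" "\<forall>x\<in>Rd d. \<bar>\<phi> x\<bar> \<le> Cphi"
    and Lc: "0 \<le> Lc" "\<forall>x\<in>Rd d. \<forall>y\<in>Rd d. \<bar>\<phi> x - \<phi> y\<bar> \<le> Lc * eucl_norm d (\<lambda>j. x j - y j)"
    using nonneg_bound_and_lipschitz_constants[OF phi_bdd phi_lip] by blast
  have AEL: "AE \<omega> in M. \<forall>k. idx k \<omega> \<in> L" by (rule AE_idx_in[OF L_fin q_sum idx_distr])
  then have AEN: "AE \<omega> in M. \<forall>k. sum_list (idx k \<omega>) \<le> Max (insert 0 (sum_list ` L))"
    by eventually_elim (auto simp: L_fin)
  obtain T0 where T0: "0 < T0" "T0 \<le> Tmax" and bound: "\<forall>T\<in>{0<..T0}. cond1 \<rho> p T \<and> cond2 \<rho> \<eta> p T \<longrightarrow> (\<forall>t\<in>{0..T}. \<forall>i.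
    (AE \<omega> in M. \<forall>x\<in>Rd d. finite (tree_nodes T t x i (\<lambda>k. tau k \<omega>) (\<lambda>k. idx k \<omega>) (\<lambda>k. S k \<omega>) (\<lambda>k. B k \<omega>)))
    \<and> (\<integral>\<^sup>+ \<omega>. (SUP x\<in>Rd d. ennreal (\<bar>Hfun c q \<rho> \<phi> T t x i (\<lambda>k. tau k \<omega>) (\<lambda>k. idx k \<omega>) (\<lambda>k. S k \<omega>) (\<lambda>k. B k \<omega>)\<bar> powr p)) \<partial>M) < \<infinity>)"
    using Hfun_moment_finite_small_horizon[OF Tmax p Cc(1) qmin(1) Cphi(1) Lc(1) Cc(2) qmin(2) Cphi(2) Lc(2) AEL AEN] by blast
  have p1: "\<forall>T>0. (\<exists>lam0>0. (\<integral>\<^sup>+ lam\<in>{lam0..}. 1 / ennreal (\<eta> lam * sqrt lam) \<partial>lborel) < \<infinity>)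
      \<longrightarrow> cond1 \<rho> 1 T \<and> cond2 \<rho> \<eta> 1 T"
    using cond1_p1 cond2_p1[OF bernstein_nonneg[OF bern] eta_meas rho_pos] by (auto intro: less_imp_le)
  show ?thesis
    by (intro conjI exI[of _ T0] ballI impI T0 p1) (use bound in blast)+
qed

end
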